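(* Let $\Gamma$ be a tropical curve, $\Gamma_\infty$ its set of points at infinity, and $f_1,\ldots,f_n\in\operatorname{Rat}(\Gamma)\setminus\{-\infty\}$. Let $\psi:\overline{\boldsymbol{T}(X_1,\ldots,X_n)}\to\operatorname{Rat}(\Gamma)$ be the $\boldsymbol{T}$-algebra homomorphism induced by $X_i\mapsto f_i$, let $\theta:\Gamma\setminus\Gamma_\infty\to\mathbb{R}^n$, $x\mapsto(f_1(x),\ldots,f_n(x))$, and let $V:=\boldsymbol{V}(\operatorname{Ker}(\psi))$. Then: (1) for every $f\in\overline{\boldsymbol{T}(X_1,\ldots,X_n)}$ and $x\in\Gamma\setminus\Gamma_\infty$, $\psi(f)(x)=f(\theta(x))$; (2) $\operatorname{Im}(\theta)\subset V$; (3) $\theta$ is continuous; (4) $\operatorname{Ker}(\psi)=\boldsymbol{E}(V)$; (5) if $\psi$ is surjective, i.e. $\operatorname{Rat}(\Gamma)=\boldsymbol{T}(f_1,\ldots,f_n)$, then $\operatorname{Im}(\theta)\supset V$ and $\theta$ is an injective local isometry for the lattice length.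
   Context: $\boldsymbol{T}=\mathbb{R}\cup\{-\infty\}$ with $a\oplus b=\max\{a,b\}$, $a\odot b=a+b$. Semirings are commutative with $0,1$; a semifield is a semiring with $0\ne1$ whose nonzero elements are invertible. A $\boldsymbol{T}$-algebra is a semiring with a semiring homomorphism from $\boldsymbol{T}$; $\boldsymbol{T}$-algebra homomorphisms are compatible semiring homomorphisms. $\overline{\boldsymbol{T}[X_1,\ldots,X_n]}$ is the tropical polynomial semiring modulo identifying polynomials defining the same function $\boldsymbol{T}^n\to\boldsymbol{T}$; it is cancellative and $\overline{\boldsymbol{T}(X_1,\ldots,X_n)}$ is its semifield of fractions ($X_i$ denoting the image of the variable). Each element defines a function $\mathbb{R}^n\to\boldsymbol{T}$ (quotients evaluated as differences); non-$(-\infty)$ elements are real valued on $\mathbb{R}^n$. A congruence on a semiring $S$ is an equivalence relation on $S$ compatible with addition and multiplication; $\operatorname{Ker}(\psi)=\{(f,g)\mid\psi(f)=\psi(g)\}$. For a congruence $E$ on $\overline{\boldsymbol{T}(X_1,\ldots,X_n)}$, $\boldsymbol{V}(E)=\{x\in\mathbb{R}^n\mid f(x)=g(x)\ \forall(f,g)\in E\}$; for $V\subset\mathbb{R}^n$, $\boldsymbol{E}(V)=\{(f,g)\mid f(x)=g(x)\ \forall x\in V\}$. A tropical curve is the metric space obtained from a finite connected multigraph $G$ with edge lengths $l:E(G)\to\mathbb{R}_{>0}\cup\{\infty\}$ ($\infty$ allowed only on leaf edges) by identifying each edge $e$ with $[0,l(e)]$; for $l(e)=\infty$ the leaf end is identified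 with $\infty\in[0,\infty]$ and is a point at infinity (at infinite distance from everything). A rational function on $\Gamma$ is either the constant $-\infty$ or a continuous piecewise affine function $\Gamma\to\mathbb{R}\cup\{\pm\infty\}$ with integer slopes and finitely many pieces, taking values $\pm\infty$ only at points at infinity. $\operatorname{Rat}(\Gamma)$ is the set of rational functions with pointwise $\max$ and $+$ (extended continuously to points at infinity); it is a semifield and a $\boldsymbol{T}$-algebra via constants. $\operatorname{Rat}(\Gamma)=\boldsymbol{T}(f_1,\ldots,f_n)$ means $f_1,\ldots,f_n$ generate $\operatorname{Rat}(\Gamma)$ as a semifield over $\boldsymbol{T}$. The homomorphism $\psi$ is the one with $\psi(X_i)=f_i$ and $\psi(t)=t$ for $t\in\boldsymbol{T}$. A vector in $\mathbb{R}^n$ is primitive if its entries are integers with gcd one; for primitive $v$ and $\lambda\ge0$, the lattice length of $\lambda v$ is $\lambda$; $\operatorname{Im}(\theta)$ (a union of segments with integer direction vectors) is given the metric induced by lattice length. *)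

theory Defs
  imports "HOL-Analysis.Analysis" "HOL-Library.Extended_Real"
begin

text \<open>A tropical curve is given by a finite connected multigraph (vertex set, edge set,
  endpoint maps) with edge lengths in (0, infinity]. Convention: an edge of infinite length
  is a leaf edge whose target vertex has degree one and is not equal to its source;
  that target vertex is the point at infinity of the edge.\<close>

record ('v, 'e) tcurve =
  verts :: "'v set"
  edges :: "'e set"
  src   :: "'e \<Rightarrow> 'v"
  tgt   :: "'e \<Rightarrow> 'v"
  len   :: "'e \<Rightarrow> ereal"

definition degree :: "('v, 'e) tcurve \<Rightarrow> 'v \<Rightarrow> nat" where
  "degree G v = card {e \<in> edges G. src G e = v} + card {e \<in> edges G. tgt G e = v}"

definition adj :: "('v, 'e) tcurve \<Rightarrow> ('v \<times> 'v) set" where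
  "adj G = {(src G e, tgt G e) | e. e \<in> edges G} \<union> {(tgt G e, src G e) | e. e \<in> edges G}"

definition tropical_curve :: "('v, 'e) tcurve \<Rightarrow> bool" where
  "tropical_curve G \<longleftrightarrow>
     finite (verts G) \<and> finite (edges G) \<and> verts G \<noteq> {} \<and>
     (\<forall>e \<in> edges G. src G e \<in> verts G \<and> tgt G e \<in> verts G \<and> len G e > 0) \<and>
     (\<forall>e \<in> edges G. len G e = \<infinity> \<longrightarrow> src G e \<noteq> tgt G e \<and> degree G (tgt G e) = 1) \<and>
     (\<forall>u \<in> verts G. \<forall>v \<in> verts G. (u, v) \<in> (adj G)\<^sup>*)"

text \<open>Points of the curve: vertices, and interior points of edges (parameter t with
  0 < t < length, measured from the source).\<close>

datatype ('v, 'e) tpt = Vtx 'v | Ein 'e real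

definition pt :: "('v, 'e) tcurve \<Rightarrow> 'e \<Rightarrow> real \<Rightarrow> ('v, 'e) tpt" where
  "pt G e t = (if t = 0 then Vtx (src G e) else if ereal t = len G e then Vtx (tgt G e) else Ein e t)"

definition inf_verts :: "('v, 'e) tcurve \<Rightarrow> 'v set" where
  "inf_verts G = {tgt G e | e. e \<in> edges G \<and> len G e = \<infinity>}"

definition pts_inf :: "('v, 'e) tcurve \<Rightarrow> ('v, 'e) tpt set" where
  "pts_inf G = Vtx ` inf_verts G"

definition pts_fin :: "('v, 'e) tcurve \<Rightarrow> ('v, 'e) tpt set" where
  "pts_fin G = Vtx ` (verts G - inf_verts G) \<union>
               {Ein e t | e t. e \<in> edges G \<and> 0 < t \<and> ereal t < len G e}"

fun gchain :: "('v, 'e) tcurve \<Rightarrow> ('v, 'e) tpt \<Rightarrow> ('e \<times> real \<times> real) list \<Rightarrow> ('v, 'e) tpt \<Rightarrow> bool" where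
  "gchain G x [] y = (x = y)"
| "gchain G x ((e, s, s') # cs) y =
     (e \<in> edges G \<and> 0 \<le> s \<and> 0 \<le> s' \<and> ereal s \<le> len G e \<and> ereal s' \<le> len G e \<and>
      pt G e s = x \<and> gchain G (pt G e s') cs y)"

definition gdist :: "('v, 'e) tcurve \<Rightarrow> ('v, 'e) tpt \<Rightarrow> ('v, 'e) tpt \<Rightarrow> real" where
  "gdist G x y = Inf {sum_list (map (\<lambda>(e, s, s'). \<bar>s - s'\<bar>) cs) | cs. gchain G x cs y}"

definition pw_affine_int :: "(real \<Rightarrow> real) \<Rightarrow> ereal \<Rightarrow> bool" where
  "pw_affine_int h L \<longleftrightarrow>
     (\<exists>(k::nat) (a::nat \<Rightarrow> real) (m::nat \<Rightarrow> int) (c::nat \<Rightarrow> real).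
        a 0 = 0 \<and> (\<forall>i<k. a i < a (Suc i)) \<and>
        (L \<noteq> \<infinity> \<longrightarrow> ereal (a k) = L) \<and>
        (L = \<infinity> \<longrightarrow> (\<forall>t \<ge> a k. h t = c k + of_int (m k) * t)) \<and>
        (\<forall>i<k. \<forall>t \<in> {a i .. a (Suc i)}. h t = c i + of_int (m i) * t))"

text \<open>Non-(-infinity) rational functions, represented by their (real) values on the finite
  part of the curve (the values at points at infinity are the continuous extensions).\<close>

definition rat_real_fun :: "('v, 'e) tcurve \<Rightarrow> (('v, 'e) tpt \<Rightarrow> real) \<Rightarrow> bool" where
  "rat_real_fun G g \<longleftrightarrow> (\<forall>e \<in> edges G. pw_affine_int (\<lambda>t. g (pt G e t)) (len G e))"

definition RatG :: "('v, 'e) tcurve \<Rightarrow> (('v, 'e) tpt \<Rightarrow> ereal) set" where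
  "RatG G = {h. (\<forall>x \<in> pts_fin G. h x = -\<infinity>) \<or>
                (\<exists>g. rat_real_fun G g \<and> (\<forall>x \<in> pts_fin G. h x = ereal (g x)))}"

text \<open>Tropical polynomials with real coefficients and exponents in N^n, as functions on R^n
  (the empty polynomial is -infinity).\<close>

definition TPoly :: "(real^'n \<Rightarrow> ereal) set" where
  "TPoly = {(\<lambda>x. Sup ((\<lambda>(a, c). ereal (c + (\<Sum>i\<in>UNIV. real (a i) * x $ i))) ` S)) | S :: (('n \<Rightarrow> nat) \<times> real) set. finite S}"

text \<open>The semifield of fractions, realized as functions R^n to T.\<close>

definition TRat :: "(real^'n::finite \<Rightarrow> ereal) set" where
  "TRat = {(\<lambda>x. p x - q x) | p q. p \<in> TPoly \<and> q \<in> TPoly \<and> q \<noteq> (\<lambda>_. -\<infinity>)}"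

definition Vcong :: "((real^'n::finite \<Rightarrow> ereal) \<times> (real^'n \<Rightarrow> ereal)) set \<Rightarrow> (real^'n) set" where
  "Vcong E = {x. \<forall>(f, g) \<in> E. f x = g x}"

definition Econg :: "(real^'n::finite) set \<Rightarrow> ((real^'n \<Rightarrow> ereal) \<times> (real^'n \<Rightarrow> ereal)) set" where
  "Econg V = {(f, g). f \<in> TRat \<and> g \<in> TRat \<and> (\<forall>x \<in> V. f x = g x)}"

definition induced_hom ::
  "('v, 'e) tcurve \<Rightarrow> ('n::finite \<Rightarrow> ('v, 'e) tpt \<Rightarrow> real) \<Rightarrow>
   ((real^'n \<Rightarrow> ereal) \<Rightarrow> ('v, 'e) tpt \<Rightarrow> ereal) \<Rightarrow> bool" where
  "induced_hom G fs psi \<longleftrightarrow>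
     (\<forall>f \<in> TRat. psi f \<in> RatG G) \<and>
     (\<forall>f \<in> TRat. \<forall>g \<in> TRat. \<forall>x \<in> pts_fin G. psi (\<lambda>y. max (f y) (g y)) x = max (psi f x) (psi g x)) \<and>
     (\<forall>f \<in> TRat. \<forall>g \<in> TRat. \<forall>x \<in> pts_fin G. psi (\<lambda>y. f y + g y) x = psi f x + psi g x) \<and>
     (\<forall>t::ereal. t \<noteq> \<infinity> \<longrightarrow> (\<forall>x \<in> pts_fin G. psi (\<lambda>_. t) x = t)) \<and>
     (\<forall>i. \<forall>x \<in> pts_fin G. psi (\<lambda>y. ereal (y $ i)) x = ereal (fs i x))"

definition kerpsi ::
  "('v, 'e) tcurve \<Rightarrow> ((real^'n::finite \<Rightarrow> ereal) \<Rightarrow> ('v, 'e) tpt \<Rightarrow> ereal) \<Rightarrow>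
   ((real^'n \<Rightarrow> ereal) \<times> (real^'n \<Rightarrow> ereal)) set" where
  "kerpsi G psi = {(f, g). f \<in> TRat \<and> g \<in> TRat \<and> (\<forall>x \<in> pts_fin G. psi f x = psi g x)}"

definition hom_surj ::
  "('v, 'e) tcurve \<Rightarrow> ((real^'n::finite \<Rightarrow> ereal) \<Rightarrow> ('v, 'e) tpt \<Rightarrow> ereal) \<Rightarrow> bool" where
  "hom_surj G psi \<longleftrightarrow> (\<forall>h \<in> RatG G. \<exists>f \<in> TRat. \<forall>x \<in> pts_fin G. psi f x = h x)"

definition primitive :: "real^'n::finite \<Rightarrow> bool" where
  "primitive v \<longleftrightarrow> (\<exists>z :: 'n \<Rightarrow> int. v = (\<chi> i. real_of_int (z i)) \<and> Gcd (range z) = 1)"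

text \<open>lat_dir w lam: w = lam * v with v primitive and lam \<ge> 0, i.e. w has lattice length lam.\<close>

definition lat_dir :: "real^'n::finite \<Rightarrow> real \<Rightarrow> bool" where
  "lat_dir w lam \<longleftrightarrow> lam \<ge> 0 \<and> (\<exists>v. primitive v \<and> w = lam *\<^sub>R v)"

fun ichain :: "(real^'n::finite) set \<Rightarrow> real^'n \<Rightarrow> ((real^'n) \<times> real) list \<Rightarrow> real^'n \<Rightarrow> bool" where
  "ichain S p [] q = (p = q)"
| "ichain S p ((r, lam) # cs) q = (closed_segment p r \<subseteq> S \<and> lat_dir (r - p) lam \<and> ichain S r cs q)"

definition latdist :: "(real^'n::finite) set \<Rightarrow> real^'n \<Rightarrow> real^'n \<Rightarrow> real" where
  "latdist S p q = Inf {sum_list (map snd cs) | cs. ichain S p cs q}"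

end

theory Submission
  imports Defs
begin

text \<open>
  Since \<open>psi\<close> is a homomorphism sending \<open>X\<^sub>i\<close> to \<open>f\<^sub>i\<close>, it is evaluation along \<open>theta\<close> on
  monomials, hence on tropical polynomials and on their quotients; the inclusion of the image in
  \<open>V\<close> and the description of the kernel follow formally, and \<open>theta\<close> is continuous because
  every \<open>f\<^sub>i\<close> is Lipschitz along the edges.

  On every common linearity interval of the \<open>f\<^sub>i\<close> on an edge, \<open>theta\<close> is affine with integral
  direction, so the image of \<open>theta\<close> is a finite union of lattice segments. A point off the image
  is separated from each segment by an integral affine function \<open>l\<close>, and \<open>max 0 (min l)\<close> is a
  tropical rational function vanishing on the image but not at the point; hence \<open>V\<close> is the image.

  If \<open>psi\<close> is surjective, every rational function on the curve factors through \<open>theta\<close>. For the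
  cone \<open>\<rho> - dist x\<close> this gives injectivity; for a function of slope \<open>1\<close> along an edge it shows
  that the directions of \<open>theta\<close> along edges are unimodular, hence primitive; and the signed
  distance along the branches at \<open>x\<close>, being \<open>1\<close>-Lipschitz for lattice length on the image, bounds
  the lattice distance near \<open>theta x\<close> from below by the distance on the curve, while the branch
  segments themselves give the upper bound.
\<close>

section \<open>Tropical polynomials as functions\<close>

definition tpoly :: "(('n::finite \<Rightarrow> nat) \<times> real) set \<Rightarrow> real^'n \<Rightarrow> ereal" where
  "tpoly S = (\<lambda>x. Sup ((\<lambda>(a, c). ereal (c + (\<Sum>i\<in>UNIV. real (a i) * x $ i))) ` S))"

lemma TPoly_eq_tpoly: "TPoly = {tpoly S | S. finite S}"
  unfolding TPoly_def tpoly_def by blast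

lemma tpoly_in_TPoly: "finite S \<Longrightarrow> tpoly S \<in> TPoly"
  unfolding TPoly_eq_tpoly by blast

lemma tpoly_empty: "tpoly {} = (\<lambda>_. -\<infinity>)"
  unfolding tpoly_def by (simp add: bot_ereal_def)

lemma tpoly_insert:
  "tpoly (insert s S) x = max (ereal (snd s + (\<Sum>i\<in>UNIV. real (fst s i) * x $ i))) (tpoly S x)"
  unfolding tpoly_def by (cases s) (simp add: sup_max)

lemma tpoly_single: "tpoly {(a, c)} x = ereal (c + (\<Sum>i\<in>UNIV. real (a i) * x $ i))"
  using tpoly_insert[of "(a, c)" "{}" x] by (simp add: tpoly_empty)

lemma tpoly_zero: "tpoly {(\<lambda>_. 0, 0)} = (\<lambda>_. ereal 0)"
  by (rule ext) (simp add: tpoly_single)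

lemma tpoly_ge:
  assumes "finite S" "(a, c) \<in> S"
  shows "ereal (c + (\<Sum>i\<in>UNIV. real (a i) * x $ i)) \<le> tpoly S x"
  unfolding tpoly_def using assms by (auto intro!: Sup_upper)

lemma tpoly_attained:
  assumes "finite S" "S \<noteq> {}"
  shows "\<exists>(a, c)\<in>S. tpoly S x = ereal (c + (\<Sum>i\<in>UNIV. real (a i) * x $ i))"
  using assms
proof (induction S rule: finite_ne_induct)
  case (singleton s)
  then show ?case by (cases s) (simp add: tpoly_single)
next
  case (insert s S)
  then obtain a c where ac: "(a, c) \<in> S" "tpoly S x = ereal (c + (\<Sum>i\<in>UNIV. real (a i) * x $ i))"
    by blast
  show ?case
  proof (cases "ereal (snd s + (\<Sum>i\<in>UNIV. real (fst s i) * x $ i)) \<ge> tpoly S x")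
    case True
    then show ?thesis by (cases s) (auto simp: tpoly_insert max_def)
  next
    case False
    then show ?thesis using ac by (auto simp: tpoly_insert max_def)
  qed
qed

lemma tpoly_real:
  assumes "finite S" "S \<noteq> {}"
  shows "\<exists>r. tpoly S x = ereal r"
  using tpoly_attained[OF assms] by blast

lemma TPoly_real:
  assumes "q \<in> TPoly" "q \<noteq> (\<lambda>_. -\<infinity>)"
  shows "\<exists>r. q x = ereal r"
  using assms tpoly_real tpoly_empty unfolding TPoly_eq_tpoly by blast

lemma TPoly_TRat: assumes "p \<in> TPoly" shows "p \<in> TRat"
proof -
  have "p = (\<lambda>x. p x - tpoly {(\<lambda>_. 0, 0)} x)" by (simp add: tpoly_zero)
  moreover have "tpoly {(\<lambda>_. 0, 0)} \<in> TPoly" by (rule tpoly_in_TPoly) simp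
  moreover have "tpoly {(\<lambda>_. 0::nat, 0::real)} \<noteq> (\<lambda>_. -\<infinity>)" by (simp add: tpoly_zero fun_eq_iff)
  ultimately show ?thesis unfolding TRat_def using assms by blast
qed

lemma tpoly_TRat: "finite S \<Longrightarrow> tpoly S \<in> TRat"
  using TPoly_TRat tpoly_in_TPoly by blast

lemma monomial_TRat: "(\<lambda>x. ereal (c + (\<Sum>i\<in>UNIV. real (a i) * x $ i))) \<in> TRat"
proof -
  have "(\<lambda>x. ereal (c + (\<Sum>i\<in>UNIV. real (a i) * x $ i))) = tpoly {(a, c)}"
    by (rule ext) (simp add: tpoly_single)
  then show ?thesis using tpoly_TRat[of "{(a, c)}"] by simp
qed

lemma coordinate_TRat: "(\<lambda>x::real^'n::finite. ereal (x $ j)) \<in> TRat"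
proof -
  have "(\<lambda>x::real^'n. ereal (x $ j)) =
      (\<lambda>x. ereal (0 + (\<Sum>i\<in>UNIV. real (if i = j then 1 else 0) * x $ i)))"
    by (simp add: of_bool_def[symmetric])
  then show ?thesis by (simp only: monomial_TRat)
qed

lemma monomial_decrement:
  fixes x :: "real^'n::finite"
  assumes "a j > 0"
  shows "(\<Sum>i\<in>UNIV. real (a i) * x $ i) = (\<Sum>i\<in>UNIV. real ((a(j := a j - 1)) i) * x $ i) + x $ j"
proof -
  have "(\<Sum>i\<in>UNIV. real ((a(j := a j - 1)) i) * x $ i) = (\<Sum>i\<in>UNIV. real (a i) * x $ i) - x $ j"
    using assms by (simp add: sum.remove[of UNIV j] of_nat_diff algebra_simps)
  then show ?thesis by simp
qed

section \<open>Lattice vectors and tropical functions along lines\<close>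

definition int_vec :: "('n::finite \<Rightarrow> int) \<Rightarrow> real^'n" where
  "int_vec z = (\<chi> i. real_of_int (z i))"

lemma int_vec_nth [simp]: "int_vec z $ i = real_of_int (z i)"
  unfolding int_vec_def by simp

lemma int_vec_uminus: "int_vec (\<lambda>i. - z i) = - int_vec z"
  unfolding int_vec_def by (simp add: vec_eq_iff)

lemma primitive_iff_int_vec: "primitive v \<longleftrightarrow> (\<exists>y. v = int_vec y \<and> Gcd (range y) = 1)"
  unfolding primitive_def int_vec_def by simp

lemma int_vec_nonzero_if_Gcd_1: "Gcd (range y) = (1::int) \<Longrightarrow> int_vec y \<noteq> 0"
proof
  assume "Gcd (range y) = 1" "int_vec y = 0"
  then have "range y = {0}" "Gcd (range y) = 1" by (auto simp: vec_eq_iff)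
  then show False by simp
qed

definition unimodular :: "('n::finite \<Rightarrow> int) \<Rightarrow> bool" where
  "unimodular z \<longleftrightarrow> (\<exists>w. (\<Sum>i\<in>UNIV. w i * z i) = 1)"

lemma unimodular_Gcd: "unimodular z \<Longrightarrow> Gcd (range z) = 1"
proof -
  assume "unimodular z"
  then obtain w where w: "(\<Sum>i\<in>UNIV. w i * z i) = 1" unfolding unimodular_def by blast
  have "Gcd (range z) dvd (\<Sum>i\<in>UNIV. w i * z i)"
    by (intro dvd_sum dvd_mult Gcd_dvd) auto
  then show ?thesis using w Gcd_int_greater_eq_0[of "range z"] by simp
qed

lemma unimodular_uminus: "unimodular z \<Longrightarrow> unimodular (\<lambda>i. - z i)"
  unfolding unimodular_def by (auto intro: exI[of _ "\<lambda>i. - _ i"])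

lemma unimodular_primitive: "unimodular z \<Longrightarrow> primitive (int_vec z)"
  unfolding primitive_iff_int_vec using unimodular_Gcd by blast

lemma parallel_primitive_unimodular:
  assumes y: "Gcd (range y) = 1" and z: "unimodular z"
    and eq: "a *\<^sub>R int_vec y = b *\<^sub>R int_vec z" and a: "a \<noteq> 0"
  shows "\<bar>a\<bar> = \<bar>b\<bar>"
proof -
  obtain w where w: "(\<Sum>i\<in>UNIV. w i * z i) = 1" using z unfolding unimodular_def by blast
  define k where "k = (\<Sum>i\<in>UNIV. w i * y i)"
  have coord: "a * real_of_int (y i) = b * real_of_int (z i)" for i
    using arg_cong[OF eq, of "\<lambda>x. x $ i"] by simp
  have "real_of_int k * a = (\<Sum>i\<in>UNIV. real_of_int (w i) * (a * real_of_int (y i)))"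
    unfolding k_def by (simp add: sum_distrib_left sum_distrib_right algebra_simps)
  also have "\<dots> = b * real_of_int (\<Sum>i\<in>UNIV. w i * z i)"
    unfolding coord by (simp add: sum_distrib_left algebra_simps)
  finally have b: "b = real_of_int k * a" using w by simp
  have "y i = k * z i" for i
    using coord[of i] a unfolding b by (simp add: algebra_simps flip: of_int_mult)
  then have "k dvd Gcd (range y)" by (intro Gcd_greatest) auto
  then have "\<bar>k\<bar> = 1" using y by simp
  then show ?thesis unfolding b by (simp add: abs_mult flip: of_int_abs)
qed

lemma affine_pair_ordered_subinterval:
  fixes c1 c2 m1 m2 :: real
  assumes "\<alpha> < \<beta>"
  obtains \<alpha>' \<beta>' where "\<alpha> \<le> \<alpha>'" "\<alpha>' < \<beta>'" "\<beta>' \<le> \<beta>"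
    "(\<forall>t\<in>{\<alpha>'..\<beta>'}. c2 + t * m2 \<le> c1 + t * m1) \<or> (\<forall>t\<in>{\<alpha>'..\<beta>'}. c1 + t * m1 \<le> c2 + t * m2)"
proof -
  define mid where "mid = (\<alpha> + \<beta>) / 2"
  have mid: "\<alpha> < mid" "mid < \<beta>" unfolding mid_def using assms by auto
  define d where "d t = (c1 + t * m1) - (c2 + t * m2)" for t
  have d: "d t = d mid + (t - mid) * (m1 - m2)" for t unfolding d_def by (simp add: algebra_simps)
  consider "0 \<le> d mid" "0 \<le> m1 - m2" | "0 \<le> d mid" "m1 - m2 \<le> 0"
    | "d mid \<le> 0" "0 \<le> m1 - m2" | "d mid \<le> 0" "m1 - m2 \<le> 0" by linarith
  then show ?thesis
  proof cases
    case 1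
    have "c2 + t * m2 \<le> c1 + t * m1" if "t \<in> {mid..\<beta>}" for t
    proof -
      have "0 \<le> (t - mid) * (m1 - m2)" using that 1 by (intro mult_nonneg_nonneg) auto
      then show ?thesis using d[of t] 1 unfolding d_def by linarith
    qed
    then show ?thesis using mid by (intro that[of mid \<beta>]) auto
  next
    case 2
    have "c2 + t * m2 \<le> c1 + t * m1" if "t \<in> {\<alpha>..mid}" for t
    proof -
      have "0 \<le> (t - mid) * (m1 - m2)" using that 2 by (intro mult_nonpos_nonpos) auto
      then show ?thesis using d[of t] 2 unfolding d_def by linarith
    qed
    then show ?thesis using mid by (intro that[of \<alpha> mid]) auto
  next
    case 3
    have "c1 + t * m1 \<le> c2 + t * m2" if "t \<in> {\<alpha>..mid}" for t
    proof -
      have "(t - mid) * (m1 - m2) \<le> 0" using that 3 by (intro mult_nonpos_nonneg) auto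
      then show ?thesis using d[of t] 3 unfolding d_def by linarith
    qed
    then show ?thesis using mid by (intro that[of \<alpha> mid]) auto
  next
    case 4
    have "c1 + t * m1 \<le> c2 + t * m2" if "t \<in> {mid..\<beta>}" for t
    proof -
      have "(t - mid) * (m1 - m2) \<le> 0" using that 4 by (intro mult_nonneg_nonpos) auto
      then show ?thesis using d[of t] 4 unfolding d_def by linarith
    qed
    then show ?thesis using mid by (intro that[of mid \<beta>]) auto
  qed
qed

lemma tpoly_affine_on_line_subinterval:
  fixes B D :: "real^'n::finite"
  assumes "finite S" "S \<noteq> {}" "\<alpha> < \<beta>"
  shows "\<exists>\<alpha>' \<beta>' a C. \<alpha> \<le> \<alpha>' \<and> \<alpha>' < \<beta>' \<and> \<beta>' \<le> \<beta> \<and>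
    (\<forall>t\<in>{\<alpha>'..\<beta>'}. tpoly S (B + t *\<^sub>R D) = ereal (C + t * (\<Sum>i\<in>UNIV. real (a i) * D $ i)))"
  using assms(1,2)
proof (induction S rule: finite_ne_induct)
  case (singleton s)
  obtain a c where s: "s = (a, c)" by (cases s)
  show ?case
    by (rule exI[of _ \<alpha>], rule exI[of _ \<beta>], rule exI[of _ a],
        rule exI[of _ "c + (\<Sum>i\<in>UNIV. real (a i) * B $ i)"])
      (use s assms(3) in \<open>simp add: tpoly_single algebra_simps sum.distrib sum_distrib_left\<close>)
next
  case (insert s S)
  obtain a0 c0 where s: "s = (a0, c0)" by (cases s)
  define C0 where "C0 = c0 + (\<Sum>i\<in>UNIV. real (a0 i) * B $ i)"
  define m0 where "m0 = (\<Sum>i\<in>UNIV. real (a0 i) * D $ i)"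
  have ins: "tpoly (insert s S) (B + t *\<^sub>R D) = max (ereal (C0 + t * m0)) (tpoly S (B + t *\<^sub>R D))" for t
    unfolding tpoly_insert s C0_def m0_def by (simp add: algebra_simps sum.distrib sum_distrib_left)
  obtain \<alpha>' \<beta>' a1 C1 where ab': "\<alpha> \<le> \<alpha>'" "\<alpha>' < \<beta>'" "\<beta>' \<le> \<beta>"
    and S: "\<forall>t\<in>{\<alpha>'..\<beta>'}. tpoly S (B + t *\<^sub>R D) = ereal (C1 + t * (\<Sum>i\<in>UNIV. real (a1 i) * D $ i))"
    using insert.IH by blast
  define m1 where "m1 = (\<Sum>i\<in>UNIV. real (a1 i) * D $ i)"
  obtain \<alpha>'' \<beta>'' where ab'': "\<alpha>' \<le> \<alpha>''" "\<alpha>'' < \<beta>''" "\<beta>'' \<le> \<beta>'"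
    and cmp: "(\<forall>t\<in>{\<alpha>''..\<beta>''}. C1 + t * m1 \<le> C0 + t * m0) \<or> (\<forall>t\<in>{\<alpha>''..\<beta>''}. C0 + t * m0 \<le> C1 + t * m1)"
    using affine_pair_ordered_subinterval[OF ab'(2)] by metis
  have sub: "{\<alpha>''..\<beta>''} \<subseteq> {\<alpha>'..\<beta>'}" and bounds: "\<alpha> \<le> \<alpha>''" "\<beta>'' \<le> \<beta>"
    using ab' ab'' by auto
  from cmp show ?case
  proof
    assume "\<forall>t\<in>{\<alpha>''..\<beta>''}. C1 + t * m1 \<le> C0 + t * m0"
    then have "\<forall>t\<in>{\<alpha>''..\<beta>''}. tpoly (insert s S) (B + t *\<^sub>R D) = ereal (C0 + t * m0)"
      using S sub ins unfolding m1_def by (auto simp: max_def)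
    with ab'' bounds show ?case unfolding m0_def by blast
  next
    assume "\<forall>t\<in>{\<alpha>''..\<beta>''}. C0 + t * m0 \<le> C1 + t * m1"
    then have "\<forall>t\<in>{\<alpha>''..\<beta>''}. tpoly (insert s S) (B + t *\<^sub>R D) = ereal (C1 + t * m1)"
      using S sub ins unfolding m1_def by (auto simp: max_def)
    with ab'' bounds show ?case unfolding m1_def by blast
  qed
qed

text \<open>On a small enough interval both tropical polynomials are affine, so the slope \<open>1\<close> is the
  difference of two exponent vectors, an integral linear form, evaluated at \<open>z\<close>.\<close>

lemma unimodular_if_TRat_unit_slope:
  assumes f: "f \<in> TRat" and ab: "\<alpha> < \<beta>"
    and eq: "\<And>t. \<alpha> < t \<Longrightarrow> t < \<beta> \<Longrightarrow> f (B + t *\<^sub>R int_vec z) = ereal (C0 + t)"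
  shows "unimodular z"
proof -
  obtain Sp Sq where S: "finite Sp" "finite Sq" "Sq \<noteq> {}"
    and f_eq: "f = (\<lambda>x. tpoly Sp x - tpoly Sq x)"
    using f tpoly_empty unfolding TRat_def TPoly_eq_tpoly by blast
  define \<gamma> where "\<gamma> = (\<beta> - \<alpha>) / 3"
  have \<gamma>: "\<alpha> < \<alpha> + \<gamma>" "\<alpha> + \<gamma> < \<beta> - \<gamma>" "\<beta> - \<gamma> < \<beta>" unfolding \<gamma>_def using ab by (simp_all add: field_simps)
  have "Sp \<noteq> {}"
  proof
    assume "Sp = {}"
    obtain r where "tpoly Sq (B + (\<alpha> + \<gamma>) *\<^sub>R int_vec z) = ereal r" using tpoly_real[OF S(2,3)] by blast
    then have "f (B + (\<alpha> + \<gamma>) *\<^sub>R int_vec z) = -\<infinity>"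
      unfolding f_eq using \<open>Sp = {}\<close> by (simp add: tpoly_empty)
    then show False using eq \<gamma> by simp
  qed
  obtain \<alpha>2 \<beta>2 a1 C1 where ab2: "\<alpha> + \<gamma> \<le> \<alpha>2" "\<alpha>2 < \<beta>2" "\<beta>2 \<le> \<beta> - \<gamma>"
    and p: "\<forall>t\<in>{\<alpha>2..\<beta>2}. tpoly Sp (B + t *\<^sub>R int_vec z) = ereal (C1 + t * (\<Sum>i\<in>UNIV. real (a1 i) * int_vec z $ i))"
    using tpoly_affine_on_line_subinterval[OF S(1) \<open>Sp \<noteq> {}\<close> \<gamma>(2)] by blast
  obtain \<alpha>3 \<beta>3 a2 C2 where ab3: "\<alpha>2 \<le> \<alpha>3" "\<alpha>3 < \<beta>3" "\<beta>3 \<le> \<beta>2"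
    and q: "\<forall>t\<in>{\<alpha>3..\<beta>3}. tpoly Sq (B + t *\<^sub>R int_vec z) = ereal (C2 + t * (\<Sum>i\<in>UNIV. real (a2 i) * int_vec z $ i))"
    using tpoly_affine_on_line_subinterval[OF S(2,3) ab2(2)] by blast
  define s where "s = (\<Sum>i\<in>UNIV. (int (a1 i) - int (a2 i)) * z i)"
  have lin: "(C1 - C2) + t * real_of_int s = C0 + t" if "t \<in> {\<alpha>3..\<beta>3}" for t
  proof -
    have "\<alpha> < t" "t < \<beta>" using that ab2 ab3 \<gamma> by auto
    then show ?thesis
      using eq[of t] p q that ab3 unfolding f_eq s_def
      by (simp add: algebra_simps sum_subtractf sum_distrib_left)
  qed
  have "(\<beta>3 - \<alpha>3) * real_of_int s = (\<beta>3 - \<alpha>3) * 1"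
    using lin[of \<alpha>3] lin[of \<beta>3] ab3 by (simp add: algebra_simps)
  then have "s = 1" using ab3 by simp
  then show ?thesis unfolding unimodular_def s_def by (intro exI[of _ "\<lambda>i. int (a1 i) - int (a2 i)"])
qed

section \<open>Separating a point from a lattice segment\<close>

definition lattice_segment :: "(real^'n::finite) \<times> ('n \<Rightarrow> int) \<times> real \<times> ereal \<Rightarrow> (real^'n) set" where
  "lattice_segment \<pi> = (case \<pi> of (B, z, \<alpha>, \<beta>) \<Rightarrow> {B + t *\<^sub>R int_vec z | t. \<alpha> \<le> t \<and> ereal t \<le> \<beta>})"

lemma lattice_segmentI: "\<alpha> \<le> t \<Longrightarrow> ereal t \<le> \<beta> \<Longrightarrow> B + t *\<^sub>R int_vec z \<in> lattice_segment (B, z, \<alpha>, \<beta>)"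
  unfolding lattice_segment_def by blast

lemma closed_lattice_segment: "closed (lattice_segment \<pi>)"
proof -
  obtain B z \<alpha> \<beta> where pi: "\<pi> = (B, z, \<alpha>, \<beta>)" by (cases \<pi>) auto
  define D where "D = int_vec z"
  have eq: "lattice_segment \<pi> = (\<lambda>t. B + t *\<^sub>R D) ` {t. \<alpha> \<le> t \<and> ereal t \<le> \<beta>}"
    unfolding lattice_segment_def pi D_def by auto
  show ?thesis
  proof (cases \<beta>)
    case (real b)
    then have "{t. \<alpha> \<le> t \<and> ereal t \<le> \<beta>} = {\<alpha>..b}" by auto
    then have "compact (lattice_segment \<pi>)" unfolding eq
      by (auto intro!: compact_continuous_image continuous_intros)
    then show ?thesis by (rule compact_imp_closed)
  next
    case PInf
    then have A: "{t. \<alpha> \<le> t \<and> ereal t \<le> \<beta>} = {\<alpha>..}" by auto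
    show ?thesis
    proof (cases "D = 0")
      case True
      then have "(\<lambda>t. B + t *\<^sub>R D) ` {\<alpha>..} = {B}" by auto
      then show ?thesis unfolding eq A by simp
    next
      case False
      have lin: "linear (\<lambda>t::real. t *\<^sub>R D)" by (rule bounded_linear.linear[OF bounded_linear_scaleR_left])
      have inj: "inj (\<lambda>t::real. t *\<^sub>R D)" using False by (auto intro!: injI)
      have "closed ((\<lambda>t::real. t *\<^sub>R D) ` {\<alpha>..})"
        by (rule closed_injective_linear_image[OF closed_atLeast lin inj])
      then have "closed ((+) B ` ((\<lambda>t::real. t *\<^sub>R D) ` {\<alpha>..}))" by (rule closed_translation)
      moreover have "(+) B ` ((\<lambda>t::real. t *\<^sub>R D) ` {\<alpha>..}) = lattice_segment \<pi>" unfolding eq A by auto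
      ultimately show ?thesis by simp
    qed
  next
    case MInf
    then have "lattice_segment \<pi> = {}" unfolding eq by auto
    then show ?thesis by simp
  qed
qed

definition int_dot :: "('n::finite \<Rightarrow> int) \<Rightarrow> real^'n \<Rightarrow> real" where
  "int_dot w x = (\<Sum>i\<in>UNIV. real_of_int (w i) * x $ i)"

lemma int_dot_add: "int_dot w (a + b) = int_dot w a + int_dot w b"
  unfolding int_dot_def by (simp add: algebra_simps sum.distrib)

lemma int_dot_scaleR: "int_dot w (t *\<^sub>R a) = t * int_dot w a"
  unfolding int_dot_def by (simp add: algebra_simps sum_distrib_left)

lemma int_dot_uminus: "int_dot (\<lambda>i. - w i) x = - int_dot w x"
  unfolding int_dot_def by (simp add: sum_negf)

lemma int_dot_line: "int_dot w (B + t *\<^sub>R D) = int_dot w B + t * int_dot w D"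
  by (simp add: int_dot_add int_dot_scaleR)

lemma int_dot_diff_left: "int_dot (\<lambda>i. w1 i - w2 i) x = int_dot w1 x - int_dot w2 x"
  unfolding int_dot_def by (simp add: left_diff_distrib sum_subtractf)

lemma int_dot_single: "int_dot (\<lambda>i. if i = k then a else 0) x = real_of_int a * x $ k"
proof -
  have "int_dot (\<lambda>i. if i = k then a else 0) x = (\<Sum>i\<in>UNIV. if i = k then real_of_int a * x $ i else 0)"
    unfolding int_dot_def by (rule sum.cong) auto
  then show ?thesis by simp
qed

lemma int_dot_self_pos:
  assumes "z k \<noteq> 0"
  shows "int_dot z (int_vec z) > 0"
proof -
  have "real_of_int (z k) * real_of_int (z k) \<le> int_dot z (int_vec z)"
    unfolding int_dot_def int_vec_nth by (rule member_le_sum) auto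
  moreover have "real_of_int (z k) * real_of_int (z k) > 0"
    using assms by (smt (verit) of_int_eq_0_iff zero_less_mult_iff)
  ultimately show ?thesis by linarith
qed

lemma int_orthogonal_or_parallel:
  "(\<exists>s. u = s *\<^sub>R int_vec z) \<or> (\<exists>w. int_dot w (int_vec z) = 0 \<and> int_dot w u \<noteq> 0)"
proof (rule disjCI)
  assume "\<nexists>w. int_dot w (int_vec z) = 0 \<and> int_dot w u \<noteq> 0"
  then have orth: "int_dot w u = 0" if "int_dot w (int_vec z) = 0" for w using that by blast
  have pair: "real_of_int (z i0) * u $ k = real_of_int (z k) * u $ i0" for i0 k
  proof -
    define w where "w i = (if i = k then z i0 else 0) - (if i = i0 then z k else 0)" for i
    have "int_dot w x = real_of_int (z i0) * x $ k - real_of_int (z k) * x $ i0" for x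
      unfolding w_def int_dot_diff_left int_dot_single ..
    then show ?thesis using orth[of w] by (simp add: mult.commute)
  qed
  show "\<exists>s. u = s *\<^sub>R int_vec z"
  proof (cases "\<exists>i0. z i0 \<noteq> 0")
    case True
    then obtain i0 where "z i0 \<noteq> 0" by blast
    then have "u = (u $ i0 / real_of_int (z i0)) *\<^sub>R int_vec z"
      using pair[of i0] by (simp add: vec_eq_iff field_simps)
    then show ?thesis by blast
  next
    case False
    then have "u $ k = 0" for k
      using orth[of "\<lambda>i. if i = k then 1 else 0"] by (simp add: int_dot_single int_dot_def)
    then show ?thesis by (intro exI[of _ 0]) (simp add: vec_eq_iff)
  qed
qed

lemma separate_off_parameter_range:
  assumes z: "z k \<noteq> 0" and s: "\<not> (\<alpha> \<le> s \<and> ereal s \<le> \<beta>)"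
  shows "\<exists>w c. (\<forall>q\<in>lattice_segment (B, z, \<alpha>, \<beta>). int_dot w q + c < 0) \<and>
    int_dot w (B + s *\<^sub>R int_vec z) + c > 0"
proof -
  define n where "n = int_dot z (int_vec z)"
  have n: "n > 0" unfolding n_def using int_dot_self_pos[of z k, OF z] .
  show ?thesis
  proof (cases "s < \<alpha>")
    case True
    define c where "c = int_dot z B + ((\<alpha> + s) / 2) * n"
    have "int_dot (\<lambda>i. - z i) (B + t *\<^sub>R int_vec z) + c = ((\<alpha> + s) / 2 - t) * n" for t
      unfolding c_def n_def by (simp add: int_dot_line int_dot_uminus algebra_simps)
    moreover have "((\<alpha> + s) / 2 - t) * n < 0" if "\<alpha> \<le> t" for t
      using that True n by (simp add: mult_neg_pos)
    ultimately show ?thesis using True n unfolding lattice_segment_def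
      by (intro exI[of _ "\<lambda>i. - z i"] exI[of _ c]) auto
  next
    case False
    obtain b where b: "\<And>t. ereal t \<le> \<beta> \<Longrightarrow> t \<le> b" "b < s"
    proof (cases \<beta>)
      case (real r)
      then show ?thesis using that[of r] s False by auto
    next
      case MInf
      then show ?thesis using that[of "s - 1"] by auto
    qed (use s False in auto)
    define c where "c = - int_dot z B - ((b + s) / 2) * n"
    have "int_dot z (B + t *\<^sub>R int_vec z) + c = (t - (b + s) / 2) * n" for t
      unfolding c_def n_def by (simp add: int_dot_line algebra_simps)
    moreover have "(t - (b + s) / 2) * n < 0" if "t \<le> b" for t
      using that b n by (simp add: mult_neg_pos)
    ultimately show ?thesis using b n unfolding lattice_segment_def
      by (intro exI[of _ z] exI[of _ c]) auto
  qed
qed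

lemma lattice_segment_separation:
  assumes y: "y \<notin> lattice_segment (B, z, \<alpha>, \<beta>)"
  shows "\<exists>w c. (\<forall>q\<in>lattice_segment (B, z, \<alpha>, \<beta>). int_dot w q + c < 0) \<and> int_dot w y + c > 0"
proof (cases "\<exists>w. int_dot w (int_vec z) = 0 \<and> int_dot w (y - B) \<noteq> 0")
  case True
  then obtain w where w: "int_dot w (int_vec z) = 0" "int_dot w (y - B) \<noteq> 0" by blast
  define w' where "w' = (if int_dot w (y - B) > 0 then w else (\<lambda>i. - w i))"
  have w': "int_dot w' (int_vec z) = 0" "int_dot w' (y - B) > 0"
    unfolding w'_def using w by (auto simp: int_dot_uminus)
  have "int_dot w' y = int_dot w' B + int_dot w' (y - B)" using int_dot_add[of w' B "y - B"] by simp
  then show ?thesis using w' unfolding lattice_segment_def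
    by (intro exI[of _ w'] exI[of _ "- int_dot w' B - int_dot w' (y - B) / 2"]) (auto simp: int_dot_line)
next
  case False
  then obtain s where s: "y - B = s *\<^sub>R int_vec z" using int_orthogonal_or_parallel by blast
  then have y_eq: "y = B + s *\<^sub>R int_vec z" by (simp add: algebra_simps)
  show ?thesis
  proof (cases "\<exists>k. z k \<noteq> 0")
    case True
    then obtain k where "z k \<noteq> 0" by blast
    moreover have "\<not> (\<alpha> \<le> s \<and> ereal s \<le> \<beta>)" using y y_eq lattice_segmentI by blast
    ultimately show ?thesis unfolding y_eq by (rule separate_off_parameter_range)
  next
    case False
    then have "int_vec z = 0" by (simp add: vec_eq_iff)
    then have "lattice_segment (B, z, \<alpha>, \<beta>) \<subseteq> {y}"
      using y_eq unfolding lattice_segment_def by auto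
    then have "lattice_segment (B, z, \<alpha>, \<beta>) = {}" using y by blast
    then show ?thesis by (intro exI[of _ "\<lambda>_. 0"] exI[of _ 1]) (simp add: int_dot_def)
  qed
qed

text \<open>The tropical rational function \<open>max 0 (min\<^sub>\<pi> l\<^sub>\<pi>)\<close> for finitely many integral affine
  functions \<open>l\<^sub>\<pi>\<close>: written as \<open>max (N\<cdot>x) (max\<^sub>\<pi> (N\<cdot>x - l\<^sub>\<pi> x)) - max\<^sub>\<pi> (N\<cdot>x - l\<^sub>\<pi> x)\<close>,
  where \<open>N\<close> is large enough to make all exponents natural.\<close>

lemma TRat_max_zero_Min_int_affine:
  fixes W :: "'a \<Rightarrow> 'n::finite \<Rightarrow> int"
  assumes P: "finite P" "P \<noteq> {}"
  shows "\<exists>f\<in>TRat. \<forall>x. f x = ereal (max 0 (Min ((\<lambda>\<pi>. int_dot (W \<pi>) x + C \<pi>) ` P)))"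
proof -
  define N where "N i = (\<Sum>\<pi>\<in>P. \<bar>W \<pi> i\<bar>)" for i
  have WN: "W \<pi> i \<le> N i" "0 \<le> N i" if "\<pi> \<in> P" for \<pi> i
    using member_le_sum[of \<pi> P "\<lambda>\<pi>. \<bar>W \<pi> i\<bar>"] P that unfolding N_def by auto
  define Sq where "Sq = (\<lambda>\<pi>. (\<lambda>i. nat (N i - W \<pi> i), - C \<pi>)) ` P"
  define lmin where "lmin x = Min ((\<lambda>\<pi>. int_dot (W \<pi>) x + C \<pi>) ` P)" for x
  have term_eq: "- C \<pi> + (\<Sum>i\<in>UNIV. real (nat (N i - W \<pi> i)) * x $ i) = int_dot N x - (int_dot (W \<pi>) x + C \<pi>)"
    if "\<pi> \<in> P" for \<pi> x
  proof -
    have "(\<Sum>i\<in>UNIV. real (nat (N i - W \<pi> i)) * x $ i) = int_dot (\<lambda>i. N i - W \<pi> i) x"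
      unfolding int_dot_def using WN[OF that] by (intro sum.cong) auto
    then show ?thesis unfolding int_dot_diff_left by simp
  qed
  have finite_Sq: "finite Sq" unfolding Sq_def using P by simp
  have q: "tpoly Sq x = ereal (int_dot N x - lmin x)" for x
  proof (rule antisym)
    have le: "lmin x \<le> int_dot (W \<pi>) x + C \<pi>" if "\<pi> \<in> P" for \<pi> unfolding lmin_def using P that by simp
    show "tpoly Sq x \<le> ereal (int_dot N x - lmin x)"
      unfolding tpoly_def Sq_def using term_eq by (auto intro!: Sup_least) (use le in force)
    have "lmin x \<in> (\<lambda>\<pi>. int_dot (W \<pi>) x + C \<pi>) ` P" unfolding lmin_def using P by (intro Min_in) auto
    then obtain \<pi>0 where \<pi>0: "\<pi>0 \<in> P" "lmin x = int_dot (W \<pi>0) x + C \<pi>0" by auto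
    have "(\<lambda>i. nat (N i - W \<pi>0 i), - C \<pi>0) \<in> Sq" unfolding Sq_def using \<pi>0(1) by blast
    from tpoly_ge[OF finite_Sq this, of x] show "ereal (int_dot N x - lmin x) \<le> tpoly Sq x"
      unfolding term_eq[OF \<pi>0(1)] \<pi>0(2) .
  qed
  have N_term: "(\<Sum>i\<in>UNIV. real (nat (N i)) * x $ i) = int_dot N x" for x
    unfolding int_dot_def using WN P by (auto intro!: sum.cong)
  define f where "f x = tpoly (insert (\<lambda>i. nat (N i), 0) Sq) x - tpoly Sq x" for x
  have "tpoly Sq \<noteq> (\<lambda>_. -\<infinity>)" using q by (metis MInfty_neq_ereal(1))
  then have "f \<in> TRat" unfolding f_def[abs_def] TRat_def
    using tpoly_in_TPoly finite_Sq by blast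
  moreover have "f x = ereal (max 0 (lmin x))" for x
  proof -
    have "f x = ereal (max (int_dot N x) (int_dot N x - lmin x) - (int_dot N x - lmin x))"
      unfolding f_def tpoly_insert q by (simp add: N_term max_def)
    then show ?thesis by (simp add: max_def)
  qed
  ultimately show ?thesis unfolding lmin_def by blast
qed

section \<open>Piecewise affine functions of one real variable\<close>

lemma breakpoints_mono:
  fixes a :: "nat \<Rightarrow> real"
  assumes "\<forall>i<k. a i < a (Suc i)" "i \<le> j" "j \<le> k"
  shows "a i \<le> a j"
  using lift_Suc_mono_le_ivl[of "{..<k}" a i j] assms by fastforce

lemma pw_affine_intE:
  assumes "pw_affine_int h L"
  obtains k a m c where "a 0 = 0" "\<forall>i<k. a i < a (Suc i)"
    "L \<noteq> \<infinity> \<Longrightarrow> ereal (a k) = L"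
    "L = \<infinity> \<Longrightarrow> \<forall>t \<ge> a k. h t = c k + of_int (m k) * t"
    "\<And>i t. i < k \<Longrightarrow> t \<in> {a i .. a (Suc i)} \<Longrightarrow> h t = c i + of_int (m i) * t"
  using assms unfolding pw_affine_int_def by blast

lemma breakpoint_interval_right:
  fixes a :: "nat \<Rightarrow> real"
  assumes "\<forall>i<k. a i < a (Suc i)" "a 0 \<le> t" "t < a k"
  shows "\<exists>i<k. a i \<le> t \<and> t < a (Suc i)"
  using assms
proof (induction k)
  case (Suc k)
  then show ?case by (cases "t < a k") (auto intro: less_SucI)
qed simp

lemma breakpoint_interval_left:
  fixes a :: "nat \<Rightarrow> real"
  assumes "\<forall>i<k. a i < a (Suc i)" "a 0 < t" "t \<le> a k"
  shows "\<exists>i<k. a i < t \<and> t \<le> a (Suc i)"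
  using assms
proof (induction k)
  case (Suc k)
  then show ?case by (cases "t \<le> a k") (auto intro: less_SucI)
qed simp

lemma breakpoints_cover:
  fixes a :: "nat \<Rightarrow> real"
  assumes inc: "\<forall>i<k. a i < a (Suc i)" and a0: "a 0 = 0" and ak: "L \<noteq> \<infinity> \<Longrightarrow> ereal (a k) = L"
    and L: "L > 0" and t: "0 \<le> t" "ereal t \<le> L"
  shows "(\<exists>i<k. a i \<le> t \<and> t \<le> a (Suc i)) \<or> (L = \<infinity> \<and> a k \<le> t)"
proof (cases "t < a k")
  case True
  then show ?thesis using breakpoint_interval_right[OF inc, of t] a0 t by force
next
  case False
  show ?thesis
  proof (cases "L = \<infinity>")
    case Lfin: False
    then have "t = a k" "0 < a k" using ak False t L by (auto simp: zero_ereal_def)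
    then have "0 < k" using a0 by (cases k) auto
    then have "a (k - 1) < a k" using inc[rule_format, of "k - 1"] by simp
    then show ?thesis using \<open>0 < k\<close> \<open>t = a k\<close> by (intro disjI1 exI[of _ "k - 1"]) auto
  qed (use False in auto)
qed

lemma lipschitz_on_closed_cover:
  fixes u :: "real \<Rightarrow> real"
  assumes "finite CC" "\<forall>C\<in>CC. closed C"
    "\<forall>C\<in>CC. \<forall>x\<in>C. \<forall>y\<in>C. \<bar>u x - u y\<bar> \<le> M * \<bar>x - y\<bar>"
    "{a..b} \<subseteq> \<Union>CC" "a \<le> b"
  shows "\<bar>u b - u a\<bar> \<le> M * (b - a)"
  using assms
proof (induction "card CC" arbitrary: CC b rule: less_induct)
  case less
  obtain C0 where C0: "C0 \<in> CC" "b \<in> C0" using less.prems(4,5) by auto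
  define K where "K = C0 \<inter> {a..b}"
  have K: "closed K" "K \<noteq> {}" "bdd_below K"
    unfolding K_def using less.prems(2,5) C0 by auto
  define l where "l = Inf K"
  have "l \<in> K" unfolding l_def using closed_contains_Inf K by blast
  then have l: "a \<le> l" "l \<le> b" "l \<in> C0" unfolding K_def by auto
  have lip0: "\<bar>u x - u y\<bar> \<le> M * \<bar>x - y\<bar>" if "x \<in> C0" "y \<in> C0" for x y
    using less.prems(3) C0 that by blast
  have "\<bar>u b - u l\<bar> \<le> M * (b - l)" using lip0[OF C0(2) l(3)] l by simp
  moreover have "\<bar>u l - u a\<bar> \<le> M * (l - a)"
  proof (cases "l = a")
    case False
    define CC' where "CC' = CC - {C0}"
    have card: "card CC' < card CC" unfolding CC'_def by (rule card_Diff1_less[OF less.prems(1) C0(1)])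
    have "{a..<l} \<subseteq> \<Union>CC'"
    proof
      fix x assume x: "x \<in> {a..<l}"
      then have "x \<notin> K" using cInf_lower[OF _ K(3), of x] unfolding l_def by force
      moreover have "x \<in> {a..b}" using x l by auto
      ultimately show "x \<in> \<Union>CC'" using less.prems(4) unfolding K_def CC'_def by auto
    qed
    moreover have "closed (\<Union>CC')" unfolding CC'_def using less.prems(1,2) by auto
    ultimately have "closure {a..<l} \<subseteq> \<Union>CC'" by (rule closure_minimal)
    then have "{a..l} \<subseteq> \<Union>CC'" using closure_atLeastLessThan[of a l] False l(1) by simp
    moreover have "finite CC'" "\<forall>C\<in>CC'. closed C"
      "\<forall>C\<in>CC'. \<forall>x\<in>C. \<forall>y\<in>C. \<bar>u x - u y\<bar> \<le> M * \<bar>x - y\<bar>"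
      using less.prems(1-3) unfolding CC'_def by auto
    ultimately show ?thesis using less.hyps[OF card] l(1) by blast
  qed simp
  ultimately show ?case by (simp add: algebra_simps)
qed

lemma pw_affine_int_lipschitz:
  assumes pw: "pw_affine_int h L" and L: "L > 0"
  shows "\<exists>M\<ge>0. \<forall>s s'. 0 \<le> s \<longrightarrow> 0 \<le> s' \<longrightarrow> ereal s \<le> L \<longrightarrow> ereal s' \<le> L \<longrightarrow>
           \<bar>h s - h s'\<bar> \<le> M * \<bar>s - s'\<bar>"
proof -
  obtain k a m c where a0: "a 0 = 0" and inc: "\<forall>i<k. a i < a (Suc i)"
    and ak: "L \<noteq> \<infinity> \<Longrightarrow> ereal (a k) = L"
    and ray: "L = \<infinity> \<Longrightarrow> \<forall>t \<ge> a k. h t = c k + of_int (m k) * t"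
    and piece: "\<And>i t. i < k \<Longrightarrow> t \<in> {a i .. a (Suc i)} \<Longrightarrow> h t = c i + of_int (m i) * t"
    using pw by (rule pw_affine_intE) blast
  define M where "M = Max ((\<lambda>i. \<bar>real_of_int (m i)\<bar>) ` {..k})"
  have Mge: "\<bar>real_of_int (m i)\<bar> \<le> M" if "i \<le> k" for i unfolding M_def using that by (intro Max_ge) auto
  have affine_lip: "\<bar>(c i + of_int (m i) * x) - (c i + of_int (m i) * y)\<bar> \<le> M * \<bar>x - y\<bar>"
    if "i \<le> k" for i x y
    using mult_right_mono[OF Mge[OF that] abs_ge_zero[of "x - y"]]
    by (simp add: abs_mult[symmetric] algebra_simps)
  define CC where "CC = (\<lambda>i. {a i .. a (Suc i)}) ` {..<k} \<union> (if L = \<infinity> then {{a k ..}} else {})"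
  have "finite CC" "\<forall>C\<in>CC. closed C" unfolding CC_def by auto
  moreover have "\<forall>C\<in>CC. \<forall>x\<in>C. \<forall>y\<in>C. \<bar>h x - h y\<bar> \<le> M * \<bar>x - y\<bar>"
    unfolding CC_def using piece ray affine_lip by (fastforce split: if_splits)
  moreover have cover: "t \<in> \<Union>CC" if "0 \<le> t" "ereal t \<le> L" for t
    using breakpoints_cover[OF inc a0 ak L that] unfolding CC_def by auto
  ultimately have lip: "\<bar>h t' - h t\<bar> \<le> M * (t' - t)"
    if "0 \<le> t" "t \<le> t'" "ereal t' \<le> L" for t t'
    using that by (intro lipschitz_on_closed_cover[of CC]) (auto intro!: cover order.trans[OF _ that(3)])
  show ?thesis
  proof (intro exI[of _ M] conjI allI impI)
    show "M \<ge> 0" using Mge[of 0] by simp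
    fix s s' assume "0 \<le> s" "0 \<le> s'" "ereal s \<le> L" "ereal s' \<le> L"
    then show "\<bar>h s - h s'\<bar> \<le> M * \<bar>s - s'\<bar>"
      using lip[of s s'] lip[of s' s] by (cases "s \<le> s'") (auto simp: abs_minus_commute)
  qed
qed

lemma pw_affine_int_cong:
  assumes pw: "pw_affine_int h L" and eq: "\<And>t. 0 \<le> t \<Longrightarrow> ereal t \<le> L \<Longrightarrow> h' t = h t"
  shows "pw_affine_int h' L"
proof -
  obtain k a m c where a0: "a 0 = 0" and inc: "\<forall>i<k. a i < a (Suc i)"
    and ak: "L \<noteq> \<infinity> \<Longrightarrow> ereal (a k) = L"
    and ray: "L = \<infinity> \<Longrightarrow> \<forall>t \<ge> a k. h t = c k + of_int (m k) * t"
    and piece: "\<And>i t. i < k \<Longrightarrow> t \<in> {a i .. a (Suc i)} \<Longrightarrow> h t = c i + of_int (m i) * t"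
    using pw by (rule pw_affine_intE) blast
  have range: "0 \<le> t \<and> ereal t \<le> L" if "i \<le> k" "a i \<le> t" "t \<le> a k" for i t
  proof -
    have "ereal (a k) \<le> L" using ak by (cases "L = \<infinity>") auto
    then have "ereal t \<le> L" using order.trans[of "ereal t" "ereal (a k)" L] that(3) by simp
    moreover have "0 \<le> a i" using breakpoints_mono[OF inc, of 0 i] a0 that by simp
    ultimately show ?thesis using that(2) by simp
  qed
  have "L = \<infinity> \<longrightarrow> (\<forall>t\<ge>a k. h' t = c k + of_int (m k) * t)"
    using ray eq breakpoints_mono[OF inc, of 0 k] a0 by auto
  moreover have "\<forall>i<k. \<forall>t\<in>{a i..a (Suc i)}. h' t = c i + of_int (m i) * t"
  proof (intro allI impI ballI)
    fix i t assume i: "i < k" and t: "t \<in> {a i..a (Suc i)}"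
    have "a (Suc i) \<le> a k" using breakpoints_mono[OF inc, of "Suc i" k] i by simp
    then show "h' t = c i + of_int (m i) * t" using piece[OF i t] eq range[of i t] i t by simp
  qed
  ultimately show ?thesis unfolding pw_affine_int_def using a0 inc ak by blast
qed

lemma pw_affine_int_affine_right:
  assumes pw: "pw_affine_int h L" and t0: "0 \<le> t0" "ereal t0 < L"
  shows "\<exists>\<eta>>0. ereal (t0 + \<eta>) \<le> L \<and> (\<exists>(m::int) c. \<forall>t\<in>{t0..t0+\<eta>}. h t = c + of_int m * t)"
proof -
  obtain k a m c where a0: "a 0 = 0" and inc: "\<forall>i<k. a i < a (Suc i)"
    and ak: "L \<noteq> \<infinity> \<Longrightarrow> ereal (a k) = L"
    and ray: "L = \<infinity> \<Longrightarrow> \<forall>t \<ge> a k. h t = c k + of_int (m k) * t"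
    and piece: "\<And>i t. i < k \<Longrightarrow> t \<in> {a i .. a (Suc i)} \<Longrightarrow> h t = c i + of_int (m i) * t"
    using pw by (rule pw_affine_intE) blast
  show ?thesis
  proof (cases "t0 < a k")
    case True
    then obtain i where i: "i < k" "a i \<le> t0" "t0 < a (Suc i)"
      using breakpoint_interval_right[OF inc] a0 t0 by force
    have "ereal (a (Suc i)) \<le> L"
      using ak breakpoints_mono[OF inc, of "Suc i" k] i by (cases "L = \<infinity>") auto
    then show ?thesis using i piece by (intro exI[of _ "a (Suc i) - t0"] conjI exI) auto
  next
    case False
    then have "L = \<infinity>" using ak t0 by force
    then show ?thesis using ray False by (intro exI[of _ 1] conjI exI) auto
  qed
qed

lemma pw_affine_int_affine_left:
  assumes pw: "pw_affine_int h L" and t0: "0 < t0" "ereal t0 \<le> L"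
  shows "\<exists>\<eta>>0. \<eta> \<le> t0 \<and> (\<exists>(m::int) c. \<forall>t\<in>{t0-\<eta>..t0}. h t = c + of_int m * t)"
proof -
  obtain k a m c where a0: "a 0 = 0" and inc: "\<forall>i<k. a i < a (Suc i)"
    and ak: "L \<noteq> \<infinity> \<Longrightarrow> ereal (a k) = L"
    and ray: "L = \<infinity> \<Longrightarrow> \<forall>t \<ge> a k. h t = c k + of_int (m k) * t"
    and piece: "\<And>i t. i < k \<Longrightarrow> t \<in> {a i .. a (Suc i)} \<Longrightarrow> h t = c i + of_int (m i) * t"
    using pw by (rule pw_affine_intE) blast
  show ?thesis
  proof (cases "t0 \<le> a k")
    case True
    then obtain i where i: "i < k" "a i < t0" "t0 \<le> a (Suc i)"
      using breakpoint_interval_left[OF inc] a0 t0 by force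
    have "0 \<le> a i" using breakpoints_mono[OF inc, of 0 i] i a0 by simp
    then show ?thesis using i piece by (intro exI[of _ "t0 - a i"] conjI exI) auto
  next
    case False
    then have "L = \<infinity>" using ak t0 by force
    moreover have "0 \<le> a k" using breakpoints_mono[OF inc, of 0 k] a0 by simp
    ultimately show ?thesis using ray False by (intro exI[of _ "t0 - a k"] conjI exI) auto
  qed
qed

definition int_affine_on :: "(real \<Rightarrow> real) \<Rightarrow> real set \<Rightarrow> bool" where
  "int_affine_on h S \<longleftrightarrow> (\<exists>(m::int) c. \<forall>u\<in>S. h u = c + of_int m * u)"

definition pw_affine_int_line :: "(real \<Rightarrow> real) \<Rightarrow> bool" where
  "pw_affine_int_line h \<longleftrightarrow> (\<exists>B. finite B \<and> (\<forall>s t. s \<le> t \<longrightarrow> (\<forall>b\<in>B. b \<le> s \<or> t \<le> b) \<longrightarrow> int_affine_on h {s..t}))"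

lemma pw_affine_int_lineI:
  assumes "finite B" "\<And>s t. s \<le> t \<Longrightarrow> \<forall>b\<in>B. b \<le> s \<or> t \<le> b \<Longrightarrow> int_affine_on h {s..t}"
  shows "pw_affine_int_line h"
  using assms unfolding pw_affine_int_line_def by blast

lemma pw_affine_int_lineE:
  assumes "pw_affine_int_line h"
  obtains B where "finite B" "\<And>s t. s \<le> t \<Longrightarrow> \<forall>b\<in>B. b \<le> s \<or> t \<le> b \<Longrightarrow> int_affine_on h {s..t}"
  using assms unfolding pw_affine_int_line_def by blast

lemma pw_affine_int_line_add: assumes "pw_affine_int_line f" "pw_affine_int_line g" shows "pw_affine_int_line (\<lambda>t. f t + g t)"
proof -
  obtain B1 where B1: "finite B1" "\<And>s t. s \<le> t \<Longrightarrow> \<forall>b\<in>B1. b \<le> s \<or> t \<le> b \<Longrightarrow> int_affine_on f {s..t}"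
    using assms(1) by (rule pw_affine_int_lineE) blast
  obtain B2 where B2: "finite B2" "\<And>s t. s \<le> t \<Longrightarrow> \<forall>b\<in>B2. b \<le> s \<or> t \<le> b \<Longrightarrow> int_affine_on g {s..t}"
    using assms(2) by (rule pw_affine_int_lineE) blast
  show ?thesis
  proof (rule pw_affine_int_lineI[of "B1 \<union> B2"])
    fix s t :: real assume "s \<le> t" "\<forall>b\<in>B1 \<union> B2. b \<le> s \<or> t \<le> b"
    then obtain m1 c1 m2 c2 where "\<forall>u\<in>{s..t}. f u = c1 + of_int m1 * u" "\<forall>u\<in>{s..t}. g u = c2 + of_int m2 * u"
      using B1(2) B2(2) unfolding int_affine_on_def by (metis UnCI)
    then show "int_affine_on (\<lambda>t. f t + g t) {s..t}"
      unfolding int_affine_on_def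
        by (intro exI[of _ "m1 + m2"] exI[of _ "c1 + c2"]) (auto simp: algebra_simps)
  qed (use B1 B2 in simp)
qed

lemma pw_affine_int_line_uminus: assumes "pw_affine_int_line f" shows "pw_affine_int_line (\<lambda>t. - f t)"
proof -
  obtain B where B: "finite B" "\<And>s t. s \<le> t \<Longrightarrow> \<forall>b\<in>B. b \<le> s \<or> t \<le> b \<Longrightarrow> int_affine_on f {s..t}"
    using assms by (rule pw_affine_int_lineE) blast
  have "int_affine_on (\<lambda>t. - f t) S" if "int_affine_on f S" for S
    using that unfolding int_affine_on_def by (metis minus_add_distrib mult_minus_left of_int_minus)
  then show ?thesis using B by (intro pw_affine_int_lineI[of B]) auto
qed

lemma pw_affine_int_line_const: "pw_affine_int_line (\<lambda>t. c)"
  unfolding pw_affine_int_line_def int_affine_on_def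
    by (intro exI[of _ "{}"]) (auto intro!: exI[of _ "0::int"])

lemma pw_affine_int_line_if: "pw_affine_int_line f \<Longrightarrow> pw_affine_int_line g \<Longrightarrow> pw_affine_int_line (\<lambda>t. if P then f t else g t)"
  by (cases P) auto

lemma pw_affine_int_line_affine_reparam:
  assumes "pw_affine_int_line f" "\<sigma> = 1 \<or> \<sigma> = -1"
  shows "pw_affine_int_line (\<lambda>t. f (\<sigma> * t + d))"
proof -
  obtain B where B: "finite B" "\<And>s t. s \<le> t \<Longrightarrow> \<forall>b\<in>B. b \<le> s \<or> t \<le> b \<Longrightarrow> int_affine_on f {s..t}"
    using assms(1) by (rule pw_affine_int_lineE) blast
  show ?thesis
  proof (rule pw_affine_int_lineI[of "(\<lambda>b. \<sigma> * (b - d)) ` B"])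
    fix s t :: real assume st: "s \<le> t" "\<forall>b\<in>(\<lambda>b. \<sigma> * (b - d)) ` B. b \<le> s \<or> t \<le> b"
    define s' t' where "s' = min (\<sigma> * s + d) (\<sigma> * t + d)" and "t' = max (\<sigma> * s + d) (\<sigma> * t + d)"
    have "\<forall>b\<in>B. b \<le> s' \<or> t' \<le> b" using st assms(2) unfolding s'_def t'_def by (auto simp: algebra_simps)
    moreover have "s' \<le> t'" unfolding s'_def t'_def by simp
    ultimately obtain m c where mc: "\<forall>u\<in>{s'..t'}. f u = c + of_int m * u"
      using B(2) unfolding int_affine_on_def by blast
    have "\<sigma> * u + d \<in> {s'..t'}" if "u \<in> {s..t}" for u
      using that assms(2) unfolding s'_def t'_def by auto
    then have "\<forall>u\<in>{s..t}. f (\<sigma> * u + d) = (c + of_int m * d) + of_int (m * \<lfloor>\<sigma>\<rfloor>) * u"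
      using mc assms(2) by (auto simp: algebra_simps)
    then show "int_affine_on (\<lambda>t. f (\<sigma> * t + d)) {s..t}" unfolding int_affine_on_def by blast
  qed (use B in simp)
qed

lemma pw_affine_int_line_shift: "pw_affine_int_line f \<Longrightarrow> pw_affine_int_line (\<lambda>t. f (t - c))"
  using pw_affine_int_line_affine_reparam[of f 1 "- c"] by simp

lemma pw_affine_int_line_reflect: "pw_affine_int_line f \<Longrightarrow> pw_affine_int_line (\<lambda>t. f (c - t))"
  using pw_affine_int_line_affine_reparam[of f "-1" c] by simp

lemma pw_affine_int_line_of_cases:
  assumes "finite B"
    and "\<And>s t. s \<le> t \<Longrightarrow> \<forall>b\<in>B. b \<le> s \<or> t \<le> b \<Longrightarrow> \<exists>(m::int) c. \<forall>u\<in>{s..t}. h u = c + of_int m * u"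
  shows "pw_affine_int_line h"
  using assms unfolding pw_affine_int_line_def int_affine_on_def by blast

definition tent :: "real \<Rightarrow> real \<Rightarrow> real" where "tent r z = max 0 (r - \<bar>z\<bar>)"
definition ramp :: "real \<Rightarrow> real \<Rightarrow> real" where "ramp r z = max 0 (r - z)"
definition bump :: "real \<Rightarrow> real \<Rightarrow> real" where "bump r z = max 0 (min z (r - z))"

lemma pw_affine_int_line_tent: assumes "r > 0" shows "pw_affine_int_line (tent r)"
proof (rule pw_affine_int_line_of_cases[of "{-r, 0, r}"])
  fix s t :: real assume st: "s \<le> t" "\<forall>b\<in>{-r, 0, r}. b \<le> s \<or> t \<le> b"
  then consider "t \<le> -r" | "-r \<le> s" "t \<le> 0" | "0 \<le> s" "t \<le> r" | "r \<le> s" using assms by force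
  then show "\<exists>(m::int) c. \<forall>u\<in>{s..t}. tent r u = c + of_int m * u"
  proof cases
    case 1 then show ?thesis by (intro exI[of _ 0] exI[of _ 0]) (auto simp: tent_def)
  next
    case 2 then show ?thesis by (intro exI[of _ 1] exI[of _ r]) (auto simp: tent_def)
  next
    case 3 then show ?thesis by (intro exI[of _ "-1"] exI[of _ r]) (auto simp: tent_def)
  next
    case 4 then show ?thesis by (intro exI[of _ 0] exI[of _ 0]) (auto simp: tent_def)
  qed
qed simp

lemma pw_affine_int_line_ramp: "pw_affine_int_line (ramp r)"
proof (rule pw_affine_int_line_of_cases[of "{r}"])
  fix s t :: real assume st: "s \<le> t" "\<forall>b\<in>{r}. b \<le> s \<or> t \<le> b"
  then consider "t \<le> r" | "r \<le> s" by force
  then show "\<exists>(m::int) c. \<forall>u\<in>{s..t}. ramp r u = c + of_int m * u"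
  proof cases
    case 1 then show ?thesis by (intro exI[of _ "-1"] exI[of _ r]) (auto simp: ramp_def)
  next
    case 2 then show ?thesis by (intro exI[of _ 0] exI[of _ 0]) (auto simp: ramp_def)
  qed
qed simp

lemma pw_affine_int_line_bump: assumes "r > 0" shows "pw_affine_int_line (bump r)"
proof (rule pw_affine_int_line_of_cases[of "{0, r/2, r}"])
  fix s t :: real assume st: "s \<le> t" "\<forall>b\<in>{0, r/2, r}. b \<le> s \<or> t \<le> b"
  then consider "t \<le> 0" | "0 \<le> s" "t \<le> r/2" | "r/2 \<le> s" "t \<le> r" | "r \<le> s" using assms by force
  then show "\<exists>(m::int) c. \<forall>u\<in>{s..t}. bump r u = c + of_int m * u"
  proof cases
    case 1 then show ?thesis by (intro exI[of _ 0] exI[of _ 0]) (auto simp: bump_def)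
  next
    case 2 then show ?thesis by (intro exI[of _ 1] exI[of _ 0]) (auto simp: bump_def)
  next
    case 3 then show ?thesis by (intro exI[of _ "-1"] exI[of _ r]) (auto simp: bump_def)
  next
    case 4 then show ?thesis by (intro exI[of _ 0] exI[of _ 0]) (auto simp: bump_def)
  qed
qed simp

lemma tent_lipschitz: "\<bar>tent r a - tent r b\<bar> \<le> \<bar>a - b\<bar>"
  unfolding tent_def by (auto simp: max_def abs_if)

lemma ramp_lipschitz: "\<bar>ramp r a - ramp r b\<bar> \<le> \<bar>a - b\<bar>"
  unfolding ramp_def by (auto simp: max_def abs_if)

lemma bump_lipschitz: "\<bar>bump r a - bump r b\<bar> \<le> \<bar>a - b\<bar>"
  unfolding bump_def by (auto simp: max_def min_def abs_if)

lemma tent_zero: "r \<le> \<bar>z\<bar> \<Longrightarrow> tent r z = 0" unfolding tent_def by simp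
lemma tent_eq: "\<bar>z\<bar> \<le> r \<Longrightarrow> tent r z = r - \<bar>z\<bar>" unfolding tent_def by simp
lemma ramp_zero: "r \<le> z \<Longrightarrow> ramp r z = 0" unfolding ramp_def by simp
lemma ramp_eq: "z \<le> r \<Longrightarrow> ramp r z = r - z" unfolding ramp_def by simp
lemma bump_zero_left: "z \<le> 0 \<Longrightarrow> bump r z = 0" unfolding bump_def by simp
lemma bump_zero_right: "r \<le> z \<Longrightarrow> bump r z = 0" unfolding bump_def by simp
lemma bump_eq: "0 \<le> z \<Longrightarrow> 2 * z \<le> r \<Longrightarrow> bump r z = z" unfolding bump_def by simp

lemma lipschitz_glue:
  fixes f g :: "real \<Rightarrow> real"
  assumes "\<And>a b. \<bar>f a - f b\<bar> \<le> \<bar>a - b\<bar>" "\<And>a b. \<bar>g a - g b\<bar> \<le> \<bar>a - b\<bar>"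
    "\<And>t. t \<ge> m \<Longrightarrow> f t = 0" "\<And>t. t \<le> m \<Longrightarrow> g t = 0"
  shows "\<bar>(f a + g a) - (f b + g b)\<bar> \<le> \<bar>a - b\<bar>"
proof -
  have key: "\<bar>(f a + g a) - (f b + g b)\<bar> \<le> b - a" if ab: "a \<le> b" for a b
  proof (cases "b \<le> m")
    case True then show ?thesis using assms(1)[of a b] assms(4)[of a] assms(4)[of b] ab by auto
  next
    case False
    show ?thesis
    proof (cases "m \<le> a")
      case True then show ?thesis using assms(2)[of a b] assms(3)[of a] assms(3)[of b] ab by auto
    next
      case False
      have "\<bar>f a - f m\<bar> \<le> \<bar>a - m\<bar>" "\<bar>g b - g m\<bar> \<le> \<bar>b - m\<bar>" using assms(1,2) by auto
      then show ?thesis using assms(3)[of m] assms(4)[of m] assms(3)[of b] assms(4)[of a] False \<open>\<not> b \<le> m\<close> ab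
        by auto
    qed
  qed
  show ?thesis
  proof (cases "a \<le> b")
    case True then show ?thesis using key[OF True] by simp
  next
    case False then show ?thesis using key[of b a] by (simp add: abs_minus_commute)
  qed
qed

lemma strict_sorted_nth_gap:
  fixes xs :: "real list"
  assumes "sorted_wrt (<) xs" "Suc i < length xs" "b \<in> set xs"
  shows "b \<le> xs ! i \<or> xs ! Suc i \<le> b"
proof -
  obtain j where j: "j < length xs" "xs ! j = b" using assms(3) by (auto simp: in_set_conv_nth)
  have mono: "xs ! p \<le> xs ! q" if "p \<le> q" "q < length xs" for p q
    using assms(1) that sorted_wrt_nth_less[OF assms(1), of p q] by (cases "p = q") auto
  show ?thesis using mono[of j i] mono[of "Suc i" j] j assms(2) by (cases "j \<le> i") auto
qed

lemma int_affine_on_ray: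
  assumes B: "\<And>s t. s \<le> t \<Longrightarrow> \<forall>b\<in>B. b \<le> s \<or> t \<le> b \<Longrightarrow> int_affine_on h {s..t}"
    and A: "\<forall>b\<in>B. b \<le> A"
  shows "\<exists>(m::int) c. \<forall>t\<ge>A. h t = c + of_int m * t"
proof -
  have affine: "\<exists>(m::int) c. \<forall>u\<in>{A..T}. h u = c + of_int m * u" if "A \<le> T" for T
    using B[OF that] A unfolding int_affine_on_def by simp
  obtain m c where mc: "\<forall>u\<in>{A..A+1}. h u = c + of_int m * u" using affine[of "A + 1"] by auto
  have "h t = c + of_int m * t" if t: "A \<le> t" for t
  proof -
    have "A \<le> max t (A + 1)" by simp
    then obtain m' c' where mc': "\<forall>u\<in>{A..max t (A+1)}. h u = c' + of_int m' * u"
      using affine by blast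
    have "c + of_int m * A = c' + of_int m' * A"
      using mc[rule_format, of A] mc'[rule_format, of A] by simp
    moreover have "c + of_int m * (A + 1) = c' + of_int m' * (A + 1)"
      using mc[rule_format, of "A + 1"] mc'[rule_format, of "A + 1"] by simp
    ultimately have "(of_int m :: real) = of_int m'" by (simp add: algebra_simps)
    moreover from this have "c = c'" using \<open>c + of_int m * A = c' + of_int m' * A\<close> by simp
    ultimately show ?thesis using mc'[rule_format, of t] t by simp
  qed
  then show ?thesis by blast
qed

lemma breakpoint_list:
  fixes B :: "real set"
  assumes B: "finite B" and L: "L > 0"
  obtains xs k where "sorted_wrt (<) xs" "k < length xs" "xs ! 0 = 0" "L \<noteq> \<infinity> \<Longrightarrow> ereal (xs ! k) = L"
    "\<And>i. i < length xs \<Longrightarrow> 0 \<le> xs ! i \<and> ereal (xs ! i) \<le> L"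
    "\<And>b. b \<in> B \<Longrightarrow> 0 < b \<Longrightarrow> ereal b < L \<Longrightarrow> b \<in> set xs"
    "\<And>x. x \<in> set xs \<Longrightarrow> x \<le> xs ! k"
proof -
  define X where "X = {b\<in>B. 0 < b \<and> ereal b < L} \<union> {0} \<union> (if L = \<infinity> then {} else {real_of_ereal L})"
  have L_real: "L = ereal (real_of_ereal L)" "0 < real_of_ereal L" if "L \<noteq> \<infinity>"
    using L that by (cases L; simp)+
  have X_range: "0 \<le> x \<and> ereal x \<le> L" if "x \<in> X" for x
    using that L L_real unfolding X_def by (auto simp: zero_ereal_def split: if_splits)
  have "finite X" unfolding X_def using B by simp
  then obtain xs where xs: "sorted_wrt (<) xs" "set xs = X"
    using finite_set_strict_sorted by blast
  define k where "k = length xs - 1"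
  have k: "k < length xs" unfolding k_def using xs(2) unfolding X_def by (cases xs) auto
  have nth_mono: "xs ! i \<le> xs ! j" if "i \<le> j" "j < length xs" for i j
    using sorted_wrt_nth_less[OF xs(1), of i j] that by (cases "i = j") auto
  have bounds: "xs ! 0 \<le> x" "x \<le> xs ! k" if "x \<in> X" for x
    using that xs(2) nth_mono[of 0] nth_mono[of _ k] k unfolding k_def by (auto simp: in_set_conv_nth)
  have in_X: "xs ! i \<in> X" if "i < length xs" for i using that xs(2) by auto
  have "0 \<in> X" unfolding X_def by simp
  moreover have "xs ! 0 \<in> X" using in_X[OF le_less_trans[OF _ k]] by simp
  ultimately have a0: "xs ! 0 = 0" using bounds(1) X_range by force
  have ak: "ereal (xs ! k) = L" if "L \<noteq> \<infinity>"
  proof -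
    have "real_of_ereal L \<in> X" using that unfolding X_def by simp
    then have "real_of_ereal L \<le> xs ! k" by (rule bounds(2))
    moreover have "ereal (xs ! k) \<le> L" using X_range in_X k by blast
    ultimately show ?thesis using L_real[OF that] by (metis antisym ereal_less_eq(3))
  qed
  show ?thesis
  proof (rule that[OF xs(1) k a0 ak])
    show "0 \<le> xs ! i \<and> ereal (xs ! i) \<le> L" if "i < length xs" for i using X_range in_X that by blast
    show "b \<in> set xs" if "b \<in> B" "0 < b" "ereal b < L" for b using that xs(2) unfolding X_def by simp
    show "x \<le> xs ! k" if "x \<in> set xs" for x using bounds(2) that xs(2) by blast
  qed
qed

lemma pw_affine_int_line_imp_pw_affine_int:
  assumes "pw_affine_int_line h" and L: "L > 0"
  shows "pw_affine_int h L"
proof -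
  obtain B where B: "finite B" "\<And>s t. s \<le> t \<Longrightarrow> \<forall>b\<in>B. b \<le> s \<or> t \<le> b \<Longrightarrow> int_affine_on h {s..t}"
    using assms(1) by (rule pw_affine_int_lineE) blast
  obtain xs k where xs: "sorted_wrt (<) xs" "k < length xs" "xs ! 0 = 0" "L \<noteq> \<infinity> \<Longrightarrow> ereal (xs ! k) = L"
    "\<And>i. i < length xs \<Longrightarrow> 0 \<le> xs ! i \<and> ereal (xs ! i) \<le> L"
    "\<And>b. b \<in> B \<Longrightarrow> 0 < b \<Longrightarrow> ereal b < L \<Longrightarrow> b \<in> set xs"
    "\<And>x. x \<in> set xs \<Longrightarrow> x \<le> xs ! k"
    using breakpoint_list[OF B(1) L] by blast
  have "int_affine_on h {xs ! i..xs ! Suc i}" if i: "i < k" for i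
  proof (rule B(2))
    show "xs ! i \<le> xs ! Suc i" using sorted_wrt_nth_less[OF xs(1), of i "Suc i"] i xs(2) by simp
    show "\<forall>b\<in>B. b \<le> xs ! i \<or> xs ! Suc i \<le> b"
    proof
      fix b assume b: "b \<in> B"
      have range: "0 \<le> xs ! i" "ereal (xs ! Suc i) \<le> L" using xs(5) i xs(2) by auto
      show "b \<le> xs ! i \<or> xs ! Suc i \<le> b"
      proof (cases "0 < b \<and> ereal b < L")
        case True
        then show ?thesis using strict_sorted_nth_gap[OF xs(1)] xs(6)[OF b] i xs(2) by simp
      next
        case False
        moreover have "L \<le> ereal b \<Longrightarrow> xs ! Suc i \<le> b"
          using range(2) order.trans[of "ereal (xs ! Suc i)" L "ereal b"] by simp
        ultimately show ?thesis using range(1) by force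
      qed
    qed
  qed
  then obtain m c where pieces: "\<forall>i<k. \<forall>t\<in>{xs ! i..xs ! Suc i}. h t = c i + of_int (m i) * t"
    unfolding int_affine_on_def by metis
  have "\<forall>b\<in>B. b \<le> xs ! k" if "L = \<infinity>"
  proof
    fix b assume b: "b \<in> B"
    have "xs ! 0 \<le> xs ! k" using xs(7)[OF nth_mem[of 0 xs]] xs(2) by linarith
    then show "b \<le> xs ! k" using xs(3) xs(6)[OF b] xs(7) that by (cases "0 < b") auto
  qed
  then obtain mr cr where ray: "L = \<infinity> \<longrightarrow> (\<forall>t\<ge>xs ! k. h t = cr + of_int mr * t)"
    using int_affine_on_ray[OF B(2)] by metis
  show ?thesis unfolding pw_affine_int_def
  proof (rule exI[of _ k], rule exI[of _ "\<lambda>i. xs ! i"], rule exI[of _ "m(k := mr)"],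
      rule exI[of _ "c(k := cr)"], intro conjI)
    show "\<forall>i<k. xs ! i < xs ! Suc i" using sorted_wrt_nth_less[OF xs(1)] xs(2) by simp
  qed (use xs(3,4) ray pieces in auto)
qed

definition breakpoint_data ::
  "(real \<Rightarrow> real) \<Rightarrow> ereal \<Rightarrow> nat \<Rightarrow> (nat \<Rightarrow> real) \<Rightarrow> (nat \<Rightarrow> int) \<Rightarrow> (nat \<Rightarrow> real) \<Rightarrow> bool" where
  "breakpoint_data h L k a m c \<longleftrightarrow> a 0 = 0 \<and> (\<forall>j<k. a j < a (Suc j)) \<and>
     (L \<noteq> \<infinity> \<longrightarrow> ereal (a k) = L) \<and> (L = \<infinity> \<longrightarrow> (\<forall>t \<ge> a k. h t = c k + of_int (m k) * t)) \<and>
     (\<forall>j<k. \<forall>t \<in> {a j .. a (Suc j)}. h t = c j + of_int (m j) * t)"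

lemma pw_affine_int_iff_breakpoint_data:
  "pw_affine_int h L \<longleftrightarrow> (\<exists>k a m c. breakpoint_data h L k a m c)"
  unfolding pw_affine_int_def breakpoint_data_def by blast

text \<open>For a vector of functions with breakpoint data, an index vector \<open>j\<close> selects one piece
  (or the final ray) per coordinate; on the intersection of these pieces all coordinates are
  affine.\<close>

lemma common_piece_affine:
  fixes g :: "real \<Rightarrow> real^'n::finite"
  assumes data: "\<And>i. breakpoint_data (\<lambda>t. g t $ i) L (k i) (a i) (m i) (c i)"
    and j: "\<And>i. j i < k i \<or> (j i = k i \<and> L = \<infinity>)"
    and lo: "\<And>i. a i (j i) \<le> t" and hi: "\<And>i. j i < k i \<Longrightarrow> t \<le> a i (Suc (j i))"
  shows "0 \<le> t \<and> ereal t \<le> L \<and> g t = (\<chi> i. c i (j i)) + t *\<^sub>R int_vec (\<lambda>i. m i (j i))"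
proof (intro conjI)
  fix i0 :: 'n
  have inc: "\<forall>j<k i0. a i0 j < a i0 (Suc j)" and a0: "a i0 0 = 0" and ak: "L \<noteq> \<infinity> \<Longrightarrow> ereal (a i0 (k i0)) = L"
    using data[of i0] unfolding breakpoint_data_def by auto
  show "0 \<le> t" using breakpoints_mono[OF inc, of 0 "j i0"] j[of i0] lo[of i0] a0 by auto
  show "ereal t \<le> L"
  proof (cases "L = \<infinity>")
    case False
    then have "t \<le> a i0 (k i0)"
      using j[of i0] hi[of i0] breakpoints_mono[OF inc, of "Suc (j i0)" "k i0"] by force
    then show ?thesis using ak[OF False] by (metis ereal_less_eq(3))
  qed simp
  show "g t = (\<chi> i. c i (j i)) + t *\<^sub>R int_vec (\<lambda>i. m i (j i))"
  proof (rule vec_eq_iff[THEN iffD2], rule allI)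
    fix i
    show "g t $ i = ((\<chi> i. c i (j i)) + t *\<^sub>R int_vec (\<lambda>i. m i (j i))) $ i"
      using data[of i] j[of i] lo[of i] hi[of i] unfolding breakpoint_data_def
      by (cases "j i < k i") (auto simp: mult.commute)
  qed
qed

lemma common_piece_exists:
  assumes data: "\<And>i. breakpoint_data (\<lambda>t. g t $ i) L (k i) (a i) (m i) (c i)"
    and L: "L > 0" and t: "0 \<le> t" "ereal t \<le> L"
  shows "\<exists>j. (\<forall>i. j i < k i \<or> (j i = k i \<and> L = \<infinity>)) \<and> (\<forall>i. a i (j i) \<le> t) \<and>
    (\<forall>i. j i < k i \<longrightarrow> t \<le> a i (Suc (j i)))"
proof -
  have "\<exists>ji. (ji < k i \<or> (ji = k i \<and> L = \<infinity>)) \<and> a i ji \<le> t \<and> (ji < k i \<longrightarrow> t \<le> a i (Suc ji))" for i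
  proof -
    have "\<forall>j<k i. a i j < a i (Suc j)" "a i 0 = 0" "L \<noteq> \<infinity> \<Longrightarrow> ereal (a i (k i)) = L"
      using data[of i] unfolding breakpoint_data_def by auto
    from breakpoints_cover[OF this L t] show ?thesis by blast
  qed
  then show ?thesis by metis
qed

lemma vec_pw_affine_int_pieces:
  fixes g :: "real \<Rightarrow> real^'n::finite"
  assumes pw: "\<And>i. pw_affine_int (\<lambda>t. g t $ i) L" and L: "L > 0"
  obtains P where "finite P"
    "\<And>t. 0 \<le> t \<Longrightarrow> ereal t \<le> L \<Longrightarrow> g t \<in> \<Union> (lattice_segment ` P)"
    "\<And>B z \<alpha> \<beta> t. (B, z, \<alpha>, \<beta>) \<in> P \<Longrightarrow> \<alpha> \<le> t \<Longrightarrow> ereal t \<le> \<beta> \<Longrightarrow>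
       0 \<le> t \<and> ereal t \<le> L \<and> g t = B + t *\<^sub>R int_vec z"
proof -
  obtain k a m c where data: "\<And>i. breakpoint_data (\<lambda>t. g t $ i) L (k i) (a i) (m i) (c i)"
    using pw unfolding pw_affine_int_iff_breakpoint_data by metis
  define valid where "valid = {j. \<forall>i. j i < k i \<or> (j i = k i \<and> L = \<infinity>)}"
  define bound where "bound j i = (if j i < k i then ereal (a i (Suc (j i))) else \<infinity>)" for j i
  define piece where "piece j = ((\<chi> i. c i (j i)), (\<lambda>i. m i (j i)), Max (range (\<lambda>i. a i (j i))),
    Min (range (bound j)))" for j
  have hi_iff: "ereal t \<le> Min (range (bound j)) \<longleftrightarrow> (\<forall>i. j i < k i \<longrightarrow> t \<le> a i (Suc (j i)))" for t j
  proof -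
    have "ereal t \<le> Min (range (bound j)) \<longleftrightarrow> (\<forall>i. ereal t \<le> bound j i)" by (subst Min_ge_iff) auto
    also have "\<dots> \<longleftrightarrow> (\<forall>i. j i < k i \<longrightarrow> t \<le> a i (Suc (j i)))" unfolding bound_def by auto
    finally show ?thesis .
  qed
  have "valid \<subseteq> Pi\<^sub>E UNIV (\<lambda>i. {..k i})" unfolding valid_def
    by (auto simp: PiE_UNIV_domain, metis less_imp_le order_refl)
  then have "finite valid" by (rule finite_subset) (simp add: finite_PiE)
  then have "finite (piece ` valid)" by simp
  moreover have "g t \<in> \<Union> (lattice_segment ` piece ` valid)" if t: "0 \<le> t" "ereal t \<le> L" for t
  proof -
    obtain j where j: "j \<in> valid" "\<forall>i. a i (j i) \<le> t" "\<forall>i. j i < k i \<longrightarrow> t \<le> a i (Suc (j i))"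
      using common_piece_exists[OF data L t] unfolding valid_def by blast
    have "Max (range (\<lambda>i. a i (j i))) \<le> t" using j(2) by simp
    moreover have "ereal t \<le> Min (range (bound j))" using j(3) hi_iff by blast
    moreover have "g t = (\<chi> i. c i (j i)) + t *\<^sub>R int_vec (\<lambda>i. m i (j i))"
      using common_piece_affine[OF data] j unfolding valid_def by blast
    ultimately have "g t \<in> lattice_segment (piece j)" unfolding piece_def by (simp add: lattice_segmentI)
    then show ?thesis using j(1) by blast
  qed
  moreover have "0 \<le> t \<and> ereal t \<le> L \<and> g t = B + t *\<^sub>R int_vec z"
    if in_P: "(B, z, \<alpha>, \<beta>) \<in> piece ` valid" "\<alpha> \<le> t" "ereal t \<le> \<beta>" for B z \<alpha> \<beta> t
  proof -
    obtain j where j: "j \<in> valid" "B = (\<chi> i. c i (j i))" "z = (\<lambda>i. m i (j i))"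
      "\<alpha> = Max (range (\<lambda>i. a i (j i)))" "\<beta> = Min (range (bound j))"
      using in_P(1) unfolding piece_def by auto
    have "a i (j i) \<le> t" for i using in_P(2) j(4) by (simp add: Max_le_iff)
    moreover have "j i < k i \<Longrightarrow> t \<le> a i (Suc (j i))" for i using hi_iff[of t j] in_P(3) j(5) by blast
    ultimately show ?thesis using common_piece_affine[OF data, of j t] j(1-3) unfolding valid_def by blast
  qed
  ultimately show ?thesis using that by blast
qed

section \<open>Chains and path metrics\<close>

definition chain_len :: "('e \<times> real \<times> real) list \<Rightarrow> real" where
  "chain_len cs = sum_list (map (\<lambda>(e, s, s'). \<bar>s - s'\<bar>) cs)"

lemma chain_len_nonneg: "chain_len cs \<ge> 0"
  unfolding chain_len_def by (induction cs) auto

lemma chain_len_Cons[simp]: "chain_len ((e,s,s') # cs) = \<bar>s - s'\<bar> + chain_len cs"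
  unfolding chain_len_def by simp

lemma chain_len_Nil[simp]: "chain_len [] = 0"
  unfolding chain_len_def by simp

lemma chain_len_append: "chain_len (cs @ ds) = chain_len cs + chain_len ds"
  unfolding chain_len_def by simp

lemma gdist_chain_len: "gdist G x y = Inf {chain_len cs | cs. gchain G x cs y}"
  unfolding gdist_def chain_len_def by simp

lemma gchain_append: "gchain G x cs y \<Longrightarrow> gchain G y ds z \<Longrightarrow> gchain G x (cs @ ds) z"
proof (induction cs arbitrary: x)
  case Nil then show ?case by simp
next
  case (Cons c cs) then show ?case by (cases c) auto
qed

lemma gdist_le: "gchain G x cs y \<Longrightarrow> gdist G x y \<le> chain_len cs"
  unfolding gdist_chain_len
  using chain_len_nonneg by (intro cInf_lower bdd_belowI[of _ 0]) auto

lemma gdist_ge: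
  assumes "\<exists>cs. gchain G x cs y" "\<And>cs. gchain G x cs y \<Longrightarrow> b \<le> chain_len cs"
  shows "b \<le> gdist G x y"
  unfolding gdist_chain_len using assms by (intro cInf_greatest) auto

lemma gdist_lessD:
  assumes "\<exists>cs. gchain G x cs y" "gdist G x y < d"
  shows "\<exists>cs. gchain G x cs y \<and> chain_len cs < d"
  using assms unfolding gdist_chain_len using cInf_lessD[of "{chain_len cs | cs. gchain G x cs y}" d] by auto

lemma gdist_nonneg: "\<exists>cs. gchain G x cs y \<Longrightarrow> gdist G x y \<ge> 0"
  using gdist_ge[of G x y 0] chain_len_nonneg by auto

lemma gdist_refl: "gdist G x x = 0"
proof -
  have "gchain G x [] x" by simp
  then show ?thesis using gdist_le[of G x "[]" x] gdist_nonneg[of G x x] by fastforce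
qed

definition edge_lipschitz :: "('v, 'e) tcurve \<Rightarrow> (('v, 'e) tpt \<Rightarrow> real) \<Rightarrow> real \<Rightarrow> bool" where
  "edge_lipschitz G phi M \<longleftrightarrow> (\<forall>e\<in>edges G. \<forall>s s'. 0 \<le> s \<longrightarrow> 0 \<le> s' \<longrightarrow> ereal s \<le> len G e \<longrightarrow> ereal s' \<le> len G e \<longrightarrow>
      \<bar>phi (pt G e s) - phi (pt G e s')\<bar> \<le> M * \<bar>s - s'\<bar>)"

lemma gchain_lipschitz:
  assumes "edge_lipschitz G phi M" "gchain G x cs y"
  shows "\<bar>phi x - phi y\<bar> \<le> M * chain_len cs"
  using assms(2)
proof (induction cs arbitrary: x)
  case Nil then show ?case by simp
next
  case (Cons c cs)
  obtain e s s' where c: "c = (e,s,s')" by (cases c)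
  have h: "e \<in> edges G" "0 \<le> s" "0 \<le> s'" "ereal s \<le> len G e" "ereal s' \<le> len G e"
    "pt G e s = x" "gchain G (pt G e s') cs y" using Cons.prems c by auto
  have "\<bar>phi x - phi (pt G e s')\<bar> \<le> M * \<bar>s - s'\<bar>" using assms(1) h unfolding edge_lipschitz_def by metis
  moreover have "\<bar>phi (pt G e s') - phi y\<bar> \<le> M * chain_len cs" using Cons.IH[OF h(7)] .
  ultimately show ?case using c by (simp add: algebra_simps)
qed

lemma gdist_lipschitz:
  assumes "edge_lipschitz G phi 1" "\<exists>cs. gchain G x cs y"
  shows "\<bar>phi x - phi y\<bar> \<le> gdist G x y"
  using gdist_ge[OF assms(2)] gchain_lipschitz[OF assms(1)] by simp

lemma ichain_nonneg: "ichain S p cs q \<Longrightarrow> sum_list (map snd cs) \<ge> 0"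
proof (induction cs arbitrary: p)
  case (Cons c cs)
  obtain r lam where c: "c = (r, lam)" by (cases c)
  then have "lat_dir (r - p) lam" "ichain S r cs q" using Cons.prems by auto
  then have "lam \<ge> 0" "sum_list (map snd cs) \<ge> 0" using Cons.IH unfolding lat_dir_def by auto
  then show ?case using c by simp
qed simp

lemma latdist_le: "ichain S p cs q \<Longrightarrow> latdist S p q \<le> sum_list (map snd cs)"
  unfolding latdist_def using ichain_nonneg by (intro cInf_lower bdd_belowI[of _ 0]) auto

lemma latdist_ge:
  assumes "\<exists>cs. ichain S p cs q" "\<And>cs. ichain S p cs q \<Longrightarrow> b \<le> sum_list (map snd cs)"
  shows "b \<le> latdist S p q"
  unfolding latdist_def using assms by (intro cInf_greatest) auto

lemma latdist_refl: "latdist S p p = 0"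
proof -
  have "ichain S p [] p" by simp
  then show ?thesis using latdist_le[of S p "[]" p] latdist_ge[of S p p 0] ichain_nonneg by fastforce
qed

lemma ichain_lipschitz:
  assumes seg: "\<And>p r lam. closed_segment p r \<subseteq> S \<Longrightarrow> lat_dir (r - p) lam \<Longrightarrow> \<bar>Phi r - Phi p\<bar> \<le> lam"
  shows "ichain S p cs q \<Longrightarrow> \<bar>Phi q - Phi p\<bar> \<le> sum_list (map snd cs)"
proof (induction cs arbitrary: p)
  case Nil then show ?case by simp
next
  case (Cons c cs)
  obtain r lam where c: "c = (r, lam)" by (cases c)
  have h: "closed_segment p r \<subseteq> S" "lat_dir (r - p) lam" "ichain S r cs q" using Cons.prems c by auto
  have "\<bar>Phi r - Phi p\<bar> \<le> lam" using seg h by blast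
  moreover have "\<bar>Phi q - Phi r\<bar> \<le> sum_list (map snd cs)" using Cons.IH h(3) .
  ultimately show ?case using c by simp
qed

lemma point_on_closed_segment:
  fixes p q v :: "'a::real_vector"
  assumes "q - p = lam *\<^sub>R v" "0 \<le> s" "s \<le> lam"
  shows "p + s *\<^sub>R v \<in> closed_segment p q"
proof (cases "lam = 0")
  case False
  have "p + s *\<^sub>R v = (1 - s / lam) *\<^sub>R p + (s / lam) *\<^sub>R q"
    using assms(1) False by (simp add: algebra_simps eq_diff_eq)
  moreover have "0 \<le> s / lam" "s / lam \<le> 1" using assms False by auto
  ultimately show ?thesis unfolding closed_segment_def by blast
qed (use assms in simp)

section \<open>The homomorphism \<open>psi\<close> is evaluation along \<open>theta\<close>\<close>

locale curve_coordinates =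
  fixes G :: "('v, 'e) tcurve"
    and fs :: "'n::finite \<Rightarrow> ('v, 'e) tpt \<Rightarrow> real"
    and psi :: "(real^'n \<Rightarrow> ereal) \<Rightarrow> ('v, 'e) tpt \<Rightarrow> ereal"
    and theta :: "('v, 'e) tpt \<Rightarrow> real^'n"
  assumes curve: "tropical_curve G"
    and rat: "\<forall>i. rat_real_fun G (fs i)"
    and hom: "induced_hom G fs psi"
    and theta_def: "theta = (\<lambda>x. \<chi> i. fs i x)"
begin

lemma theta_nth [simp]: "theta x $ i = fs i x"
  by (simp add: theta_def)

lemma psi_max: "f \<in> TRat \<Longrightarrow> g \<in> TRat \<Longrightarrow> x \<in> pts_fin G \<Longrightarrow>
    psi (\<lambda>y. max (f y) (g y)) x = max (psi f x) (psi g x)"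
  using hom unfolding induced_hom_def by blast

lemma psi_plus: "f \<in> TRat \<Longrightarrow> g \<in> TRat \<Longrightarrow> x \<in> pts_fin G \<Longrightarrow>
    psi (\<lambda>y. f y + g y) x = psi f x + psi g x"
  using hom unfolding induced_hom_def by blast

lemma psi_const: "t \<noteq> \<infinity> \<Longrightarrow> x \<in> pts_fin G \<Longrightarrow> psi (\<lambda>_. t) x = t"
  using hom unfolding induced_hom_def by blast

lemma psi_coordinate: "x \<in> pts_fin G \<Longrightarrow> psi (\<lambda>y. ereal (y $ i)) x = ereal (fs i x)"
  using hom unfolding induced_hom_def by blast

lemma psi_monomial:
  assumes x: "x \<in> pts_fin G"
  shows "psi (\<lambda>y. ereal (c + (\<Sum>i\<in>UNIV. real (a i) * y $ i))) x
         = ereal (c + (\<Sum>i\<in>UNIV. real (a i) * theta x $ i))"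
proof (induction "sum a UNIV" arbitrary: a)
  case 0
  then show ?case using psi_const[OF _ x, of "ereal c"] by simp
next
  case (Suc n)
  then obtain j where j: "a j > 0" by (metis gr0I nat.distinct(1) sum.neutral)
  define a' where "a' = a(j := a j - 1)"
  have "sum a UNIV = Suc (sum a' UNIV)"
    using j unfolding a'_def by (simp add: sum.remove[of UNIV j])
  then have IH: "psi (\<lambda>y. ereal (c + (\<Sum>i\<in>UNIV. real (a' i) * y $ i))) x
      = ereal (c + (\<Sum>i\<in>UNIV. real (a' i) * theta x $ i))"
    using Suc by simp
  have "(\<lambda>y. ereal (c + (\<Sum>i\<in>UNIV. real (a i) * y $ i)))
      = (\<lambda>y. ereal (c + (\<Sum>i\<in>UNIV. real (a' i) * y $ i)) + ereal (y $ j))"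
    using monomial_decrement[of a j, OF j] unfolding a'_def by (simp add: add.assoc)
  then show ?case
    using psi_plus[OF monomial_TRat coordinate_TRat x] IH psi_coordinate[OF x]
      monomial_decrement[of a j "theta x", OF j]
    unfolding a'_def by (simp add: add.assoc)
qed

lemma psi_tpoly:
  assumes x: "x \<in> pts_fin G" and S: "finite S"
  shows "psi (tpoly S) x = tpoly S (theta x)"
  using S
proof (induction S)
  case empty
  then show ?case by (simp add: tpoly_empty psi_const[OF _ x])
next
  case (insert s S)
  obtain a c where s: "s = (a, c)" by (cases s)
  have e: "tpoly (insert s S) = (\<lambda>y. max (ereal (c + (\<Sum>i\<in>UNIV. real (a i) * y $ i))) (tpoly S y))"
    by (rule ext) (simp add: tpoly_insert s)
  show ?case
    unfolding e psi_max[OF monomial_TRat tpoly_TRat[OF insert(1)] x] psi_monomial[OF x] insert(3)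
    by simp
qed

lemma psi_TPoly: "p \<in> TPoly \<Longrightarrow> x \<in> pts_fin G \<Longrightarrow> psi p x = p (theta x)"
  unfolding TPoly_eq_tpoly using psi_tpoly by blast

lemma psi_eq_comp_theta:
  assumes f: "f \<in> TRat" and x: "x \<in> pts_fin G"
  shows "psi f x = f (theta x)"
proof -
  obtain p q where pq: "f = (\<lambda>x. p x - q x)" "p \<in> TPoly" "q \<in> TPoly" "q \<noteq> (\<lambda>_. -\<infinity>)"
    using f unfolding TRat_def by blast
  have q_real: "\<exists>r. q y = ereal r" for y using TPoly_real pq by blast
  have "(\<lambda>y. f y + q y) = p"
  proof
    fix y
    obtain r where "q y = ereal r" using q_real by blast
    then show "f y + q y = p y" unfolding pq(1) by (cases "p y") auto
  qed
  then have "p (theta x) = psi f x + q (theta x)"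
    using psi_plus[OF f TPoly_TRat[OF pq(3)] x] psi_TPoly pq x by simp
  moreover obtain r where "q (theta x) = ereal r" using q_real by blast
  moreover have "f (theta x) = p (theta x) - q (theta x)" using pq(1) by simp
  ultimately show ?thesis by (cases "psi f x") auto
qed

lemma theta_image_subset_Vcong: "theta ` pts_fin G \<subseteq> Vcong (kerpsi G psi)"
proof
  fix y assume "y \<in> theta ` pts_fin G"
  then obtain w where w: "w \<in> pts_fin G" "y = theta w" by blast
  show "y \<in> Vcong (kerpsi G psi)" unfolding Vcong_def
  proof (clarify)
    fix f g assume "(f, g) \<in> kerpsi G psi"
    then have "f \<in> TRat" "g \<in> TRat" "psi f w = psi g w" using w(1) unfolding kerpsi_def by auto
    then show "f y = g y" using psi_eq_comp_theta[of f w] psi_eq_comp_theta[of g w] w by simp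
  qed
qed

lemma kerpsi_eq_Econg: "kerpsi G psi = Econg (Vcong (kerpsi G psi))"
proof
  show "kerpsi G psi \<subseteq> Econg (Vcong (kerpsi G psi))"
    unfolding Econg_def Vcong_def by (auto simp: kerpsi_def)
  show "Econg (Vcong (kerpsi G psi)) \<subseteq> kerpsi G psi"
  proof (clarify)
    fix f g assume "(f, g) \<in> Econg (Vcong (kerpsi G psi))"
    then have fg: "f \<in> TRat" "g \<in> TRat" "\<forall>x\<in>Vcong (kerpsi G psi). f x = g x"
      unfolding Econg_def by auto
    have "psi f w = psi g w" if "w \<in> pts_fin G" for w
      using fg theta_image_subset_Vcong that psi_eq_comp_theta[OF fg(1) that] psi_eq_comp_theta[OF fg(2) that]
      by auto
    then show "(f, g) \<in> kerpsi G psi" unfolding kerpsi_def using fg by simp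
  qed
qed

end

section \<open>Basic facts on the curve and continuity of \<open>theta\<close>\<close>

context curve_coordinates
begin

lemma finite_edges: "finite (edges G)" and finite_verts: "finite (verts G)" and verts_ne: "verts G \<noteq> {}"
  using curve unfolding tropical_curve_def by auto

lemma edge_ends_len: "e \<in> edges G \<Longrightarrow> src G e \<in> verts G \<and> tgt G e \<in> verts G \<and> len G e > 0"
  using curve unfolding tropical_curve_def by auto

lemma infinite_edge_leaf: "e \<in> edges G \<Longrightarrow> len G e = \<infinity> \<Longrightarrow> src G e \<noteq> tgt G e \<and> degree G (tgt G e) = 1"
  using curve unfolding tropical_curve_def by auto

lemma verts_connected: "u \<in> verts G \<Longrightarrow> v \<in> verts G \<Longrightarrow> (u, v) \<in> (adj G)\<^sup>*"
  using curve unfolding tropical_curve_def by auto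

lemma degree_ge2:
  assumes "e1 \<in> edges G" "e2 \<in> edges G"
    "(src G e1 = w \<and> tgt G e2 = w) \<or> (tgt G e1 = w \<and> tgt G e2 = w \<and> e1 \<noteq> e2)"
  shows "degree G w \<ge> 2"
proof -
  have f1: "finite {e \<in> edges G. src G e = w}" "finite {e \<in> edges G. tgt G e = w}"
    using finite_edges by auto
  show ?thesis using assms(3)
  proof
    assume a: "src G e1 = w \<and> tgt G e2 = w"
    have "card {e \<in> edges G. src G e = w} \<ge> 1" using a assms(1) f1(1)
      by (metis (mono_tags, lifting) One_nat_def Suc_leI card_gt_0_iff empty_iff mem_Collect_eq)
    moreover have "card {e \<in> edges G. tgt G e = w} \<ge> 1" using a assms(2) f1(2)
      by (metis (mono_tags, lifting) One_nat_def Suc_leI card_gt_0_iff empty_iff mem_Collect_eq)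
    ultimately show ?thesis unfolding degree_def by simp
  next
    assume a: "tgt G e1 = w \<and> tgt G e2 = w \<and> e1 \<noteq> e2"
    have "{e1, e2} \<subseteq> {e \<in> edges G. tgt G e = w}" using a assms by auto
    then have "card {e1, e2} \<le> card {e \<in> edges G. tgt G e = w}" using f1(2) by (rule card_mono[rotated])
    then show ?thesis using a unfolding degree_def by simp
  qed
qed

lemma src_not_inf: "e \<in> edges G \<Longrightarrow> src G e \<notin> inf_verts G"
proof
  assume e: "e \<in> edges G" and "src G e \<in> inf_verts G"
  then obtain e' where e': "e' \<in> edges G" "len G e' = \<infinity>" "tgt G e' = src G e"
    unfolding inf_verts_def by auto
  have "degree G (src G e) \<ge> 2" using degree_ge2[OF e e'(1)] e' by auto
  then show False using infinite_edge_leaf[OF e'(1,2)] e'(3) by simp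
qed

lemma tgt_not_inf: "e \<in> edges G \<Longrightarrow> len G e \<noteq> \<infinity> \<Longrightarrow> tgt G e \<notin> inf_verts G"
proof
  assume e: "e \<in> edges G" "len G e \<noteq> \<infinity>" and "tgt G e \<in> inf_verts G"
  then obtain e' where e': "e' \<in> edges G" "len G e' = \<infinity>" "tgt G e' = tgt G e"
    unfolding inf_verts_def by auto
  have "e \<noteq> e'" using e e' by auto
  then have "degree G (tgt G e) \<ge> 2" using degree_ge2[OF e(1) e'(1)] e' by auto
  then show False using infinite_edge_leaf[OF e'(1,2)] e'(3) by simp
qed

lemma infinite_edge_unique:
  assumes "e0 \<in> edges G" "len G e0 = \<infinity>" "e \<in> edges G" "tgt G e = tgt G e0"
  shows "e = e0"
proof (rule ccontr)
  assume "e \<noteq> e0"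
  then have "degree G (tgt G e0) \<ge> 2" using degree_ge2[OF assms(3,1)] assms(4) by auto
  then show False using infinite_edge_leaf[OF assms(1,2)] by simp
qed

lemma finite_len_real: "e \<in> edges G \<Longrightarrow> len G e \<noteq> \<infinity> \<Longrightarrow> len G e = ereal (real_of_ereal (len G e)) \<and> real_of_ereal (len G e) > 0"
  using edge_ends_len[of e] by (cases "len G e") auto

lemma pt_in_pts_fin:
  assumes "e \<in> edges G" "0 \<le> t" "ereal t \<le> len G e"
  shows "pt G e t \<in> pts_fin G"
proof -
  have "len G e > 0" using edge_ends_len assms(1) by blast
  consider "t = 0" | "t \<noteq> 0" "ereal t = len G e" | "t \<noteq> 0" "ereal t \<noteq> len G e" by blast
  then show ?thesis
  proof cases
    case 1 then show ?thesis using src_not_inf[OF assms(1)] edge_ends_len[OF assms(1)]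
      unfolding pt_def pts_fin_def by auto
  next
    case 2 then have "len G e \<noteq> \<infinity>" by auto
    then show ?thesis using 2 tgt_not_inf[OF assms(1)] edge_ends_len[OF assms(1)]
      unfolding pt_def pts_fin_def by auto
  next
    case 3 then show ?thesis using assms unfolding pt_def pts_fin_def by auto
  qed
qed

lemma pts_fin_ne: "pts_fin G \<noteq> {}"
proof -
  obtain v where v: "v \<in> verts G" using verts_ne by blast
  show ?thesis
  proof (cases "v \<in> inf_verts G")
    case False then show ?thesis using v unfolding pts_fin_def by auto
  next
    case True
    then obtain e where e: "e \<in> edges G" "len G e = \<infinity>" unfolding inf_verts_def by auto
    then have "Ein e 1 \<in> pts_fin G" unfolding pts_fin_def by auto
    then show ?thesis by blast
  qed
qed

lemma pt_Ein: "0 < t \<Longrightarrow> ereal t < len G e \<Longrightarrow> pt G e t = Ein e t"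
  unfolding pt_def by auto

lemma pt_0: "pt G e 0 = Vtx (src G e)"
  unfolding pt_def by auto

lemma pt_L: assumes "e \<in> edges G" "ereal L = len G e" shows "pt G e L = Vtx (tgt G e)"
proof -
  have "L \<noteq> 0" using edge_ends_len[OF assms(1)] assms(2) by (metis less_irrefl zero_ereal_def)
  then show ?thesis unfolding pt_def using assms by auto
qed

lemma gchain_along_finite_edge:
  assumes e: "e \<in> edges G" and L: "len G e \<noteq> \<infinity>"
  shows "\<exists>cs. gchain G (Vtx (src G e)) cs (Vtx (tgt G e))" "\<exists>cs. gchain G (Vtx (tgt G e)) cs (Vtx (src G e))"
proof -
  define l where "l = real_of_ereal (len G e)"
  have l: "len G e = ereal l" "l > 0" using finite_len_real[OF e L] unfolding l_def by auto
  have "gchain G (Vtx (src G e)) [(e, 0, l)] (Vtx (tgt G e))" "gchain G (Vtx (tgt G e)) [(e, l, 0)] (Vtx (src G e))"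
    using e l pt_0 pt_L[OF e l(1)[symmetric]] by auto
  then show "\<exists>cs. gchain G (Vtx (src G e)) cs (Vtx (tgt G e))" "\<exists>cs. gchain G (Vtx (tgt G e)) cs (Vtx (src G e))"
    by blast+
qed

lemma gchain_from_vertex:
  assumes "(u, v) \<in> (adj G)\<^sup>*" "u \<in> verts G" "u \<notin> inf_verts G"
  shows "(v \<notin> inf_verts G \<and> (\<exists>cs. gchain G (Vtx u) cs (Vtx v))) \<or>
         (\<exists>e. e \<in> edges G \<and> len G e = \<infinity> \<and> tgt G e = v \<and> (\<exists>cs. gchain G (Vtx u) cs (Vtx (src G e))))"
  using assms(1)
proof (induction rule: rtrancl_induct)
  case base
  then show ?case using assms(3) by (auto intro: exI[of _ "[]"])
next
  case (step v w)
  from step(2) obtain e where e: "e \<in> edges G" "(v = src G e \<and> w = tgt G e) \<or> (v = tgt G e \<and> w = src G e)"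
    unfolding adj_def by auto
  from step(3) show ?case
  proof
    assume A: "v \<notin> inf_verts G \<and> (\<exists>cs. gchain G (Vtx u) cs (Vtx v))"
    then obtain cs where cs: "gchain G (Vtx u) cs (Vtx v)" by blast
    from e(2) show ?case
    proof
      assume vw: "v = src G e \<and> w = tgt G e"
      show ?case
      proof (cases "len G e = \<infinity>")
        case True then show ?thesis using e(1) vw cs by blast
      next
        case False
        then obtain cs' where "gchain G (Vtx v) cs' (Vtx w)" using gchain_along_finite_edge[OF e(1)] vw
          by blast
        then have "gchain G (Vtx u) (cs @ cs') (Vtx w)" using gchain_append cs by blast
        then show ?thesis using tgt_not_inf[OF e(1) False] vw by blast
      qed
    next
      assume vw: "v = tgt G e \<and> w = src G e"
      have "len G e \<noteq> \<infinity>" using A vw e(1) unfolding inf_verts_def by auto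
      then obtain cs' where "gchain G (Vtx v) cs' (Vtx w)" using gchain_along_finite_edge[OF e(1)] vw by blast
      then have "gchain G (Vtx u) (cs @ cs') (Vtx w)" using gchain_append cs by blast
      then show ?thesis using src_not_inf[OF e(1)] vw by blast
    qed
  next
    assume "\<exists>e. e \<in> edges G \<and> len G e = \<infinity> \<and> tgt G e = v \<and> (\<exists>cs. gchain G (Vtx u) cs (Vtx (src G e)))"
    then obtain e0 cs where e0: "e0 \<in> edges G" "len G e0 = \<infinity>" "tgt G e0 = v" "gchain G (Vtx u) cs (Vtx (src G e0))"
      by blast
    from e(2) show ?case
    proof
      assume vw: "v = src G e \<and> w = tgt G e"
      then have "src G e = tgt G e0" using e0(3) by simp
      then have "src G e \<in> inf_verts G" using e0(1,2) unfolding inf_verts_def by blast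
      then show ?case using src_not_inf[OF e(1)] by simp
    qed (use infinite_edge_unique[OF e0(1,2) e(1)] e0 src_not_inf[OF e0(1)] in auto)
  qed
qed

lemma gchain_via_vertex:
  assumes "x \<in> pts_fin G"
  shows "\<exists>u. u \<in> verts G \<and> u \<notin> inf_verts G \<and> (\<exists>cs. gchain G x cs (Vtx u)) \<and> (\<exists>cs. gchain G (Vtx u) cs x)"
  using assms unfolding pts_fin_def
proof
  assume "x \<in> Vtx ` (verts G - inf_verts G)"
  then obtain v where "x = Vtx v" "v \<in> verts G" "v \<notin> inf_verts G" by auto
  then show ?thesis by (intro exI[of _ v]) (auto intro!: exI[of _ "[]"])
next
  assume "x \<in> {Ein e t |e t. e \<in> edges G \<and> 0 < t \<and> ereal t < len G e}"
  then obtain e t where et: "x = Ein e t" "e \<in> edges G" "0 < t" "ereal t < len G e" by blast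
  have l0: "ereal 0 \<le> len G e" using edge_ends_len[OF et(2)]
    by (simp add: zero_ereal_def[symmetric] less_imp_le)
  have "gchain G x [(e, t, 0)] (Vtx (src G e))" "gchain G (Vtx (src G e)) [(e, 0, t)] x"
    using l0 et pt_Ein[OF et(3,4)] pt_0 edge_ends_len[OF et(2)] by auto
  then show ?thesis using edge_ends_len[OF et(2)] src_not_inf[OF et(2)] by blast
qed

lemma gchain_exists:
  assumes "x \<in> pts_fin G" "y \<in> pts_fin G"
  shows "\<exists>cs. gchain G x cs y"
proof -
  obtain u cs1 where u: "u \<in> verts G" "u \<notin> inf_verts G" "gchain G x cs1 (Vtx u)"
    using gchain_via_vertex[OF assms(1)] by blast
  obtain w cs3 where w: "w \<in> verts G" "w \<notin> inf_verts G" "gchain G (Vtx w) cs3 y"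
    using gchain_via_vertex[OF assms(2)] by blast
  obtain cs2 where "gchain G (Vtx u) cs2 (Vtx w)"
    using gchain_from_vertex[OF verts_connected[OF u(1) w(1)] u(1,2)] w(2) unfolding inf_verts_def by blast
  then show ?thesis using gchain_append u(3) w(3) by blast
qed

lemma coordinates_edge_lipschitz: "\<exists>M\<ge>0. \<forall>i. edge_lipschitz G (fs i) M"
proof -
  have "\<forall>e\<in>edges G. \<forall>i. \<exists>M\<ge>0. \<forall>s s'. 0 \<le> s \<longrightarrow> 0 \<le> s' \<longrightarrow> ereal s \<le> len G e \<longrightarrow> ereal s' \<le> len G e \<longrightarrow>
           \<bar>fs i (pt G e s) - fs i (pt G e s')\<bar> \<le> M * \<bar>s - s'\<bar>"
  proof (intro ballI allI)
    fix e i assume e: "e \<in> edges G"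
    have "pw_affine_int (\<lambda>t. fs i (pt G e t)) (len G e)" using rat e unfolding rat_real_fun_def by blast
    from pw_affine_int_lipschitz[OF this] show "\<exists>M\<ge>0. \<forall>s s'. 0 \<le> s \<longrightarrow> 0 \<le> s' \<longrightarrow> ereal s \<le> len G e \<longrightarrow> ereal s' \<le> len G e \<longrightarrow>
           \<bar>fs i (pt G e s) - fs i (pt G e s')\<bar> \<le> M * \<bar>s - s'\<bar>" using edge_ends_len[OF e] by simp
  qed
  then obtain Mf where Mf: "\<forall>e\<in>edges G. \<forall>i. Mf e i \<ge> 0 \<and> (\<forall>s s'. 0 \<le> s \<longrightarrow> 0 \<le> s' \<longrightarrow> ereal s \<le> len G e \<longrightarrow> ereal s' \<le> len G e \<longrightarrow>
           \<bar>fs i (pt G e s) - fs i (pt G e s')\<bar> \<le> Mf e i * \<bar>s - s'\<bar>)"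
    by metis
  define M where "M = (\<Sum>e\<in>edges G. \<Sum>i\<in>UNIV. Mf e i)"
  have Mge: "Mf e i \<le> M" if "e \<in> edges G" for e i
  proof -
    have "Mf e i \<le> (\<Sum>i\<in>UNIV. Mf e i)" using Mf that by (intro member_le_sum) auto
    also have "\<dots> \<le> M" unfolding M_def using Mf that finite_edges
      by (intro member_le_sum[where f="\<lambda>e. \<Sum>i\<in>UNIV. Mf e i"]) (auto intro: sum_nonneg)
    finally show ?thesis .
  qed
  have M0: "M \<ge> 0" unfolding M_def using Mf by (auto intro!: sum_nonneg)
  show ?thesis
  proof (intro exI[of _ M] conjI M0 allI)
    fix i show "edge_lipschitz G (fs i) M" unfolding edge_lipschitz_def
    proof (intro ballI allI impI)
      fix e s s' assume e: "e \<in> edges G" and ss: "0 \<le> s" "0 \<le> s'" "ereal s \<le> len G e" "ereal s' \<le> len G e"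
      have "\<bar>fs i (pt G e s) - fs i (pt G e s')\<bar> \<le> Mf e i * \<bar>s - s'\<bar>" using Mf e ss by blast
      also have "\<dots> \<le> M * \<bar>s - s'\<bar>" using Mge[OF e] by (simp add: mult_right_mono)
      finally show "\<bar>fs i (pt G e s) - fs i (pt G e s')\<bar> \<le> M * \<bar>s - s'\<bar>" .
    qed
  qed
qed

lemma theta_continuous:
  assumes x: "x \<in> pts_fin G" and eps: "\<epsilon> > 0"
  shows "\<exists>\<delta>>0. \<forall>y \<in> pts_fin G. gdist G x y < \<delta> \<longrightarrow> dist (theta y) (theta x) < \<epsilon>"
proof -
  obtain M where M: "M \<ge> 0" "\<And>i. edge_lipschitz G (fs i) M" using coordinates_edge_lipschitz by blast
  define K where "K = real CARD('n) * M"
  have K0: "K \<ge> 0" unfolding K_def using M by simp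
  define d where "d = \<epsilon> / (K + 1)"
  have d0: "d > 0" unfolding d_def using eps K0 by simp
  show ?thesis
  proof (intro exI[of _ d] conjI d0 ballI impI)
    fix y assume y: "y \<in> pts_fin G" and lt: "gdist G x y < d"
    obtain cs where cs: "gchain G x cs y" "chain_len cs < d"
      using gdist_lessD[OF gchain_exists[OF x y] lt] by blast
    have "dist (theta y) (theta x) = norm (theta y - theta x)" by (simp add: dist_norm)
    also have "\<dots> \<le> (\<Sum>i\<in>UNIV. \<bar>(theta y - theta x) $ i\<bar>)" by (rule norm_le_l1_cart)
    also have "\<dots> \<le> (\<Sum>i\<in>(UNIV::'n set). M * chain_len cs)"
    proof (rule sum_mono)
      fix i
      have "\<bar>fs i x - fs i y\<bar> \<le> M * chain_len cs" using gchain_lipschitz[OF M(2) cs(1)] .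
      then show "\<bar>(theta y - theta x) $ i\<bar> \<le> M * chain_len cs" by (simp add: abs_minus_commute)
    qed
    also have "\<dots> = K * chain_len cs" unfolding K_def by simp
    also have "\<dots> \<le> K * d" using cs(2) K0 by (simp add: mult_left_mono)
    also have "\<dots> < \<epsilon>"
    proof -
      have "K * d < (K + 1) * d" using d0 by simp
      also have "\<dots> = \<epsilon>" unfolding d_def using K0 by simp
      finally show ?thesis .
    qed
    finally show "dist (theta y) (theta x) < \<epsilon>" .
  qed
qed

lemma theta_affine_right:
  assumes e: "e \<in> edges G" and t0: "0 \<le> t0" "ereal t0 < len G e"
  shows "\<exists>\<eta>>0. ereal (t0 + \<eta>) \<le> len G e \<and> (\<exists>z B. \<forall>t\<in>{t0..t0+\<eta>}. theta (pt G e t) = B + t *\<^sub>R int_vec z)"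
proof -
  have "\<forall>i. \<exists>\<eta>>0. ereal (t0 + \<eta>) \<le> len G e \<and> (\<exists>(m::int) c. \<forall>t\<in>{t0..t0+\<eta>}. fs i (pt G e t) = c + of_int m * t)"
    using pw_affine_int_affine_right[OF _ t0] rat e unfolding rat_real_fun_def by blast
  then obtain \<eta> m c where H: "\<forall>i. \<eta> i > 0 \<and> ereal (t0 + \<eta> i) \<le> len G e \<and>
      (\<forall>t\<in>{t0..t0+\<eta> i}. fs i (pt G e t) = c i + of_int (m i) * t)"
    by metis
  define \<eta>0 where "\<eta>0 = Min (range \<eta>)"
  have mi: "Min (range \<eta>) \<in> range \<eta>" by (rule Min_in) auto
  obtain i0 where i0: "\<eta>0 = \<eta> i0" using mi unfolding \<eta>0_def by (metis rangeE)
  have \<eta>0: "\<eta>0 > 0" "\<And>i. \<eta>0 \<le> \<eta> i"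
    using H i0 apply simp
    unfolding \<eta>0_def by (rule Min_le) auto
  have "ereal (t0 + \<eta>0) \<le> len G e" using H i0 by simp
  moreover have "\<forall>t\<in>{t0..t0+\<eta>0}. theta (pt G e t) = (\<chi> i. c i) + t *\<^sub>R int_vec m"
  proof
    fix t assume t: "t \<in> {t0..t0+\<eta>0}"
    show "theta (pt G e t) = (\<chi> i. c i) + t *\<^sub>R int_vec m"
    proof (rule vec_eq_iff[THEN iffD2], rule allI)
      fix i
      have "t \<in> {t0..t0+\<eta> i}" using t \<eta>0(2)[of i] by auto
      then show "theta (pt G e t) $ i = ((\<chi> i. c i) + t *\<^sub>R int_vec m) $ i" using H
        by (simp add: mult.commute)
    qed
  qed
  ultimately show ?thesis using \<eta>0(1) by blast
qed

lemma theta_affine_left: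
  assumes e: "e \<in> edges G" and t0: "0 < t0" "ereal t0 \<le> len G e"
  shows "\<exists>\<eta>>0. \<eta> \<le> t0 \<and> (\<exists>z B. \<forall>t\<in>{t0-\<eta>..t0}. theta (pt G e t) = B + t *\<^sub>R int_vec z)"
proof -
  have "\<forall>i. \<exists>\<eta>>0. \<eta> \<le> t0 \<and> (\<exists>(m::int) c. \<forall>t\<in>{t0-\<eta>..t0}. fs i (pt G e t) = c + of_int m * t)"
    using pw_affine_int_affine_left[OF _ t0] rat e unfolding rat_real_fun_def by blast
  then obtain \<eta> m c where H: "\<forall>i. \<eta> i > 0 \<and> \<eta> i \<le> t0 \<and> (\<forall>t\<in>{t0-\<eta> i..t0}. fs i (pt G e t) = c i + of_int (m i) * t)"
    by metis
  define \<eta>0 where "\<eta>0 = Min (range \<eta>)"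
  have mi: "Min (range \<eta>) \<in> range \<eta>" by (rule Min_in) auto
  obtain i0 where i0: "\<eta>0 = \<eta> i0" using mi unfolding \<eta>0_def by (metis rangeE)
  have \<eta>0: "\<eta>0 > 0" "\<And>i. \<eta>0 \<le> \<eta> i"
    using H i0 apply simp
    unfolding \<eta>0_def by (rule Min_le) auto
  have "\<eta>0 \<le> t0" using H i0 by simp
  moreover have "\<forall>t\<in>{t0-\<eta>0..t0}. theta (pt G e t) = (\<chi> i. c i) + t *\<^sub>R int_vec m"
  proof
    fix t assume t: "t \<in> {t0-\<eta>0..t0}"
    show "theta (pt G e t) = (\<chi> i. c i) + t *\<^sub>R int_vec m"
    proof (rule vec_eq_iff[THEN iffD2], rule allI)
      fix i
      have "t \<in> {t0-\<eta> i..t0}" using t \<eta>0(2)[of i] by auto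
      then show "theta (pt G e t) $ i = ((\<chi> i. c i) + t *\<^sub>R int_vec m) $ i" using H
        by (simp add: mult.commute)
    qed
  qed
  ultimately show ?thesis using \<eta>0(1) by blast
qed

end

section \<open>Test functions around a point\<close>

definition edge_len :: "('v, 'e) tcurve \<Rightarrow> 'e \<Rightarrow> real" where
  "edge_len G e = real_of_ereal (len G e)"

text \<open>A branch \<open>(e, \<sigma>, t\<^sub>0)\<close> at \<open>x\<close> leaves \<open>x = pt G e t\<^sub>0\<close> along the edge \<open>e\<close> in the direction
  \<open>\<sigma> = \<plusminus>1\<close>; \<open>branch_pt G b r\<close> is the point at distance \<open>r\<close> from \<open>x\<close> along it.\<close>

definition branches :: "('v, 'e) tcurve \<Rightarrow> ('v, 'e) tpt \<Rightarrow> ('e \<times> real \<times> real) set" where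
  "branches G x = (case x of Ein e0 t0 \<Rightarrow> {(e0, 1, t0), (e0, -1, t0)}
     | Vtx v \<Rightarrow> {(e, 1, 0) | e. e \<in> edges G \<and> src G e = v} \<union>
                {(e, -1, edge_len G e) | e. e \<in> edges G \<and> tgt G e = v \<and> len G e \<noteq> \<infinity>})"

definition branch_pt :: "('v, 'e) tcurve \<Rightarrow> ('e \<times> real \<times> real) \<Rightarrow> real \<Rightarrow> ('v, 'e) tpt" where
  "branch_pt G b r = pt G (fst b) (snd (snd b) + fst (snd b) * r)"

text \<open>The test functions, defined edgewise: \<open>cone G x \<rho>\<close> is \<open>\<rho>\<close> minus the distance to \<open>x\<close>, cut off
  at \<open>0\<close>; \<open>branch_coord G x \<rho> b\<close> is, near \<open>x\<close>, the distance to \<open>x\<close> along \<open>b\<close> and minus the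
  distance along the other branches, and vanishes beyond distance \<open>\<rho>\<close>.\<close>

definition cone_on_edge :: "('v, 'e) tcurve \<Rightarrow> ('v, 'e) tpt \<Rightarrow> real \<Rightarrow> 'e \<Rightarrow> real \<Rightarrow> real" where
  "cone_on_edge G x \<rho> e t = (case x of Ein e0 t0 \<Rightarrow> if e = e0 then tent \<rho> (t - t0) else 0
     | Vtx v \<Rightarrow> (if src G e = v then ramp \<rho> t else 0) +
               (if tgt G e = v \<and> len G e \<noteq> \<infinity> then ramp \<rho> (edge_len G e - t) else 0))"

definition cone :: "('v, 'e) tcurve \<Rightarrow> ('v, 'e) tpt \<Rightarrow> real \<Rightarrow> ('v, 'e) tpt \<Rightarrow> real" where
  "cone G x \<rho> w = (case w of Vtx u \<Rightarrow> if Vtx u = x then \<rho> else 0 | Ein e t \<Rightarrow> cone_on_edge G x \<rho> e t)"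

definition coord_on_edge :: "('v, 'e) tcurve \<Rightarrow> ('v, 'e) tpt \<Rightarrow> real \<Rightarrow> ('e \<times> real \<times> real) \<Rightarrow> 'e \<Rightarrow> real \<Rightarrow> real" where
  "coord_on_edge G x \<rho> b e t = (case x of Ein e0 t0 \<Rightarrow>
        if e = e0 then (if 0 < fst (snd b) then bump \<rho> (t - t0) + - bump \<rho> (t0 - t)
                        else - (bump \<rho> (t - t0) + - bump \<rho> (t0 - t))) else 0
     | Vtx v \<Rightarrow> (if src G e = v then (if b = (e, 1, 0) then bump \<rho> t else - bump \<rho> t) else 0) +
               (if tgt G e = v \<and> len G e \<noteq> \<infinity> then
                   (if b = (e, -1, edge_len G e) then bump \<rho> (edge_len G e - t) else - bump \<rho> (edge_len G e - t)) else 0))"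

definition branch_coord :: "('v, 'e) tcurve \<Rightarrow> ('v, 'e) tpt \<Rightarrow> real \<Rightarrow> ('e \<times> real \<times> real) \<Rightarrow> ('v, 'e) tpt \<Rightarrow> real" where
  "branch_coord G x \<rho> b w = (case w of Vtx u \<Rightarrow> 0 | Ein e t \<Rightarrow> coord_on_edge G x \<rho> b e t)"

text \<open>For such \<open>\<rho>\<close> the \<open>\<rho>\<close>-neighbourhood of \<open>x\<close> is the union of the branches at \<open>x\<close>, cut at
  length \<open>\<rho>\<close>.\<close>

definition small_radius :: "('v, 'e) tcurve \<Rightarrow> ('v, 'e) tpt \<Rightarrow> real \<Rightarrow> bool" where
  "small_radius G x \<rho> \<longleftrightarrow> 0 < \<rho> \<and> (\<forall>e\<in>edges G. len G e \<noteq> \<infinity> \<longrightarrow> 2 * \<rho> \<le> edge_len G e) \<and>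
     (\<forall>e0 t0. x = Ein e0 t0 \<longrightarrow> \<rho> \<le> t0 \<and> ereal (t0 + \<rho>) \<le> len G e0)"

context curve_coordinates
begin

lemma edge_len_real: "e \<in> edges G \<Longrightarrow> len G e \<noteq> \<infinity> \<Longrightarrow> len G e = ereal (edge_len G e) \<and> edge_len G e > 0"
  unfolding edge_len_def using finite_len_real by blast

lemma finite_branches: "finite (branches G x)"
proof (cases x)
  case (Vtx v)
  have "branches G x \<subseteq> (\<lambda>e. (e, 1, 0)) ` edges G \<union> (\<lambda>e. (e, -1, edge_len G e)) ` edges G"
    unfolding branches_def Vtx by auto
  then show ?thesis by (rule finite_subset) (use finite_edges in auto)
next
  case (Ein e t) then show ?thesis unfolding branches_def by simp
qed

lemma branch_props:
  assumes x: "x \<in> pts_fin G" and g: "small_radius G x \<rho>" and b: "b \<in> branches G x"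
  shows "fst b \<in> edges G \<and> (fst (snd b) = 1 \<or> fst (snd b) = -1) \<and> pt G (fst b) (snd (snd b)) = x \<and>
         (\<forall>r. 0 \<le> r \<longrightarrow> r \<le> \<rho> \<longrightarrow> 0 \<le> snd (snd b) + fst (snd b) * r \<and> ereal (snd (snd b) + fst (snd b) * r) \<le> len G (fst b))"
proof (cases x)
  case (Ein e0 t0)
  then have e0: "e0 \<in> edges G" "0 < t0" "ereal t0 < len G e0" using x unfolding pts_fin_def by auto
  have gg: "\<rho> \<le> t0" "ereal (t0 + \<rho>) \<le> len G e0" using g Ein unfolding small_radius_def by auto
  have "ereal (t0 + r) \<le> len G e0" if "0 \<le> r" "r \<le> \<rho>" for r
    using gg(2) that by (metis add_left_mono ereal_less_eq(3) order.trans)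
  moreover have "ereal (t0 - r) \<le> len G e0" if "0 \<le> r" for r
    using e0(3) that
      by (metis diff_ge_0_iff_ge diff_le_eq ereal_less_eq(3) le_add_same_cancel1 less_imp_le order.trans)
  ultimately show ?thesis using b Ein e0 gg pt_Ein[OF e0(2,3)] unfolding branches_def by auto
next
  case (Vtx v)
  from b consider (s) e where "b = (e, 1, 0)" "e \<in> edges G" "src G e = v"
    | (t) e where "b = (e, -1, edge_len G e)" "e \<in> edges G" "tgt G e = v" "len G e \<noteq> \<infinity>"
    unfolding branches_def Vtx by auto
  then show ?thesis
  proof cases
    case s
    have "ereal r \<le> len G e" if "0 \<le> r" "r \<le> \<rho>" for r
    proof (cases "len G e = \<infinity>")
      case False
      then have "len G e = ereal (edge_len G e)" "2 * \<rho> \<le> edge_len G e"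
        using edge_len_real[OF s(2)] g s(2) unfolding small_radius_def by auto
      then show ?thesis using that g unfolding small_radius_def by auto
    qed simp
    then show ?thesis using s Vtx pt_0 by auto
  next
    case t
    have L: "len G e = ereal (edge_len G e)" "2 * \<rho> \<le> edge_len G e" "0 < \<rho>"
      using edge_len_real[OF t(2,4)] g t(2,4) unfolding small_radius_def by auto
    have "0 \<le> edge_len G e - r \<and> ereal (edge_len G e - r) \<le> len G e" if "0 \<le> r" "r \<le> \<rho>" for r
      using L that by auto
    then show ?thesis using t Vtx pt_L[OF t(2) L(1)[symmetric]] by auto
  qed
qed

lemma branch_pt_0: "x \<in> pts_fin G \<Longrightarrow> small_radius G x \<rho> \<Longrightarrow> b \<in> branches G x \<Longrightarrow> branch_pt G b 0 = x"
  using branch_props unfolding branch_pt_def by auto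

lemma branch_pt_in_pts_fin:
  "x \<in> pts_fin G \<Longrightarrow> small_radius G x \<rho> \<Longrightarrow> b \<in> branches G x \<Longrightarrow> 0 \<le> r \<Longrightarrow> r \<le> \<rho> \<Longrightarrow>
    branch_pt G b r \<in> pts_fin G"
  using branch_props pt_in_pts_fin unfolding branch_pt_def by blast

lemma Ein_in_pts_finD: "Ein e t \<in> pts_fin G \<Longrightarrow> e \<in> edges G \<and> 0 < t \<and> ereal t < len G e"
  unfolding pts_fin_def by auto

lemma Ein_lt_edge_len: "Ein e t \<in> pts_fin G \<Longrightarrow> len G e \<noteq> \<infinity> \<Longrightarrow> t < edge_len G e"
  using Ein_in_pts_finD edge_len_real by (metis less_ereal.simps(1))

lemma small_radius_pos: "small_radius G x \<rho> \<Longrightarrow> \<rho> > 0" unfolding small_radius_def by simp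

lemma small_radius_uniform: "\<exists>\<rho>0>0. \<forall>e\<in>edges G. len G e \<noteq> \<infinity> \<longrightarrow> 2 * \<rho>0 \<le> edge_len G e"
proof -
  define R where "R = insert 1 ((\<lambda>e. edge_len G e / 2) ` {e\<in>edges G. len G e \<noteq> \<infinity>})"
  have fR: "finite R" unfolding R_def using finite_edges by simp
  have pR: "\<forall>r\<in>R. r > 0" unfolding R_def using edge_len_real by auto
  define \<rho>0 where "\<rho>0 = Min R"
  have "\<rho>0 > 0" unfolding \<rho>0_def using fR pR Min_in[OF fR] R_def by auto
  moreover have "\<forall>e\<in>edges G. len G e \<noteq> \<infinity> \<longrightarrow> 2 * \<rho>0 \<le> edge_len G e"
  proof (intro ballI impI)
    fix e assume "e \<in> edges G" "len G e \<noteq> \<infinity>"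
    then have "edge_len G e / 2 \<in> R" unfolding R_def by auto
    then have "\<rho>0 \<le> edge_len G e / 2" unfolding \<rho>0_def by (rule Min_le[OF fR])
    then show "2 * \<rho>0 \<le> edge_len G e" by simp
  qed
  ultimately show ?thesis by blast
qed

lemma small_radius_mono: assumes "small_radius G x \<rho>" "0 < \<rho>'" "\<rho>' \<le> \<rho>" shows "small_radius G x \<rho>'"
proof -
  have "ereal (t0 + \<rho>') \<le> len G e0" if "x = Ein e0 t0" for e0 t0
  proof -
    have "ereal (t0 + \<rho>) \<le> len G e0" using assms(1) that unfolding small_radius_def by simp
    moreover have "ereal (t0 + \<rho>') \<le> ereal (t0 + \<rho>)" using assms(3) by simp
    ultimately show ?thesis by (rule order.trans[rotated])
  qed
  then show ?thesis using assms unfolding small_radius_def by auto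
qed

lemma small_radius_exists: assumes x: "x \<in> pts_fin G" shows "\<exists>\<rho>. small_radius G x \<rho>"
proof -
  obtain \<rho>0 where r0: "\<rho>0 > 0" "\<forall>e\<in>edges G. len G e \<noteq> \<infinity> \<longrightarrow> 2 * \<rho>0 \<le> edge_len G e"
    using small_radius_uniform by blast
  show ?thesis
  proof (cases x)
    case (Vtx v) then show ?thesis using r0 unfolding small_radius_def by auto
  next
    case (Ein e0 t0)
    then have e0: "e0 \<in> edges G" "0 < t0" "ereal t0 < len G e0" using Ein_in_pts_finD x by auto
    show ?thesis
    proof (cases "len G e0 = \<infinity>")
      case True
      show ?thesis using True r0 e0 Ein unfolding small_radius_def by (intro exI[of _ "min \<rho>0 t0"]) auto
    next
      case False
      have L: "len G e0 = ereal (edge_len G e0)" using edge_len_real[OF e0(1) False] by simp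
      then have tl: "t0 < edge_len G e0" using e0 by simp
      have Lle: "ereal (t0 + min \<rho>0 (min t0 (edge_len G e0 - t0))) \<le> len G e0" unfolding L by simp
      have "\<forall>e\<in>edges G. len G e \<noteq> \<infinity> \<longrightarrow> 2 * min \<rho>0 (min t0 (edge_len G e0 - t0)) \<le> edge_len G e"
      proof (intro ballI impI)
        fix e assume "e \<in> edges G" "len G e \<noteq> \<infinity>"
        then have "2 * \<rho>0 \<le> edge_len G e" using r0 by blast
        moreover have "2 * min \<rho>0 (min t0 (edge_len G e0 - t0)) \<le> 2 * \<rho>0" by simp
        ultimately show "2 * min \<rho>0 (min t0 (edge_len G e0 - t0)) \<le> edge_len G e" by linarith
      qed
      then show ?thesis using Lle r0 e0 Ein tl unfolding small_radius_def
        by (intro exI[of _ "min \<rho>0 (min t0 (edge_len G e0 - t0))"]) auto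
    qed
  qed
qed

lemma branch_pt_gchain:
  assumes "x \<in> pts_fin G" "small_radius G x \<rho>" "b \<in> branches G x" "0 \<le> r1" "r1 \<le> \<rho>" "0 \<le> r2" "r2 \<le> \<rho>"
  shows "gchain G (branch_pt G b r1) [(fst b, snd (snd b) + fst (snd b) * r1, snd (snd b) + fst (snd b) * r2)] (branch_pt G b r2)
     \<and> chain_len [(fst b, snd (snd b) + fst (snd b) * r1, snd (snd b) + fst (snd b) * r2)] = \<bar>r1 - r2\<bar>"
proof -
  have p: "fst (snd b) = 1 \<or> fst (snd b) = -1" using branch_props assms(1-3) by blast
  have "\<bar>fst (snd b) * r1 - fst (snd b) * r2\<bar> = \<bar>r1 - r2\<bar>" using p by (auto simp: abs_minus_commute)
  then show ?thesis using branch_props[OF assms(1-3)] assms(4-7) unfolding branch_pt_def by auto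
qed

lemma cone_pt:
  assumes x: "x \<in> pts_fin G" and g: "small_radius G x \<rho>" and e: "e \<in> edges G" and t: "0 \<le> t" "ereal t \<le> len G e"
  shows "cone G x \<rho> (pt G e t) = cone_on_edge G x \<rho> e t"
proof -
  have r0: "0 < \<rho>" using g unfolding small_radius_def by simp
  consider "t = 0" | "t \<noteq> 0" "ereal t = len G e" | "t \<noteq> 0" "ereal t \<noteq> len G e" by blast
  then show ?thesis
  proof cases
    case 1
    show ?thesis
    proof (cases x)
      case (Ein e0 t0)
      have "\<rho> \<le> t0" using g Ein unfolding small_radius_def by simp
      then show ?thesis using 1 Ein unfolding cone_def cone_on_edge_def pt_def by (auto simp: tent_zero)
    next
      case (Vtx v)
      show ?thesis
      proof (cases "tgt G e = v \<and> len G e \<noteq> \<infinity>")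
        case True
        then have "2 * \<rho> \<le> edge_len G e" using g e unfolding small_radius_def by auto
        then show ?thesis using 1 Vtx True r0 unfolding cone_def cone_on_edge_def pt_def
          by (auto simp: ramp_zero ramp_eq)
      next
        case False
        then show ?thesis using 1 Vtx r0 unfolding cone_def cone_on_edge_def pt_def by (auto simp: ramp_eq)
      qed
    qed
  next
    case 2
    then have "len G e = ereal t" by simp
    then have Lf: "len G e \<noteq> \<infinity>" "edge_len G e = t" unfolding edge_len_def by auto
    have L2: "2 * \<rho> \<le> edge_len G e" using g e Lf unfolding small_radius_def by auto
    show ?thesis
    proof (cases x)
      case (Ein e0 t0)
      have "ereal (t0 + \<rho>) \<le> len G e0" using g Ein unfolding small_radius_def by simp
      then have "e = e0 \<Longrightarrow> t0 + \<rho> \<le> t" using 2 by (metis ereal_less_eq(3))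
      then have "e = e0 \<Longrightarrow> \<rho> \<le> \<bar>t - t0\<bar>" by auto
      then show ?thesis using 2 Ein unfolding cone_def cone_on_edge_def pt_def by (auto simp: tent_zero)
    next
      case (Vtx v)
      show ?thesis using 2 Vtx Lf L2 r0 unfolding cone_def cone_on_edge_def pt_def
        by (auto simp: ramp_zero ramp_eq)
    qed
  next
    case 3
    then show ?thesis unfolding cone_def pt_def by simp
  qed
qed

lemma branch_coord_pt:
  assumes x: "x \<in> pts_fin G" and g: "small_radius G x \<rho>" and e: "e \<in> edges G" and t: "0 \<le> t" "ereal t \<le> len G e"
  shows "branch_coord G x \<rho> b (pt G e t) = coord_on_edge G x \<rho> b e t"
proof -
  have r0: "0 < \<rho>" using g unfolding small_radius_def by simp
  consider "t = 0" | "t \<noteq> 0" "ereal t = len G e" | "t \<noteq> 0" "ereal t \<noteq> len G e" by blast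
  then show ?thesis
  proof cases
    case 1
    show ?thesis
    proof (cases x)
      case (Ein e0 t0)
      have "\<rho> \<le> t0" using g Ein unfolding small_radius_def by simp
      then show ?thesis using 1 Ein r0 unfolding branch_coord_def coord_on_edge_def pt_def
        by (auto simp: bump_zero_left bump_zero_right)
    next
      case (Vtx v)
      show ?thesis
      proof (cases "tgt G e = v \<and> len G e \<noteq> \<infinity>")
        case True
        then have "2 * \<rho> \<le> edge_len G e" using g e unfolding small_radius_def by auto
        then show ?thesis using 1 Vtx True r0 unfolding branch_coord_def coord_on_edge_def pt_def
          by (auto simp: bump_zero_left bump_zero_right)
      next
        case False
        then show ?thesis using 1 Vtx r0 unfolding branch_coord_def coord_on_edge_def pt_def
          by (auto simp: bump_zero_left)
      qed
    qed
  next
    case 2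
    then have "len G e = ereal t" by simp
    then have Lf: "len G e \<noteq> \<infinity>" "edge_len G e = t" unfolding edge_len_def by auto
    have L2: "2 * \<rho> \<le> edge_len G e" using g e Lf unfolding small_radius_def by auto
    show ?thesis
    proof (cases x)
      case (Ein e0 t0)
      have "ereal (t0 + \<rho>) \<le> len G e0" using g Ein unfolding small_radius_def by simp
      then have "e = e0 \<Longrightarrow> t0 + \<rho> \<le> t" using 2 by (metis ereal_less_eq(3))
      then have "e = e0 \<Longrightarrow> \<rho> \<le> t - t0" by auto
      then show ?thesis using 2 Ein r0 unfolding branch_coord_def coord_on_edge_def pt_def
        by (auto simp: bump_zero_left bump_zero_right)
    next
      case (Vtx v)
      show ?thesis using 2 Vtx Lf L2 r0 unfolding branch_coord_def coord_on_edge_def pt_def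
        by (auto simp: bump_zero_left bump_zero_right)
    qed
  next
    case 3
    then show ?thesis unfolding branch_coord_def pt_def by simp
  qed
qed

lemma cone_on_edge_lipschitz:
  assumes g: "small_radius G x \<rho>" and e: "e \<in> edges G"
  shows "\<bar>cone_on_edge G x \<rho> e a - cone_on_edge G x \<rho> e b\<bar> \<le> \<bar>a - b\<bar>"
proof (cases x)
  case (Ein e0 t0)
  then show ?thesis unfolding cone_on_edge_def using tent_lipschitz[of \<rho> "a - t0" "b - t0"] by auto
next
  case (Vtx v)
  show ?thesis
  proof (cases "tgt G e = v \<and> len G e \<noteq> \<infinity>")
    case True
    then have L2: "2 * \<rho> \<le> edge_len G e" using g e unfolding small_radius_def by auto
    define f where "f = (\<lambda>t. if src G e = v then ramp \<rho> t else 0)"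
    define h where "h = (\<lambda>t. ramp \<rho> (edge_len G e - t))"
    have "\<bar>(f a + h a) - (f b + h b)\<bar> \<le> \<bar>a - b\<bar>"
    proof (rule lipschitz_glue[where m = "edge_len G e / 2"])
      show "\<bar>f a - f b\<bar> \<le> \<bar>a - b\<bar>" for a b unfolding f_def using ramp_lipschitz by auto
      show "\<bar>h a - h b\<bar> \<le> \<bar>a - b\<bar>" for a b unfolding h_def
        using ramp_lipschitz[of \<rho> "edge_len G e - a" "edge_len G e - b"] by simp
      show "f t = 0" if "edge_len G e / 2 \<le> t" for t unfolding f_def using that L2 by (auto intro!: ramp_zero)
      show "h t = 0" if "t \<le> edge_len G e / 2" for t unfolding h_def using that L2 by (auto intro!: ramp_zero)
    qed
    then show ?thesis using True Vtx unfolding cone_on_edge_def f_def h_def by simp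
  next
    case False
    then show ?thesis using Vtx unfolding cone_on_edge_def using ramp_lipschitz[of \<rho> a b] by auto
  qed
qed

lemma bump_diff_lipschitz: "\<bar>(bump \<rho> (a - t0) + - bump \<rho> (t0 - a)) - (bump \<rho> (b - t0) + - bump \<rho> (t0 - b))\<bar> \<le> \<bar>a - b\<bar>"
proof (rule lipschitz_glue[where m = t0 and f = "\<lambda>t. - bump \<rho> (t0 - t)" and g = "\<lambda>t. bump \<rho> (t - t0)", simplified add.commute])
  show "\<bar>- bump \<rho> (t0 - a) - - bump \<rho> (t0 - b)\<bar> \<le> \<bar>a - b\<bar>" for a b
    using bump_lipschitz[of \<rho> "t0 - a" "t0 - b"] by (simp add: abs_minus_commute)
  show "\<bar>bump \<rho> (a - t0) - bump \<rho> (b - t0)\<bar> \<le> \<bar>a - b\<bar>" for a b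
    using bump_lipschitz[of \<rho> "a - t0" "b - t0"] by simp
  show "- bump \<rho> (t0 - t) = 0" if "t0 \<le> t" for t using that by (simp add: bump_zero_left)
  show "bump \<rho> (t - t0) = 0" if "t \<le> t0" for t using that by (simp add: bump_zero_left)
qed

lemma coord_on_edge_lipschitz:
  assumes g: "small_radius G x \<rho>" and e: "e \<in> edges G"
  shows "\<bar>coord_on_edge G x \<rho> b e a - coord_on_edge G x \<rho> b e c\<bar> \<le> \<bar>a - c\<bar>"
proof (cases x)
  case (Ein e0 t0)
  show ?thesis using bump_diff_lipschitz[of \<rho> a t0 c] Ein unfolding coord_on_edge_def
    by (auto simp: abs_minus_commute)
next
  case (Vtx v)
  show ?thesis
  proof (cases "tgt G e = v \<and> len G e \<noteq> \<infinity>")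
    case True
    then have L2: "2 * \<rho> \<le> edge_len G e" using g e unfolding small_radius_def by auto
    define f where "f = (\<lambda>t. if src G e = v then (if b = (e, 1, 0) then bump \<rho> t else - bump \<rho> t) else 0)"
    define h where "h = (\<lambda>t. if b = (e, -1, edge_len G e) then bump \<rho> (edge_len G e - t) else - bump \<rho> (edge_len G e - t))"
    have "\<bar>(f a + h a) - (f c + h c)\<bar> \<le> \<bar>a - c\<bar>"
    proof (rule lipschitz_glue[where m = "edge_len G e / 2"])
      show "\<bar>f a - f b\<bar> \<le> \<bar>a - b\<bar>" for a b unfolding f_def using bump_lipschitz[of \<rho> a b]
        by (auto simp: abs_minus_commute)
      show "\<bar>h a - h b\<bar> \<le> \<bar>a - b\<bar>" for a b unfolding h_def
        using bump_lipschitz[of \<rho> "edge_len G e - a" "edge_len G e - b"]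
        by (auto simp: abs_minus_commute)
      show "f t = 0" if "edge_len G e / 2 \<le> t" for t unfolding f_def using that L2
        by (auto simp: bump_zero_right)
      show "h t = 0" if "t \<le> edge_len G e / 2" for t unfolding h_def using that L2
        by (auto simp: bump_zero_right)
    qed
    then show ?thesis using True Vtx unfolding coord_on_edge_def f_def h_def by simp
  next
    case False
    then show ?thesis using Vtx unfolding coord_on_edge_def using bump_lipschitz[of \<rho> a c]
      by (auto simp: abs_minus_commute)
  qed
qed

lemma cone_edge_lipschitz: assumes "x \<in> pts_fin G" "small_radius G x \<rho>" shows "edge_lipschitz G (cone G x \<rho>) 1"
  unfolding edge_lipschitz_def using cone_pt[OF assms] cone_on_edge_lipschitz[OF assms(2)] by simp

lemma branch_coord_edge_lipschitz:
  assumes "x \<in> pts_fin G" "small_radius G x \<rho>" shows "edge_lipschitz G (branch_coord G x \<rho> b) 1"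
  unfolding edge_lipschitz_def using branch_coord_pt[OF assms] coord_on_edge_lipschitz[OF assms(2)] by simp

lemma pw_affine_int_line_cone_on_edge: assumes "small_radius G x \<rho>" shows "pw_affine_int_line (cone_on_edge G x \<rho> e)"
proof -
  have r0: "\<rho> > 0" using assms unfolding small_radius_def by simp
  show ?thesis
  proof (cases x)
    case (Ein e0 t0)
    have "pw_affine_int_line (\<lambda>t. tent \<rho> (t - t0))"
      by (rule pw_affine_int_line_shift[OF pw_affine_int_line_tent[OF r0]])
    then have "pw_affine_int_line (\<lambda>t. if e = e0 then tent \<rho> (t - t0) else 0)"
      by (intro pw_affine_int_line_if pw_affine_int_line_const)
    then show ?thesis unfolding cone_on_edge_def Ein by simp
  next
    case (Vtx v)
    have "pw_affine_int_line (\<lambda>t. (if src G e = v then ramp \<rho> t else 0) +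
               (if tgt G e = v \<and> len G e \<noteq> \<infinity> then ramp \<rho> (edge_len G e - t) else 0))"
      by (intro pw_affine_int_line_add pw_affine_int_line_if pw_affine_int_line_const
          pw_affine_int_line_reflect[OF pw_affine_int_line_ramp] pw_affine_int_line_ramp)
    then show ?thesis unfolding cone_on_edge_def Vtx by simp
  qed
qed

lemma pw_affine_int_line_coord_on_edge: assumes "small_radius G x \<rho>" shows "pw_affine_int_line (coord_on_edge G x \<rho> b e)"
proof -
  have r0: "\<rho> > 0" using assms unfolding small_radius_def by simp
  have hs: "pw_affine_int_line (\<lambda>t. bump \<rho> (t - c))" for c
    by (rule pw_affine_int_line_shift[OF pw_affine_int_line_bump[OF r0]])
  have hr: "pw_affine_int_line (\<lambda>t. bump \<rho> (c - t))" for c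
    by (rule pw_affine_int_line_reflect[OF pw_affine_int_line_bump[OF r0]])
  show ?thesis
  proof (cases x)
    case (Ein e0 t0)
    have "pw_affine_int_line (\<lambda>t. if e = e0 then (if 0 < fst (snd b) then bump \<rho> (t - t0) + - bump \<rho> (t0 - t)
                        else - (bump \<rho> (t - t0) + - bump \<rho> (t0 - t))) else 0)"
      by (intro pw_affine_int_line_if pw_affine_int_line_add pw_affine_int_line_uminus hs hr pw_affine_int_line_const)
    then show ?thesis unfolding coord_on_edge_def Ein by simp
  next
    case (Vtx v)
    have h0: "pw_affine_int_line (bump \<rho>)" by (rule pw_affine_int_line_bump[OF r0])
    have "pw_affine_int_line (\<lambda>t. (if src G e = v then (if b = (e, 1, 0) then bump \<rho> t else - bump \<rho> t) else 0) +
               (if tgt G e = v \<and> len G e \<noteq> \<infinity> then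
                   (if b = (e, -1, edge_len G e) then bump \<rho> (edge_len G e - t) else - bump \<rho> (edge_len G e - t)) else 0))"
      by (intro pw_affine_int_line_add pw_affine_int_line_if pw_affine_int_line_uminus hr pw_affine_int_line_const h0)
    then show ?thesis unfolding coord_on_edge_def Vtx by simp
  qed
qed

lemma cone_rat: assumes "x \<in> pts_fin G" "small_radius G x \<rho>" shows "rat_real_fun G (cone G x \<rho>)"
  unfolding rat_real_fun_def
proof
  fix e assume e: "e \<in> edges G"
  have "pw_affine_int (cone_on_edge G x \<rho> e) (len G e)"
    using pw_affine_int_line_imp_pw_affine_int[OF pw_affine_int_line_cone_on_edge[OF assms(2)]] edge_ends_len[OF e] by blast
  then show "pw_affine_int (\<lambda>t. cone G x \<rho> (pt G e t)) (len G e)"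
    by (rule pw_affine_int_cong) (use edge_ends_len[OF e] cone_pt[OF assms e] in auto)
qed

lemma branch_coord_rat: assumes "x \<in> pts_fin G" "small_radius G x \<rho>" shows "rat_real_fun G (branch_coord G x \<rho> b)"
  unfolding rat_real_fun_def
proof
  fix e assume e: "e \<in> edges G"
  have "pw_affine_int (coord_on_edge G x \<rho> b e) (len G e)"
    using pw_affine_int_line_imp_pw_affine_int[OF pw_affine_int_line_coord_on_edge[OF assms(2)]] edge_ends_len[OF e] by blast
  then show "pw_affine_int (\<lambda>t. branch_coord G x \<rho> b (pt G e t)) (len G e)"
    by (rule pw_affine_int_cong) (use edge_ends_len[OF e] branch_coord_pt[OF assms e] in auto)
qed

lemma branch_pt_gchain_ex:
  assumes "x \<in> pts_fin G" "small_radius G x \<rho>" "b \<in> branches G x" "0 \<le> r1" "r1 \<le> \<rho>" "0 \<le> r2" "r2 \<le> \<rho>"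
  shows "\<exists>cs. gchain G (branch_pt G b r1) cs (branch_pt G b r2) \<and> chain_len cs = \<bar>r1 - r2\<bar>"
  using branch_pt_gchain[OF assms] by blast

lemma cone_center: assumes "x \<in> pts_fin G" "small_radius G x \<rho>" shows "cone G x \<rho> x = \<rho>"
proof (cases x)
  case (Ein e0 t0) then show ?thesis using small_radius_pos[OF assms(2)]
    unfolding cone_def cone_on_edge_def tent_def by simp
qed (simp add: cone_def)

lemma cone_pos_near_edge_point:
  assumes x: "x = Ein e0 t0" and et: "0 < t" "ereal t < len G e" and pos: "cone G x \<rho> (Ein e t) > 0"
  shows "Ein e t = x \<or>
    (\<exists>b\<in>branches G x. \<exists>r. 0 < r \<and> r < \<rho> \<and> Ein e t = branch_pt G b r \<and> cone G x \<rho> (Ein e t) = \<rho> - r)"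
proof -
  have val: "cone G x \<rho> (Ein e t) = (if e = e0 then tent \<rho> (t - t0) else 0)"
    unfolding cone_def cone_on_edge_def x by simp
  then have e: "e = e0" "\<bar>t - t0\<bar> < \<rho>" using pos unfolding tent_def by (auto split: if_splits)
  have pt: "pt G e t = Ein e t" using pt_Ein[OF et] .
  consider "t = t0" | "t > t0" | "t < t0" by linarith
  then show ?thesis
  proof cases
    case 2
    have "(e0, 1, t0) \<in> branches G x" "Ein e t = branch_pt G (e0, 1, t0) (t - t0)"
      unfolding branches_def branch_pt_def x using pt e by simp_all
    then show ?thesis using 2 e val tent_eq[of "t - t0" \<rho>] by (intro disjI2 bexI exI[of _ "t - t0"]) auto
  next
    case 3
    have "(e0, -1, t0) \<in> branches G x" "Ein e t = branch_pt G (e0, -1, t0) (t0 - t)"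
      unfolding branches_def branch_pt_def x using pt e by simp_all
    then show ?thesis using 3 e val tent_eq[of "t - t0" \<rho>] by (intro disjI2 bexI exI[of _ "t0 - t"]) auto
  qed (use x e in simp)
qed

lemma cone_pos_near_vertex:
  assumes x: "x = Vtx v" and g: "small_radius G x \<rho>" and w: "Ein e t \<in> pts_fin G"
    and pos: "cone G x \<rho> (Ein e t) > 0"
  shows "\<exists>b\<in>branches G x. \<exists>r. 0 < r \<and> r < \<rho> \<and> Ein e t = branch_pt G b r \<and> cone G x \<rho> (Ein e t) = \<rho> - r"
proof -
  have et: "e \<in> edges G" "0 < t" "ereal t < len G e" using Ein_in_pts_finD w by auto
  have pt: "pt G e t = Ein e t" using pt_Ein[OF et(2,3)] .
  have val: "cone G x \<rho> (Ein e t) = (if src G e = v then ramp \<rho> t else 0) +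
      (if tgt G e = v \<and> len G e \<noteq> \<infinity> then ramp \<rho> (edge_len G e - t) else 0)"
    unfolding cone_def cone_on_edge_def x by simp
  show ?thesis
  proof (cases "src G e = v \<and> t < \<rho>")
    case True
    have "2 * \<rho> \<le> edge_len G e" if "len G e \<noteq> \<infinity>" using g et that unfolding small_radius_def by auto
    then have "tgt G e = v \<and> len G e \<noteq> \<infinity> \<Longrightarrow> ramp \<rho> (edge_len G e - t) = 0"
      using True by (intro ramp_zero) auto
    moreover have "(e, 1, 0) \<in> branches G x" "Ein e t = branch_pt G (e, 1, 0) t"
      unfolding branches_def branch_pt_def x using True et pt by simp_all
    ultimately show ?thesis using True val et by (intro bexI exI[of _ t]) (auto simp: ramp_eq)
  next
    case False
    then have c: "tgt G e = v" "len G e \<noteq> \<infinity>" and "ramp \<rho> (edge_len G e - t) > 0"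
      using pos val by (auto simp: ramp_zero split: if_splits)
    then have lt: "edge_len G e - t < \<rho>" unfolding ramp_def by (auto simp: max_def split: if_splits)
    have "t < edge_len G e" using Ein_lt_edge_len w c by simp
    moreover have "(e, -1, edge_len G e) \<in> branches G x"
      "Ein e t = branch_pt G (e, -1, edge_len G e) (edge_len G e - t)"
      unfolding branches_def branch_pt_def x using c et pt by simp_all
    ultimately show ?thesis using val False c lt ramp_eq[of "edge_len G e - t" \<rho>]
      by (intro bexI exI[of _ "edge_len G e - t"]) (auto simp: ramp_zero)
  qed
qed

lemma cone_pos_imp_branch_pt:
  assumes x: "x \<in> pts_fin G" and g: "small_radius G x \<rho>" and w: "w \<in> pts_fin G" and pos: "cone G x \<rho> w > 0"
  shows "w = x \<or> (\<exists>b\<in>branches G x. \<exists>r. 0 < r \<and> r < \<rho> \<and> w = branch_pt G b r \<and> cone G x \<rho> w = \<rho> - r)"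
proof (cases w)
  case (Vtx u)
  then show ?thesis using pos unfolding cone_def by (auto split: if_splits)
next
  case (Ein e t)
  then have "0 < t" "ereal t < len G e" using Ein_in_pts_finD w by auto
  then show ?thesis
    using cone_pos_near_edge_point[of x _ _ t e] cone_pos_near_vertex[OF _ g] w pos Ein by (cases x) auto
qed

lemma cone_branch_pt:
  assumes x: "x \<in> pts_fin G" and g: "small_radius G x \<rho>" and b: "b \<in> branches G x" and r: "0 \<le> r" "r \<le> \<rho>"
  shows "cone G x \<rho> (branch_pt G b r) = \<rho> - r"
proof -
  have bp: "fst b \<in> edges G" "0 \<le> snd (snd b) + fst (snd b) * r" "ereal (snd (snd b) + fst (snd b) * r) \<le> len G (fst b)"
    using branch_props[OF x g b] r by auto
  have eq: "cone G x \<rho> (branch_pt G b r) = cone_on_edge G x \<rho> (fst b) (snd (snd b) + fst (snd b) * r)"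
    unfolding branch_pt_def using cone_pt[OF x g bp] .
  show ?thesis
  proof (cases x)
    case (Ein e0 t0)
    then have "b = (e0, 1, t0) \<or> b = (e0, -1, t0)" using b unfolding branches_def by simp
    then show ?thesis using eq Ein r by (auto simp: cone_on_edge_def tent_eq)
  next
    case (Vtx v)
    from b consider (s) e where "b = (e, 1, 0)" "e \<in> edges G" "src G e = v"
      | (t) e where "b = (e, -1, edge_len G e)" "e \<in> edges G" "tgt G e = v" "len G e \<noteq> \<infinity>"
      unfolding branches_def Vtx by auto
    then show ?thesis
    proof cases
      case s
      have "tgt G e = v \<and> len G e \<noteq> \<infinity> \<Longrightarrow> ramp \<rho> (edge_len G e - r) = 0"
        using g s(2) r unfolding small_radius_def by (intro ramp_zero) auto
      then show ?thesis using eq s r Vtx by (auto simp: cone_on_edge_def ramp_eq)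
    next
      case t
      have "2 * \<rho> \<le> edge_len G e" using g t unfolding small_radius_def by auto
      then have "src G e = v \<Longrightarrow> ramp \<rho> (edge_len G e - r) = 0" using r by (intro ramp_zero) auto
      then show ?thesis using eq t r Vtx by (auto simp: cone_on_edge_def ramp_eq)
    qed
  qed
qed

lemma cone_eq_radius_imp_center:
  assumes x: "x \<in> pts_fin G" and g: "small_radius G x \<rho>" and w: "w \<in> pts_fin G" and eq: "cone G x \<rho> w = \<rho>"
  shows "w = x"
proof -
  have "cone G x \<rho> w > 0" using eq small_radius_pos[OF g] by simp
  from cone_pos_imp_branch_pt[OF x g w this] show ?thesis using eq by auto
qed

lemma branch_coord_branch_pt:
  assumes x: "x \<in> pts_fin G" and g: "small_radius G x \<rho>" and b: "b \<in> branches G x" and b': "b' \<in> branches G x"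
    and r: "0 \<le> r" "2 * r \<le> \<rho>"
  shows "branch_coord G x \<rho> b (branch_pt G b' r) = (if b' = b then r else - r)"
proof -
  have r0: "\<rho> > 0" using small_radius_pos[OF g] .
  have rr: "r \<le> \<rho>" using r r0 by simp
  have bp: "fst b' \<in> edges G" "0 \<le> snd (snd b') + fst (snd b') * r" "ereal (snd (snd b') + fst (snd b') * r) \<le> len G (fst b')"
    using branch_props[OF x g b'] r rr by auto
  have eq: "branch_coord G x \<rho> b (branch_pt G b' r) = coord_on_edge G x \<rho> b (fst b') (snd (snd b') + fst (snd b') * r)"
    unfolding branch_pt_def using branch_coord_pt[OF x g bp] .
  have hr: "bump \<rho> r = r" using r by (simp add: bump_eq)
  have hm: "bump \<rho> (- r) = 0" using r by (simp add: bump_zero_left)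
  show ?thesis
  proof (cases x)
    case (Ein e0 t0)
    then have "b = (e0, 1, t0) \<or> b = (e0, -1, t0)" "b' = (e0, 1, t0) \<or> b' = (e0, -1, t0)"
      using b b' unfolding branches_def by auto
    then show ?thesis using eq Ein hr hm by (auto simp: coord_on_edge_def)
  next
    case (Vtx v)
    have hL: "bump \<rho> (edge_len G e - r) = 0" if "e \<in> edges G" "len G e \<noteq> \<infinity>" for e
    proof -
      have "2 * \<rho> \<le> edge_len G e" using g that unfolding small_radius_def by auto
      then show ?thesis using r by (intro bump_zero_right) auto
    qed
    from b' consider (s) e where "b' = (e, 1, 0)" "e \<in> edges G" "src G e = v"
      | (t) e where "b' = (e, -1, edge_len G e)" "e \<in> edges G" "tgt G e = v" "len G e \<noteq> \<infinity>"
      unfolding branches_def Vtx by auto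
    then show ?thesis
    proof cases
      case s
      then show ?thesis using eq Vtx hr hL[OF s(2)] by (auto simp: coord_on_edge_def)
    next
      case t
      then show ?thesis using eq Vtx hr hL[OF t(2,4)] by (auto simp: coord_on_edge_def)
    qed
  qed
qed

lemma gdist_center_branch_pt:
  assumes x: "x \<in> pts_fin G" and g: "small_radius G x \<rho>" and b: "b \<in> branches G x" and r: "0 \<le> r" "r \<le> \<rho>"
  shows "gdist G x (branch_pt G b r) = r"
proof -
  have r0: "0 \<le> \<rho>" using small_radius_pos[OF g] by simp
  obtain cs where cs: "gchain G x cs (branch_pt G b r)" "chain_len cs = r"
    using branch_pt_gchain[OF x g b _ r0 r] branch_pt_0[OF x g b] r by fastforce
  have "gdist G x (branch_pt G b r) \<le> r" using gdist_le[OF cs(1)] cs(2) by simp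
  moreover have "\<bar>cone G x \<rho> x - cone G x \<rho> (branch_pt G b r)\<bar> \<le> gdist G x (branch_pt G b r)"
    using gdist_lipschitz[OF cone_edge_lipschitz[OF x g]] cs(1) by blast
  then have "r \<le> gdist G x (branch_pt G b r)" using cone_center[OF x g] cone_branch_pt[OF x g b r] r by simp
  ultimately show ?thesis by simp
qed

lemma gdist_small_imp_branch_pt:
  assumes x: "x \<in> pts_fin G" and g: "small_radius G x \<rho>" and w: "w \<in> pts_fin G" and d: "gdist G x w < \<rho>"
  shows "w = x \<or> (\<exists>b\<in>branches G x. \<exists>r. 0 < r \<and> r < \<rho> \<and> w = branch_pt G b r)"
proof -
  have "\<bar>cone G x \<rho> x - cone G x \<rho> w\<bar> \<le> gdist G x w"
    using gdist_lipschitz[OF cone_edge_lipschitz[OF x g] gchain_exists[OF x w]] .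
  then have "cone G x \<rho> w > 0" using cone_center[OF x g] d by simp
  then show ?thesis using cone_pos_imp_branch_pt[OF x g w] by blast
qed

lemma near_point_on_branch:
  assumes x: "x \<in> pts_fin G" and g: "small_radius G x \<rho>" and w: "w \<in> pts_fin G"
    and d: "gdist G x w < \<rho> / 2"
  shows "w = x \<or> (\<exists>b\<in>branches G x. \<exists>r. 0 \<le> r \<and> 2 * r \<le> \<rho> \<and> w = branch_pt G b r)"
proof -
  have "gdist G x w < \<rho>" using d gdist_nonneg[OF gchain_exists[OF x w]] by linarith
  from gdist_small_imp_branch_pt[OF x g w this] show ?thesis
  proof (elim disjE bexE exE conjE)
    fix b r assume b: "b \<in> branches G x" "0 < r" "r < \<rho>" "w = branch_pt G b r"
    then have "gdist G x w = r" using gdist_center_branch_pt[OF x g b(1)] by simp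
    then have "0 \<le> r \<and> 2 * r \<le> \<rho> \<and> w = branch_pt G b r" using b d by simp
    then show ?thesis using b(1) by blast
  qed simp
qed

lemma gdist_branch_pts:
  assumes x: "x \<in> pts_fin G" and g: "small_radius G x \<rho>" and b1: "b1 \<in> branches G x" and b2: "b2 \<in> branches G x"
    and r1: "0 \<le> r1" "2 * r1 \<le> \<rho>" and r2: "0 \<le> r2" "2 * r2 \<le> \<rho>"
  shows "gdist G (branch_pt G b1 r1) (branch_pt G b2 r2) = (if b1 = b2 then \<bar>r1 - r2\<bar> else r1 + r2)"
proof -
  have r0: "0 < \<rho>" using small_radius_pos[OF g] .
  have r1': "r1 \<le> \<rho>" and r2': "r2 \<le> \<rho>" using r1 r2 r0 by auto
  obtain cs where cs: "gchain G (branch_pt G b1 r1) cs (branch_pt G b2 r2)"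
    "chain_len cs = (if b1 = b2 then \<bar>r1 - r2\<bar> else r1 + r2)"
  proof (cases "b1 = b2")
    case True
    define cl where "cl = [(fst b1, snd (snd b1) + fst (snd b1) * r1, snd (snd b1) + fst (snd b1) * r2)]"
    note bc = branch_pt_gchain[OF x g b1 r1(1) r1' r2(1) r2', folded cl_def]
    show ?thesis
    proof (rule that)
      show "gchain G (branch_pt G b1 r1) cl (branch_pt G b2 r2)" using bc True by simp
      show "chain_len cl = (if b1 = b2 then \<bar>r1 - r2\<bar> else r1 + r2)" using bc True by simp
    qed
  next
    case False
    obtain c1 where c1: "gchain G (branch_pt G b1 r1) c1 (branch_pt G b1 0)" "chain_len c1 = r1"
      using branch_pt_gchain_ex[OF x g b1 r1(1) r1' order.refl less_imp_le[OF r0]] r1 by auto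
    obtain c2 where c2: "gchain G (branch_pt G b2 0) c2 (branch_pt G b2 r2)" "chain_len c2 = r2"
      using branch_pt_gchain_ex[OF x g b2 order.refl less_imp_le[OF r0] r2(1) r2'] r2 by auto
    have "gchain G (branch_pt G b1 r1) (c1 @ c2) (branch_pt G b2 r2)"
      using gchain_append c1(1) c2(1) branch_pt_0[OF x g b1] branch_pt_0[OF x g b2] by metis
    then show ?thesis using that c1 c2 False chain_len_append by auto
  qed
  have "\<bar>branch_coord G x \<rho> b1 (branch_pt G b1 r1) - branch_coord G x \<rho> b1 (branch_pt G b2 r2)\<bar>
      \<le> gdist G (branch_pt G b1 r1) (branch_pt G b2 r2)"
    using gdist_lipschitz[OF branch_coord_edge_lipschitz[OF x g]] cs(1) by blast
  then have "(if b1 = b2 then \<bar>r1 - r2\<bar> else r1 + r2) \<le> gdist G (branch_pt G b1 r1) (branch_pt G b2 r2)"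
    using branch_coord_branch_pt[OF x g b1 b1 r1] branch_coord_branch_pt[OF x g b1 b2 r2] r1 r2
      by (auto split: if_splits)
  moreover have "gdist G (branch_pt G b1 r1) (branch_pt G b2 r2) \<le> (if b1 = b2 then \<bar>r1 - r2\<bar> else r1 + r2)"
    using gdist_le[OF cs(1)] cs(2) by simp
  ultimately show ?thesis by simp
qed

end

section \<open>The image of \<open>theta\<close> is \<open>V\<close>\<close>

context curve_coordinates
begin

text \<open>A piece of the image of \<open>theta\<close> is an affine image of a subinterval of an edge, or the
  image of a vertex, encoded as the degenerate segment with direction \<open>0\<close>.\<close>

definition image_piece :: "(real^'n) \<times> ('n \<Rightarrow> int) \<times> real \<times> ereal \<Rightarrow> bool" where
  "image_piece \<pi> \<longleftrightarrow> (\<exists>B z \<alpha> \<beta>. \<pi> = (B, z, \<alpha>, \<beta>) \<and> ((z = (\<lambda>_. 0) \<and> \<alpha> = 0 \<and> \<beta> = 0) \<or>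
     (\<exists>e\<in>edges G. \<forall>t. \<alpha> \<le> t \<and> ereal t \<le> \<beta> \<longrightarrow>
        0 \<le> t \<and> ereal t \<le> len G e \<and> theta (pt G e t) = B + t *\<^sub>R int_vec z)))"

lemma theta_edge_pieces:
  obtains PE where "\<And>e. e \<in> edges G \<Longrightarrow> finite (PE e)"
    "\<And>e t. e \<in> edges G \<Longrightarrow> 0 \<le> t \<Longrightarrow> ereal t \<le> len G e \<Longrightarrow>
       theta (pt G e t) \<in> \<Union> (lattice_segment ` PE e)"
    "\<And>e B z \<alpha> \<beta> t. e \<in> edges G \<Longrightarrow> (B, z, \<alpha>, \<beta>) \<in> PE e \<Longrightarrow> \<alpha> \<le> t \<Longrightarrow> ereal t \<le> \<beta> \<Longrightarrow>
       0 \<le> t \<and> ereal t \<le> len G e \<and> theta (pt G e t) = B + t *\<^sub>R int_vec z"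
proof -
  have "\<exists>P. finite P \<and>
      (\<forall>t. 0 \<le> t \<longrightarrow> ereal t \<le> len G e \<longrightarrow> theta (pt G e t) \<in> \<Union> (lattice_segment ` P)) \<and>
      (\<forall>B z \<alpha> \<beta> t. (B, z, \<alpha>, \<beta>) \<in> P \<longrightarrow> \<alpha> \<le> t \<longrightarrow> ereal t \<le> \<beta> \<longrightarrow>
         0 \<le> t \<and> ereal t \<le> len G e \<and> theta (pt G e t) = B + t *\<^sub>R int_vec z)"
    if e: "e \<in> edges G" for e
  proof -
    have "pw_affine_int (\<lambda>t. theta (pt G e t) $ i) (len G e)" for i
      using rat e unfolding rat_real_fun_def by simp
    moreover have "0 < len G e" using edge_ends_len[OF e] by simp
    ultimately obtain P where "finite P"
      "\<And>t. 0 \<le> t \<Longrightarrow> ereal t \<le> len G e \<Longrightarrow> theta (pt G e t) \<in> \<Union> (lattice_segment ` P)"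
      "\<And>B z \<alpha> \<beta> t. (B, z, \<alpha>, \<beta>) \<in> P \<Longrightarrow> \<alpha> \<le> t \<Longrightarrow> ereal t \<le> \<beta> \<Longrightarrow>
         0 \<le> t \<and> ereal t \<le> len G e \<and> theta (pt G e t) = B + t *\<^sub>R int_vec z"
      by (rule vec_pw_affine_int_pieces) blast
    then show ?thesis by blast
  qed
  then obtain PE where "\<forall>e\<in>edges G. finite (PE e) \<and>
      (\<forall>t. 0 \<le> t \<longrightarrow> ereal t \<le> len G e \<longrightarrow> theta (pt G e t) \<in> \<Union> (lattice_segment ` PE e)) \<and>
      (\<forall>B z \<alpha> \<beta> t. (B, z, \<alpha>, \<beta>) \<in> PE e \<longrightarrow> \<alpha> \<le> t \<longrightarrow> ereal t \<le> \<beta> \<longrightarrow>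
         0 \<le> t \<and> ereal t \<le> len G e \<and> theta (pt G e t) = B + t *\<^sub>R int_vec z)"
    by (metis (no_types) bchoice)
  then show ?thesis by (intro that[of PE]) blast+
qed

lemma edge_piece_in_image:
  assumes e: "e \<in> edges G"
    and aff: "\<And>t. \<alpha> \<le> t \<Longrightarrow> ereal t \<le> \<beta> \<Longrightarrow>
      0 \<le> t \<and> ereal t \<le> len G e \<and> theta (pt G e t) = B + t *\<^sub>R int_vec z"
  shows "lattice_segment (B, z, \<alpha>, \<beta>) \<subseteq> theta ` pts_fin G" "image_piece (B, z, \<alpha>, \<beta>)"
proof
  fix q assume "q \<in> lattice_segment (B, z, \<alpha>, \<beta>)"
  then obtain t where "q = B + t *\<^sub>R int_vec z" "\<alpha> \<le> t" "ereal t \<le> \<beta>"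
    unfolding lattice_segment_def by blast
  then show "q \<in> theta ` pts_fin G" using aff pt_in_pts_fin[OF e] by (metis image_eqI)
next
  show "image_piece (B, z, \<alpha>, \<beta>)" unfolding image_piece_def using e aff by blast
qed

lemma vertex_piece_in_image:
  assumes "v \<in> verts G - inf_verts G"
  shows "lattice_segment (theta (Vtx v), \<lambda>_. 0, 0, 0) = {theta (Vtx v)}"
    "theta (Vtx v) \<in> theta ` pts_fin G" "image_piece (theta (Vtx v), \<lambda>_. 0, 0, 0)"
  using assms unfolding lattice_segment_def pts_fin_def image_piece_def by auto

lemma image_lattice_segment_cover:
  obtains P where "finite P" "theta ` pts_fin G \<subseteq> \<Union> (lattice_segment ` P)"
    "\<And>\<pi>. \<pi> \<in> P \<Longrightarrow> lattice_segment \<pi> \<subseteq> theta ` pts_fin G" "\<And>\<pi>. \<pi> \<in> P \<Longrightarrow> image_piece \<pi>"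
proof -
  obtain PE where PE: "\<And>e. e \<in> edges G \<Longrightarrow> finite (PE e)"
    "\<And>e t. e \<in> edges G \<Longrightarrow> 0 \<le> t \<Longrightarrow> ereal t \<le> len G e \<Longrightarrow>
       theta (pt G e t) \<in> \<Union> (lattice_segment ` PE e)"
    "\<And>e B z \<alpha> \<beta> t. e \<in> edges G \<Longrightarrow> (B, z, \<alpha>, \<beta>) \<in> PE e \<Longrightarrow> \<alpha> \<le> t \<Longrightarrow> ereal t \<le> \<beta> \<Longrightarrow>
       0 \<le> t \<and> ereal t \<le> len G e \<and> theta (pt G e t) = B + t *\<^sub>R int_vec z"
    by (rule theta_edge_pieces) blast
  define P where "P = (\<Union>e\<in>edges G. PE e) \<union> (\<lambda>v. (theta (Vtx v), \<lambda>_. 0, 0, 0)) ` (verts G - inf_verts G)"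
  have "finite P" unfolding P_def using PE(1) finite_edges finite_verts by auto
  moreover have "theta w \<in> \<Union> (lattice_segment ` P)" if "w \<in> pts_fin G" for w
  proof -
    from that consider (vertex) v where "v \<in> verts G - inf_verts G" "w = Vtx v"
      | (edge) e t where "e \<in> edges G" "0 < t" "ereal t < len G e" "w = Ein e t"
      unfolding pts_fin_def by blast
    then show ?thesis
    proof cases
      case vertex
      then show ?thesis using vertex_piece_in_image(1) unfolding P_def by blast
    next
      case edge
      then have "theta w \<in> \<Union> (lattice_segment ` PE e)" using PE(2)[of e t] pt_Ein[of t e] by simp
      then show ?thesis using edge(1) unfolding P_def by blast
    qed
  qed
  moreover have "lattice_segment \<pi> \<subseteq> theta ` pts_fin G \<and> image_piece \<pi>" if "\<pi> \<in> P" for \<pi>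
  proof -
    obtain B z \<alpha> \<beta> where \<pi>: "\<pi> = (B, z, \<alpha>, \<beta>)" by (cases \<pi>)
    from that consider (edge) e where "e \<in> edges G" "\<pi> \<in> PE e"
      | (vertex) v where "v \<in> verts G - inf_verts G" "\<pi> = (theta (Vtx v), \<lambda>_. 0, 0, 0)"
      unfolding P_def by blast
    then show ?thesis
    proof cases
      case edge
      then show ?thesis
        using edge_piece_in_image[OF edge(1) PE(3)[OF edge(1) edge(2)[unfolded \<pi>]]] \<pi> by blast
    next
      case vertex
      then show ?thesis using vertex_piece_in_image by auto
    qed
  qed
  ultimately show ?thesis using that by blast
qed

lemma off_image_separated:
  assumes y: "y \<notin> theta ` pts_fin G"
  obtains f g where "(f, g) \<in> kerpsi G psi" "f y \<noteq> g y"
proof -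
  obtain P where P: "finite P" "theta ` pts_fin G \<subseteq> \<Union> (lattice_segment ` P)"
    "\<And>\<pi>. \<pi> \<in> P \<Longrightarrow> lattice_segment \<pi> \<subseteq> theta ` pts_fin G"
    by (rule image_lattice_segment_cover) blast
  have "\<forall>\<pi>\<in>P. \<exists>wc. (\<forall>q\<in>lattice_segment \<pi>. int_dot (fst wc) q + snd wc < 0) \<and> int_dot (fst wc) y + snd wc > 0"
  proof
    fix \<pi> assume "\<pi> \<in> P"
    obtain B z \<alpha> \<beta> where \<pi>: "\<pi> = (B, z, \<alpha>, \<beta>)" by (cases \<pi>)
    have "y \<notin> lattice_segment (B, z, \<alpha>, \<beta>)" using y P(3)[OF \<open>\<pi> \<in> P\<close>] unfolding \<pi> by blast
    from lattice_segment_separation[OF this] obtain w c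
      where "\<forall>q\<in>lattice_segment \<pi>. int_dot w q + c < 0" "int_dot w y + c > 0" unfolding \<pi> by blast
    then show "\<exists>wc. (\<forall>q\<in>lattice_segment \<pi>. int_dot (fst wc) q + snd wc < 0) \<and> int_dot (fst wc) y + snd wc > 0"
      by (intro exI[of _ "(w, c)"]) simp
  qed
  then obtain H where H: "\<forall>\<pi>\<in>P. (\<forall>q\<in>lattice_segment \<pi>. int_dot (fst (H \<pi>)) q + snd (H \<pi>) < 0) \<and>
      int_dot (fst (H \<pi>)) y + snd (H \<pi>) > 0"
    by (rule bchoice[THEN exE]) blast
  define W where "W \<pi> = fst (H \<pi>)" for \<pi>
  define C where "C \<pi> = snd (H \<pi>)" for \<pi>
  have sep: "\<And>\<pi>. \<pi> \<in> P \<Longrightarrow> (\<forall>q\<in>lattice_segment \<pi>. int_dot (W \<pi>) q + C \<pi> < 0)"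
    "\<And>\<pi>. \<pi> \<in> P \<Longrightarrow> int_dot (W \<pi>) y + C \<pi> > 0"
    using H unfolding W_def C_def by blast+
  have "P \<noteq> {}" using pts_fin_ne P(2) by blast
  then obtain f where f: "f \<in> TRat" "\<And>x. f x = ereal (max 0 (Min ((\<lambda>\<pi>. int_dot (W \<pi>) x + C \<pi>) ` P)))"
    using TRat_max_zero_Min_int_affine[OF P(1)] by blast
  have "f (theta w) = ereal 0" if "w \<in> pts_fin G" for w
  proof -
    have "theta w \<in> \<Union> (lattice_segment ` P)" using P(2) that by (rule subsetD[OF _ imageI])
    then obtain \<pi> where \<pi>: "\<pi> \<in> P" "theta w \<in> lattice_segment \<pi>" by (rule UN_E) (auto simp del: UN_iff)
    have "Min ((\<lambda>\<pi>. int_dot (W \<pi>) (theta w) + C \<pi>) ` P) \<le> int_dot (W \<pi>) (theta w) + C \<pi>"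
      using P(1) \<pi>(1) by (intro Min_le) auto
    moreover have "int_dot (W \<pi>) (theta w) + C \<pi> < 0" using sep(1)[OF \<pi>(1)] \<pi>(2) by (rule bspec)
    ultimately show ?thesis using f(2)[of "theta w"] by (simp add: max_def)
  qed
  moreover have "f y \<noteq> ereal 0"
  proof -
    have "0 < Min ((\<lambda>\<pi>. int_dot (W \<pi>) y + C \<pi>) ` P)"
      using sep(2) P(1) \<open>P \<noteq> {}\<close> by (subst Min_gr_iff) auto
    then show ?thesis using f(2)[of y] by (simp add: max_def)
  qed
  moreover have "(\<lambda>_. ereal 0) \<in> TRat" using tpoly_TRat[of "{(\<lambda>_. 0, 0)}"] by (simp add: tpoly_zero)
  ultimately show ?thesis
    using that[of f "\<lambda>_. ereal 0"] f(1) psi_eq_comp_theta[OF f(1)] psi_const[of "ereal 0"]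
    unfolding kerpsi_def by simp
qed

lemma Vcong_kerpsi_subset_image: "Vcong (kerpsi G psi) \<subseteq> theta ` pts_fin G"
proof
  fix y assume y: "y \<in> Vcong (kerpsi G psi)"
  show "y \<in> theta ` pts_fin G"
  proof (rule ccontr)
    assume "y \<notin> theta ` pts_fin G"
    then obtain f g where "(f, g) \<in> kerpsi G psi" "f y \<noteq> g y" by (rule off_image_separated)
    then show False using y unfolding Vcong_def by auto
  qed
qed

end

section \<open>The case of a surjective \<open>psi\<close>\<close>

context curve_coordinates
begin

lemma rat_real_fun_factors_theta:
  assumes surj: "hom_surj G psi" and g: "rat_real_fun G g"
  shows "\<exists>f\<in>TRat. \<forall>w\<in>pts_fin G. f (theta w) = ereal (g w)"
proof -
  have "(\<lambda>w. ereal (g w)) \<in> RatG G" unfolding RatG_def using g by blast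
  then have "\<exists>f\<in>TRat. \<forall>w\<in>pts_fin G. psi f w = (\<lambda>w. ereal (g w)) w"
    by (rule bspec[OF surj[unfolded hom_surj_def]])
  then obtain f where f: "f \<in> TRat" "\<forall>w\<in>pts_fin G. psi f w = ereal (g w)" by auto
  then show ?thesis using psi_eq_comp_theta by auto
qed

lemma inj_on_theta:
  assumes surj: "hom_surj G psi"
  shows "inj_on theta (pts_fin G)"
proof
  fix x y assume x: "x \<in> pts_fin G" and y: "y \<in> pts_fin G" and eq: "theta x = theta y"
  obtain \<rho> where g: "small_radius G x \<rho>" using small_radius_exists[OF x] by blast
  obtain f where f: "f \<in> TRat" "\<forall>w\<in>pts_fin G. f (theta w) = ereal (cone G x \<rho> w)"
    using rat_real_fun_factors_theta[OF surj cone_rat[OF x g]] by blast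
  have "ereal (cone G x \<rho> y) = ereal \<rho>" using f(2) x y eq cone_center[OF x g] by metis
  then have "cone G x \<rho> y = \<rho>" by simp
  then show "x = y" using cone_eq_radius_imp_center[OF x g y] by simp
qed

lemma edge_direction_unimodular:
  assumes surj: "hom_surj G psi" and e: "e \<in> edges G" and ab: "0 \<le> \<alpha>" "\<alpha> < \<beta>" "ereal \<beta> \<le> len G e"
    and aff: "\<forall>t\<in>{\<alpha>..\<beta>}. theta (pt G e t) = B + t *\<^sub>R int_vec z"
  shows "unimodular z"
proof -
  define tm where "tm = (\<alpha> + \<beta>) / 2"
  have tm: "\<alpha> < tm" "tm < \<beta>" unfolding tm_def using ab by auto
  have tmL: "ereal tm < len G e" using tm(2) ab(3) by (metis less_ereal.simps(1) less_le_trans)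
  define x :: "('v, 'e) tpt" where "x = Ein e tm"
  have x: "x \<in> pts_fin G" unfolding x_def pts_fin_def using e tm ab tmL by auto
  obtain \<rho>1 where g1: "small_radius G x \<rho>1" using small_radius_exists[OF x] by blast
  define \<rho> where "\<rho> = min \<rho>1 ((\<beta> - \<alpha>) / 2)"
  have g: "small_radius G x \<rho>" using small_radius_mono[OF g1] small_radius_pos[OF g1] tm unfolding \<rho>_def
    by auto
  have tma: "tm - \<alpha> = (\<beta> - \<alpha>) / 2" unfolding tm_def by (simp add: field_simps)
  have "\<rho> \<le> (\<beta> - \<alpha>) / 2" unfolding \<rho>_def by (rule min.cobounded2)
  then have r: "0 < \<rho>" "\<rho> \<le> tm - \<alpha>" using tma small_radius_pos[OF g1] tm unfolding \<rho>_def by auto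
  obtain f where f: "f \<in> TRat" "\<forall>w\<in>pts_fin G. f (theta w) = ereal (cone G x \<rho> w)"
    using rat_real_fun_factors_theta[OF surj cone_rat[OF x g]] by blast
  have b: "(e, -1, tm) \<in> branches G x" unfolding branches_def x_def by simp
  have "f (B + t *\<^sub>R int_vec z) = ereal ((\<rho> - tm) + t)" if t: "tm - \<rho> < t" "t < tm" for t
  proof -
    have w: "branch_pt G (e, -1, tm) (tm - t) = pt G e t" unfolding branch_pt_def by simp
    have "branch_pt G (e, -1, tm) (tm - t) \<in> pts_fin G" using branch_pt_in_pts_fin[OF x g b] t by simp
    moreover have "cone G x \<rho> (branch_pt G (e, -1, tm) (tm - t)) = \<rho> - (tm - t)"
      using cone_branch_pt[OF x g b] t by simp
    moreover have "theta (pt G e t) = B + t *\<^sub>R int_vec z" using aff t r tm by auto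
    ultimately have "f (B + t *\<^sub>R int_vec z) = ereal (cone G x \<rho> (pt G e t))" "cone G x \<rho> (pt G e t) = \<rho> - (tm - t)"
      using f(2) w by metis+
    then show ?thesis by (simp add: algebra_simps)
  qed
  moreover have "tm - \<rho> < tm" using r by simp
  ultimately show ?thesis using unimodular_if_TRat_unit_slope[OF f(1), of "tm - \<rho>" tm B z "\<rho> - tm"] by blast
qed

text \<open>Along a piece, a primitive segment runs at unit lattice speed with respect to the edge
  parameter, because the direction of the piece is unimodular.\<close>

lemma image_piece_lipschitz:
  assumes surj: "hom_surj G psi" and phi: "edge_lipschitz G phi 1"
    and Phi: "\<forall>w\<in>pts_fin G. Phi (theta w) = phi w"
    and piece: "image_piece (B, z, \<alpha>, \<beta>)" and y: "Gcd (range y) = 1"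
    and s: "p + s *\<^sub>R int_vec y \<in> lattice_segment (B, z, \<alpha>, \<beta>)"
    and s': "p + s' *\<^sub>R int_vec y \<in> lattice_segment (B, z, \<alpha>, \<beta>)"
  shows "\<bar>Phi (p + s *\<^sub>R int_vec y) - Phi (p + s' *\<^sub>R int_vec y)\<bar> \<le> \<bar>s - s'\<bar>"
proof (cases "s = s'")
  case False
  obtain \<tau> \<tau>' where \<tau>: "p + s *\<^sub>R int_vec y = B + \<tau> *\<^sub>R int_vec z" "\<alpha> \<le> \<tau>" "ereal \<tau> \<le> \<beta>"
    and \<tau>': "p + s' *\<^sub>R int_vec y = B + \<tau>' *\<^sub>R int_vec z" "\<alpha> \<le> \<tau>'" "ereal \<tau>' \<le> \<beta>"
    using s s' unfolding lattice_segment_def by auto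
  have diff: "(s' - s) *\<^sub>R int_vec y = (\<tau>' - \<tau>) *\<^sub>R int_vec z"
    using arg_cong2[OF \<tau>'(1) \<tau>(1), of "(-)"] by (simp add: algebra_simps)
  have "(\<tau>' - \<tau>) *\<^sub>R int_vec z \<noteq> 0" using diff False int_vec_nonzero_if_Gcd_1[OF y] by auto
  then have "\<tau> \<noteq> \<tau>'" "z \<noteq> (\<lambda>_. 0)" by (auto simp: int_vec_def vec_eq_iff)
  then obtain e where e: "e \<in> edges G" and aff: "\<And>t. \<alpha> \<le> t \<Longrightarrow> ereal t \<le> \<beta> \<Longrightarrow>
      0 \<le> t \<and> ereal t \<le> len G e \<and> theta (pt G e t) = B + t *\<^sub>R int_vec z"
    using piece unfolding image_piece_def by auto
  have between: "\<alpha> \<le> t \<and> ereal t \<le> \<beta>" if "t \<in> {min \<tau> \<tau>'..max \<tau> \<tau>'}" for t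
  proof -
    have "ereal t \<le> ereal \<tau> \<or> ereal t \<le> ereal \<tau>'" using that by (auto simp: max_def split: if_splits)
    then have "ereal t \<le> \<beta>" using \<tau>(3) \<tau>'(3) order.trans by blast
    then show ?thesis using that \<tau>(2) \<tau>'(2) by auto
  qed
  have "unimodular z"
    using edge_direction_unimodular[OF surj e, of "min \<tau> \<tau>'" "max \<tau> \<tau>'" B z] aff between \<open>\<tau> \<noteq> \<tau>'\<close>
    by (simp add: min_def max_def)
  then have "\<bar>s' - s\<bar> = \<bar>\<tau>' - \<tau>\<bar>" using parallel_primitive_unimodular[OF y _ diff] False by simp
  moreover have "Phi (p + s *\<^sub>R int_vec y) = phi (pt G e \<tau>)" "Phi (p + s' *\<^sub>R int_vec y) = phi (pt G e \<tau>')"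
    using aff[OF \<tau>(2,3)] aff[OF \<tau>'(2,3)] pt_in_pts_fin[OF e] Phi unfolding \<tau>(1) \<tau>'(1) by metis+
  moreover have "\<bar>phi (pt G e \<tau>) - phi (pt G e \<tau>')\<bar> \<le> 1 * \<bar>\<tau> - \<tau>'\<bar>"
    using phi e aff[OF \<tau>(2,3)] aff[OF \<tau>'(2,3)] unfolding edge_lipschitz_def by blast
  ultimately show ?thesis by (simp add: abs_minus_commute)
qed simp

lemma lattice_lipschitz_on_image:
  assumes surj: "hom_surj G psi" and phi: "edge_lipschitz G phi 1"
    and Phi: "\<forall>w\<in>pts_fin G. Phi (theta w) = phi w"
    and seg: "closed_segment p q \<subseteq> theta ` pts_fin G" and ld: "lat_dir (q - p) lam"
  shows "\<bar>Phi q - Phi p\<bar> \<le> lam"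
proof -
  obtain y where lam: "lam \<ge> 0" "q - p = lam *\<^sub>R int_vec y" and y: "Gcd (range y) = 1"
    using ld unfolding lat_dir_def primitive_iff_int_vec by blast
  obtain P where P: "finite P" "theta ` pts_fin G \<subseteq> \<Union> (lattice_segment ` P)"
    "\<And>\<pi>. \<pi> \<in> P \<Longrightarrow> image_piece \<pi>"
    by (rule image_lattice_segment_cover) blast
  define u where "u s = Phi (p + s *\<^sub>R int_vec y)" for s
  define I where "I \<pi> = {0..lam} \<inter> (\<lambda>s. p + s *\<^sub>R int_vec y) -` lattice_segment \<pi>" for \<pi>
  have closedI: "closed (I \<pi>)" for \<pi>
  proof -
    have "closed ((\<lambda>s. p + s *\<^sub>R int_vec y) -` lattice_segment \<pi>)"
      by (rule continuous_closed_vimage[OF closed_lattice_segment]) (intro continuous_intros)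
    then show ?thesis unfolding I_def by (intro closed_Int) auto
  qed
  have coverI: "{0..lam} \<subseteq> \<Union> (I ` P)"
  proof
    fix s assume s: "s \<in> {0..lam}"
    then have "p + s *\<^sub>R int_vec y \<in> theta ` pts_fin G" using point_on_closed_segment[OF lam(2)] seg by auto
    then obtain \<pi> where "\<pi> \<in> P" "p + s *\<^sub>R int_vec y \<in> lattice_segment \<pi>" using P(2) by blast
    then show "s \<in> \<Union> (I ` P)" unfolding I_def using s by blast
  qed
  have lipI: "\<forall>C\<in>I ` P. \<forall>s\<in>C. \<forall>s'\<in>C. \<bar>u s - u s'\<bar> \<le> 1 * \<bar>s - s'\<bar>"
  proof (intro ballI)
    fix C s s' assume "C \<in> I ` P" "s \<in> C" "s' \<in> C"
    then obtain \<pi> where \<pi>: "\<pi> \<in> P" "p + s *\<^sub>R int_vec y \<in> lattice_segment \<pi>"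
      "p + s' *\<^sub>R int_vec y \<in> lattice_segment \<pi>"
      unfolding I_def by blast
    obtain B z \<alpha> \<beta> where "\<pi> = (B, z, \<alpha>, \<beta>)" by (cases \<pi>)
    then show "\<bar>u s - u s'\<bar> \<le> 1 * \<bar>s - s'\<bar>"
      using image_piece_lipschitz[OF surj phi Phi _ y] P(3)[OF \<pi>(1)] \<pi>(2,3) unfolding u_def by simp
  qed
  have "\<bar>u lam - u 0\<bar> \<le> 1 * (lam - 0)"
    by (rule lipschitz_on_closed_cover[OF _ _ lipI]) (use P(1) closedI coverI lam(1) in auto)
  moreover have "u lam = Phi q" "u 0 = Phi p" unfolding u_def using lam(2) by (auto simp: algebra_simps)
  ultimately show ?thesis by simp
qed

lemma branch_image_affine:
  assumes surj: "hom_surj G psi" and x: "x \<in> pts_fin G" and g: "small_radius G x \<rho>"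
    and b: "b \<in> branches G x"
  obtains \<eta> z where "\<eta> > 0" "unimodular z"
    "\<forall>r\<in>{0..\<eta>}. theta (branch_pt G b r) = theta x + r *\<^sub>R int_vec z"
proof -
  obtain e \<sigma> tb where bb: "b = (e, \<sigma>, tb)" by (cases b) auto
  have bp: "e \<in> edges G" "\<sigma> = 1 \<or> \<sigma> = -1" "pt G e tb = x"
    "\<forall>r. 0 \<le> r \<longrightarrow> r \<le> \<rho> \<longrightarrow> 0 \<le> tb + \<sigma> * r \<and> ereal (tb + \<sigma> * r) \<le> len G e"
    using branch_props[OF x g b] bb by auto
  have r0: "\<rho> > 0" using small_radius_pos[OF g] .
  have tb: "0 \<le> tb" "ereal tb \<le> len G e" using bp(4)[rule_format, of 0] r0 by auto
  from bp(2) show ?thesis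
  proof
    assume s1: "\<sigma> = 1"
    have "ereal tb < ereal (tb + \<rho>)" using r0 by simp
    also have "\<dots> \<le> len G e" using bp(4)[rule_format, of \<rho>] s1 r0 by auto
    finally obtain \<eta> z B where \<eta>: "\<eta> > 0" "ereal (tb + \<eta>) \<le> len G e"
      "\<forall>t\<in>{tb..tb+\<eta>}. theta (pt G e t) = B + t *\<^sub>R int_vec z"
      using theta_affine_right[OF bp(1) tb(1)] by blast
    have "unimodular z" using edge_direction_unimodular[OF surj bp(1) tb(1) _ \<eta>(2,3)] \<eta>(1) by simp
    moreover have "theta (branch_pt G b r) = theta x + r *\<^sub>R int_vec z" if "r \<in> {0..\<eta>}" for r
      using \<eta>(3)[rule_format, of "tb + r"] \<eta>(3)[rule_format, of tb] that \<eta>(1) bp(3) s1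
      unfolding branch_pt_def bb by (simp add: algebra_simps)
    ultimately show ?thesis using that \<eta>(1) by blast
  next
    assume s1: "\<sigma> = -1"
    have "0 < tb" using bp(4)[rule_format, of \<rho>] s1 r0 by auto
    then obtain \<eta> z B where \<eta>: "\<eta> > 0" "\<eta> \<le> tb" "\<forall>t\<in>{tb-\<eta>..tb}. theta (pt G e t) = B + t *\<^sub>R int_vec z"
      using theta_affine_left[OF bp(1) _ tb(2)] by blast
    have "unimodular (\<lambda>i. - z i)"
      using unimodular_uminus edge_direction_unimodular[OF surj bp(1) _ _ tb(2) \<eta>(3)] \<eta>(1,2) by simp
    moreover have "theta (branch_pt G b r) = theta x + r *\<^sub>R int_vec (\<lambda>i. - z i)" if "r \<in> {0..\<eta>}" for r
      using \<eta>(3)[rule_format, of "tb - r"] \<eta>(3)[rule_format, of tb] that \<eta>(1) bp(3) s1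
      unfolding branch_pt_def bb by (simp add: algebra_simps int_vec_uminus)
    ultimately show ?thesis using that \<eta>(1) by blast
  qed
qed

lemma branch_charts:
  assumes surj: "hom_surj G psi" and x: "x \<in> pts_fin G"
  obtains \<rho> Z where "small_radius G x \<rho>" "\<And>b. b \<in> branches G x \<Longrightarrow> unimodular (Z b)"
    "\<And>b r. b \<in> branches G x \<Longrightarrow> r \<in> {0..\<rho>} \<Longrightarrow> theta (branch_pt G b r) = theta x + r *\<^sub>R int_vec (Z b)"
proof -
  obtain \<rho>1 where g1: "small_radius G x \<rho>1" using small_radius_exists[OF x] by blast
  have "\<forall>b\<in>branches G x. \<exists>\<eta>z. fst \<eta>z > 0 \<and> unimodular (snd \<eta>z) \<and>
      (\<forall>r\<in>{0..fst \<eta>z}. theta (branch_pt G b r) = theta x + r *\<^sub>R int_vec (snd \<eta>z))"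
  proof
    fix b assume "b \<in> branches G x"
    then obtain \<eta> z where "\<eta> > 0" "unimodular z"
      "\<forall>r\<in>{0..\<eta>}. theta (branch_pt G b r) = theta x + r *\<^sub>R int_vec z"
      by (rule branch_image_affine[OF surj x g1]) blast
    then show "\<exists>\<eta>z. fst \<eta>z > 0 \<and> unimodular (snd \<eta>z) \<and>
        (\<forall>r\<in>{0..fst \<eta>z}. theta (branch_pt G b r) = theta x + r *\<^sub>R int_vec (snd \<eta>z))"
      by (intro exI[of _ "(\<eta>, z)"]) simp
  qed
  then obtain H where H: "\<forall>b\<in>branches G x. fst (H b) > 0 \<and> unimodular (snd (H b)) \<and>
      (\<forall>r\<in>{0..fst (H b)}. theta (branch_pt G b r) = theta x + r *\<^sub>R int_vec (snd (H b)))"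
    by (rule bchoice[THEN exE]) blast
  define \<rho> where "\<rho> = Min (insert \<rho>1 (fst ` H ` branches G x))"
  have fin: "finite (insert \<rho>1 (fst ` H ` branches G x))" using finite_branches by simp
  have \<rho>_pos: "\<rho> > 0" unfolding \<rho>_def using fin H small_radius_pos[OF g1] by (subst Min_gr_iff) auto
  have \<rho>_le: "\<rho> \<le> fst (H b)" if "b \<in> branches G x" for b
    unfolding \<rho>_def using fin that by (auto intro: Min_le)
  have "\<rho> \<le> \<rho>1" unfolding \<rho>_def using fin by (auto intro: Min_le)
  show ?thesis
  proof (rule that[of \<rho> "\<lambda>b. snd (H b)"])
    show "small_radius G x \<rho>" using small_radius_mono[OF g1 \<rho>_pos \<open>\<rho> \<le> \<rho>1\<close>] .
    show "unimodular (snd (H b))" if "b \<in> branches G x" for b using H that by blast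
    show "theta (branch_pt G b r) = theta x + r *\<^sub>R int_vec (snd (H b))"
      if "b \<in> branches G x" "r \<in> {0..\<rho>}" for b r
      using H \<rho>_le[OF that(1)] that by auto
  qed
qed

lemma branch_segment_in_image:
  assumes x: "x \<in> pts_fin G" and g: "small_radius G x \<rho>" and b: "b \<in> branches G x"
    and aff: "\<And>r. r \<in> {0..\<rho>} \<Longrightarrow> theta (branch_pt G b r) = theta x + r *\<^sub>R int_vec z"
    and z: "unimodular z" and r: "0 \<le> r" "r \<le> \<rho>" and r': "0 \<le> r'" "r' \<le> \<rho>"
  shows "closed_segment (theta (branch_pt G b r)) (theta (branch_pt G b r')) \<subseteq> theta ` pts_fin G \<and>
         lat_dir (theta (branch_pt G b r') - theta (branch_pt G b r)) \<bar>r' - r\<bar>"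
proof
  show "closed_segment (theta (branch_pt G b r)) (theta (branch_pt G b r')) \<subseteq> theta ` pts_fin G"
  proof
    fix m assume "m \<in> closed_segment (theta (branch_pt G b r)) (theta (branch_pt G b r'))"
    then obtain \<mu> where \<mu>: "0 \<le> \<mu>" "\<mu> \<le> 1"
      "m = (1 - \<mu>) *\<^sub>R theta (branch_pt G b r) + \<mu> *\<^sub>R theta (branch_pt G b r')"
      unfolding closed_segment_def by blast
    define r'' where "r'' = (1 - \<mu>) * r + \<mu> * r'"
    have r'': "0 \<le> r''" "r'' \<le> \<rho>"
      unfolding r''_def using \<mu> r r' convex_bound_le[of r \<rho> r' "1 - \<mu>" \<mu>] by auto
    have "m = theta (branch_pt G b r'')"
      unfolding \<mu>(3) r''_def using aff r r' r'' unfolding r''_def by (simp add: algebra_simps)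
    then show "m \<in> theta ` pts_fin G" using branch_pt_in_pts_fin[OF x g b r''] by blast
  qed
  have d: "theta (branch_pt G b r') - theta (branch_pt G b r) = (r' - r) *\<^sub>R int_vec z"
    using aff r r' by (simp add: algebra_simps)
  show "lat_dir (theta (branch_pt G b r') - theta (branch_pt G b r)) \<bar>r' - r\<bar>"
  proof (cases "r \<le> r'")
    case True
    then show ?thesis unfolding lat_dir_def d using unimodular_primitive[OF z] by auto
  next
    case False
    then have "(r' - r) *\<^sub>R int_vec z = \<bar>r' - r\<bar> *\<^sub>R int_vec (\<lambda>i. - z i)"
      by (simp add: int_vec_uminus algebra_simps)
    then show ?thesis unfolding lat_dir_def d using unimodular_primitive[OF unimodular_uminus[OF z]] by auto
  qed
qed

context
  fixes x \<rho> Z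
  assumes surj: "hom_surj G psi" and x: "x \<in> pts_fin G" and g: "small_radius G x \<rho>"
    and Z: "\<And>b. b \<in> branches G x \<Longrightarrow> unimodular (Z b)"
    and chart: "\<And>b r. b \<in> branches G x \<Longrightarrow> r \<in> {0..\<rho>} \<Longrightarrow>
      theta (branch_pt G b r) = theta x + r *\<^sub>R int_vec (Z b)"
begin

lemma branch_pts_ichain:
  assumes b1: "b1 \<in> branches G x" and b2: "b2 \<in> branches G x"
    and r1: "0 \<le> r1" "r1 \<le> \<rho>" and r2: "0 \<le> r2" "r2 \<le> \<rho>"
  obtains cs where "ichain (theta ` pts_fin G) (theta (branch_pt G b1 r1)) cs (theta (branch_pt G b2 r2))"
    "sum_list (map snd cs) = (if b1 = b2 then \<bar>r1 - r2\<bar> else r1 + r2)"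
proof (cases "b1 = b2")
  case True
  have "ichain (theta ` pts_fin G) (theta (branch_pt G b1 r1)) [(theta (branch_pt G b2 r2), \<bar>r2 - r1\<bar>)]
      (theta (branch_pt G b2 r2))"
    using branch_segment_in_image[OF x g b1 chart Z r1 r2] b1 True by simp
  then show ?thesis using True
    by (intro that[of "[(theta (branch_pt G b2 r2), \<bar>r2 - r1\<bar>)]"]) (simp_all add: abs_minus_commute)
next
  case False
  have "0 \<le> \<rho>" using r1 by simp
  then have "ichain (theta ` pts_fin G) (theta (branch_pt G b1 r1))
      [(theta x, r1), (theta (branch_pt G b2 r2), r2)] (theta (branch_pt G b2 r2))"
    using branch_segment_in_image[OF x g b1 chart Z r1, of 0] branch_segment_in_image[OF x g b2 chart Z _ _ r2, of 0]
      branch_pt_0[OF x g] b1 b2 r1(1) r2(1) by simp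
  then show ?thesis using False
    by (intro that[of "[(theta x, r1), (theta (branch_pt G b2 r2), r2)]"]) simp_all
qed

text \<open>The lower bound comes from the branch coordinate of \<open>b1\<close>: it factors through \<open>theta\<close> by
  surjectivity and is \<open>1\<close>-Lipschitz for lattice length on the image.\<close>

lemma latdist_branch_pts:
  assumes b1: "b1 \<in> branches G x" and b2: "b2 \<in> branches G x"
    and r1: "0 \<le> r1" "2 * r1 \<le> \<rho>" and r2: "0 \<le> r2" "2 * r2 \<le> \<rho>"
  shows "latdist (theta ` pts_fin G) (theta (branch_pt G b1 r1)) (theta (branch_pt G b2 r2))
    = (if b1 = b2 then \<bar>r1 - r2\<bar> else r1 + r2)"
proof (rule antisym)
  have "r1 \<le> \<rho>" "r2 \<le> \<rho>" using r1 r2 by auto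
  then obtain cs where cs: "ichain (theta ` pts_fin G) (theta (branch_pt G b1 r1)) cs (theta (branch_pt G b2 r2))"
    "sum_list (map snd cs) = (if b1 = b2 then \<bar>r1 - r2\<bar> else r1 + r2)"
    by (rule branch_pts_ichain[OF b1 b2 r1(1) _ r2(1)]) blast+
  then show "latdist (theta ` pts_fin G) (theta (branch_pt G b1 r1)) (theta (branch_pt G b2 r2))
    \<le> (if b1 = b2 then \<bar>r1 - r2\<bar> else r1 + r2)"
    using latdist_le[OF cs(1)] cs(2) by simp
  obtain f where f: "f \<in> TRat" "\<forall>w\<in>pts_fin G. f (theta w) = ereal (branch_coord G x \<rho> b1 w)"
    using rat_real_fun_factors_theta[OF surj branch_coord_rat[OF x g]] by blast
  define Phi where "Phi q = real_of_ereal (f q)" for q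
  have Phi: "\<forall>w\<in>pts_fin G. Phi (theta w) = branch_coord G x \<rho> b1 w" unfolding Phi_def using f(2) by simp
  have "Phi (theta (branch_pt G b1 r1)) = r1" "Phi (theta (branch_pt G b2 r2)) = (if b2 = b1 then r2 else - r2)"
    using Phi branch_pt_in_pts_fin[OF x g] \<open>r1 \<le> \<rho>\<close> \<open>r2 \<le> \<rho>\<close> b1 b2 r1(1) r2(1)
      branch_coord_branch_pt[OF x g b1 b1 r1] branch_coord_branch_pt[OF x g b1 b2 r2] by auto
  then have d: "(if b1 = b2 then \<bar>r1 - r2\<bar> else r1 + r2)
      \<le> \<bar>Phi (theta (branch_pt G b2 r2)) - Phi (theta (branch_pt G b1 r1))\<bar>"
    using r1(1) r2(1) by (auto simp: abs_minus_commute)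
  show "(if b1 = b2 then \<bar>r1 - r2\<bar> else r1 + r2)
    \<le> latdist (theta ` pts_fin G) (theta (branch_pt G b1 r1)) (theta (branch_pt G b2 r2))"
  proof (rule latdist_ge)
    show "\<exists>cs. ichain (theta ` pts_fin G) (theta (branch_pt G b1 r1)) cs (theta (branch_pt G b2 r2))"
      using cs(1) by blast
    fix cs' assume "ichain (theta ` pts_fin G) (theta (branch_pt G b1 r1)) cs' (theta (branch_pt G b2 r2))"
    with ichain_lipschitz[OF lattice_lipschitz_on_image[OF surj branch_coord_edge_lipschitz[OF x g] Phi]]
    show "(if b1 = b2 then \<bar>r1 - r2\<bar> else r1 + r2) \<le> sum_list (map snd cs')"
      using d by (meson order.trans)
  qed
qed

end

lemma theta_local_isometry:
  assumes surj: "hom_surj G psi" and x: "x \<in> pts_fin G"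
  shows "\<exists>\<epsilon>>0. \<forall>y\<in>pts_fin G. \<forall>z\<in>pts_fin G. gdist G x y < \<epsilon> \<longrightarrow> gdist G x z < \<epsilon> \<longrightarrow>
            latdist (theta ` pts_fin G) (theta y) (theta z) = gdist G y z"
proof -
  obtain \<rho> Z where g: "small_radius G x \<rho>" and Z: "\<And>b. b \<in> branches G x \<Longrightarrow> unimodular (Z b)"
    and chart: "\<And>b r. b \<in> branches G x \<Longrightarrow> r \<in> {0..\<rho>} \<Longrightarrow>
      theta (branch_pt G b r) = theta x + r *\<^sub>R int_vec (Z b)"
    using branch_charts[OF surj x] by blast
  have near: "w = x \<or> (\<exists>b\<in>branches G x. \<exists>r. 0 \<le> r \<and> 2 * r \<le> \<rho> \<and> w = branch_pt G b r)"
    if "w \<in> pts_fin G" "gdist G x w < \<rho> / 2" for w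
    using near_point_on_branch[OF x g that] by simp
  show ?thesis
  proof (intro exI[of _ "\<rho> / 2"] conjI ballI impI)
    show "\<rho> / 2 > 0" using small_radius_pos[OF g] by simp
    fix y z assume y: "y \<in> pts_fin G" "gdist G x y < \<rho> / 2" and z: "z \<in> pts_fin G" "gdist G x z < \<rho> / 2"
    show "latdist (theta ` pts_fin G) (theta y) (theta z) = gdist G y z"
    proof (cases "branches G x = {}")
      case True
      then have "y = x" "z = x" using near[OF y] near[OF z] by auto
      then show ?thesis by (simp add: latdist_refl gdist_refl)
    next
      case False
      then obtain b0 where b0: "b0 \<in> branches G x" by blast
      have on_branch: "\<exists>b\<in>branches G x. \<exists>r. 0 \<le> r \<and> 2 * r \<le> \<rho> \<and> w = branch_pt G b r"
        if "w \<in> pts_fin G" "gdist G x w < \<rho> / 2" for w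
        using near[OF that] branch_pt_0[OF x g b0] b0 small_radius_pos[OF g] by force
      obtain b1 r1 b2 r2 where 1: "b1 \<in> branches G x" "0 \<le> r1" "2 * r1 \<le> \<rho>" "y = branch_pt G b1 r1"
        and 2: "b2 \<in> branches G x" "0 \<le> r2" "2 * r2 \<le> \<rho>" "z = branch_pt G b2 r2"
        using on_branch[OF y] on_branch[OF z] by blast
      show ?thesis
        using latdist_branch_pts[OF surj x g Z chart 1(1) 2(1) 1(2,3) 2(2,3)]
          gdist_branch_pts[OF x g 1(1) 2(1) 1(2,3) 2(2,3)] 1(4) 2(4) by simp
    qed
  qed
qed

end

theorem proposition3p12:
  fixes G :: "('v, 'e) tcurve"
    and fs :: "'n::finite \<Rightarrow> ('v, 'e) tpt \<Rightarrow> real"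
    and psi :: "(real^'n \<Rightarrow> ereal) \<Rightarrow> ('v, 'e) tpt \<Rightarrow> ereal"
    and theta :: "('v, 'e) tpt \<Rightarrow> real^'n"
    and V :: "(real^'n) set"
  assumes curve: "tropical_curve G"
    and rat: "\<forall>i. rat_real_fun G (fs i)"
    and hom: "induced_hom G fs psi"
    and theta_def: "theta = (\<lambda>x. \<chi> i. fs i x)"
    and V_def: "V = Vcong (kerpsi G psi)"
  shows "(\<forall>f \<in> TRat. \<forall>x \<in> pts_fin G. psi f x = f (theta x))
       \<and> theta ` pts_fin G \<subseteq> V
       \<and> (\<forall>x \<in> pts_fin G. \<forall>\<epsilon>>0. \<exists>\<delta>>0. \<forall>y \<in> pts_fin G. gdist G x y < \<delta> \<longrightarrow> dist (theta y) (theta x) < \<epsilon>)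
       \<and> kerpsi G psi = Econg V
       \<and> (hom_surj G psi \<longrightarrow>
            V \<subseteq> theta ` pts_fin G
          \<and> inj_on theta (pts_fin G)
          \<and> (\<forall>x \<in> pts_fin G. \<exists>\<epsilon>>0. \<forall>y \<in> pts_fin G. \<forall>z \<in> pts_fin G.
                gdist G x y < \<epsilon> \<longrightarrow> gdist G x z < \<epsilon> \<longrightarrow>
                latdist (theta ` pts_fin G) (theta y) (theta z) = gdist G y z))"
proof -
  interpret curve_coordinates G fs psi theta
    using curve rat hom theta_def by unfold_locales
  have "hom_surj G psi \<longrightarrow> V \<subseteq> theta ` pts_fin G \<and> inj_on theta (pts_fin G) \<and>
      (\<forall>x \<in> pts_fin G. \<exists>\<epsilon>>0. \<forall>y \<in> pts_fin G. \<forall>z \<in> pts_fin G.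
         gdist G x y < \<epsilon> \<longrightarrow> gdist G x z < \<epsilon> \<longrightarrow>
         latdist (theta ` pts_fin G) (theta y) (theta z) = gdist G y z)"
    using Vcong_kerpsi_subset_image inj_on_theta theta_local_isometry unfolding V_def by blast
  then show ?thesis
    using psi_eq_comp_theta theta_image_subset_Vcong theta_continuous kerpsi_eq_Econg
    unfolding V_def by blast
qed

end
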